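(* Let $A$ be an $\Omega$-magma in a braided monoidal category $\mathcal C$. Let $\mathcal D$ be a full subcategory of $\mathbf{Comeas}(A,A)$ having an initial object $\rho_0\colon A\to A\otimes B_0$, and let $\mathbf{Coact}(A)(\mathcal D)$ be the full subcategory of $\mathbf{Coact}(A)$ consisting of the coactions whose underlying comeasurings belong to $\mathcal D$. Suppose that $\mathcal D$ is closed under coarsenings, and that the canonical isomorphism $A\to A\otimes\mathbbm 1$ (a comeasuring for the monoid $\mathbbm 1$) and the comeasuring $(\rho_0\otimes\mathrm{id}_{B_0})\rho_0\colon A\to A\otimes B_0\otimes B_0$ (for the monoid $B_0\otimes B_0$) are objects of $\mathcal D$. Then the monoid $B_0$ admits a unique comonoid structure turning $\rho_0$ into a coaction, and this coaction is an initial object of $\mathbf{Coact}(A)(\mathcal D)$.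
   Context: Fix a set $\Omega$ with maps $s,t\colon\Omega\to\mathbb Z_{\ge0}$. An $\Omega$-magma is an object $A$ with morphisms $\omega_A\colon A^{\otimes s(\omega)}\to A^{\otimes t(\omega)}$, $\omega\in\Omega$ ($A^{\otimes0}=\mathbbm 1$, no axioms). For a monoid $(Q,\mu,u)$ and $\rho_i\colon A_i\to B_i\otimes Q$, $\rho_1\tilde\otimes\rho_2:=(\mathrm{id}\otimes\mu)(\mathrm{id}_{B_1}\otimes c_{Q,B_2}\otimes\mathrm{id}_Q)(\rho_1\otimes\rho_2)$, $c$ the braiding; $\rho^{\tilde\otimes n}$ by iteration, $\rho^{\tilde\otimes0}=(\mathbbm 1\xrightarrow{u}Q\cong\mathbbm 1\otimes Q)$. A comeasuring $\rho\colon A\to B\otimes Q$ ($Q$ a monoid) satisfies $(\omega_B\otimes\mathrm{id}_Q)\rho^{\tilde\otimes s(\omega)}=\rho^{\tilde\otimes t(\omega)}\omega_A$ for all $\omega$. $\mathbf{Comeas}(A,A)$: objects comeasurings $A\to A\otimes Q$, morphisms monoid homomorphisms $\varphi$ with $(\mathrm{id}_A\otimes\varphi)\rho_1=\rho_2$. $\mathcal D$ is closed under coarsenings if for every object $\rho\colon A\to A\otimes Q_1$ of $\mathcal D$ and every monoid homomorphism $\tau\colon Q_1\to Q_2$, $(\mathrm{id}_A\otimes\tau)\rho$ is in $\mathcal D$. For a bimonoid $B$ (monoid and comonoid with $\Delta,\varepsilon$ monoid homomorphisms, $B\otimes B$ a monoid via the braiding), a coaction of $B$ on $A$ is a comeasuring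 $\rho\colon A\to A\otimes B$ that also makes $A$ a right $B$-comodule. $\mathbf{Coact}(A)$: objects coactions $A\to A\otimes B$ ($B$ arbitrary bimonoid), morphisms bimonoid homomorphisms $\varphi$ with $(\mathrm{id}_A\otimes\varphi)\rho_1=\rho_2$. *)

theory Defs
  imports Main
begin

text \<open>Objects are the elements of type 'o, arrows the elements of the set arr C.
  cmp C g f is the composite g after f; tns/tnm are the tensor product on objects/arrows;
  un is the unit object; asc X Y Z : (X*Y)*Z -> X*(Y*Z); lu X : 1*X -> X;
  ru X : X*1 -> X; br X Y : X*Y -> Y*X is the braiding.\<close>

record ('o,'m) bmcat =
  arr :: "'m set"
  dm  :: "'m \<Rightarrow> 'o"
  cd  :: "'m \<Rightarrow> 'o"
  idt :: "'o \<Rightarrow> 'm"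
  cmp :: "'m \<Rightarrow> 'm \<Rightarrow> 'm"
  tns :: "'o \<Rightarrow> 'o \<Rightarrow> 'o"
  tnm :: "'m \<Rightarrow> 'm \<Rightarrow> 'm"
  un  :: "'o"
  asc :: "'o \<Rightarrow> 'o \<Rightarrow> 'o \<Rightarrow> 'm"
  lu  :: "'o \<Rightarrow> 'm"
  ru  :: "'o \<Rightarrow> 'm"
  br  :: "'o \<Rightarrow> 'o \<Rightarrow> 'm"

definition hom :: "('o,'m) bmcat \<Rightarrow> 'o \<Rightarrow> 'o \<Rightarrow> 'm set" where
  "hom C X Y = {f. f \<in> arr C \<and> dm C f = X \<and> cd C f = Y}"

definition is_iso :: "('o,'m) bmcat \<Rightarrow> 'm \<Rightarrow> bool" where
  "is_iso C f \<longleftrightarrow> f \<in> arr C \<and> (\<exists>g. g \<in> hom C (cd C f) (dm C f)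
      \<and> cmp C g f = idt C (dm C f) \<and> cmp C f g = idt C (cd C f))"

definition inv_arr :: "('o,'m) bmcat \<Rightarrow> 'm \<Rightarrow> 'm" where
  "inv_arr C f = (SOME g. g \<in> hom C (cd C f) (dm C f)
      \<and> cmp C g f = idt C (dm C f) \<and> cmp C f g = idt C (cd C f))"

definition braided_monoidal_cat :: "('o,'m) bmcat \<Rightarrow> bool" where
  "braided_monoidal_cat C \<longleftrightarrow>
    \<comment> \<open>category\<close>
    (\<forall>X. idt C X \<in> hom C X X) \<and>
    (\<forall>f g. f \<in> arr C \<and> g \<in> arr C \<and> cd C f = dm C g \<longrightarrow> cmp C g f \<in> hom C (dm C f) (cd C g)) \<and>
    (\<forall>f. f \<in> arr C \<longrightarrow> cmp C f (idt C (dm C f)) = f \<and> cmp C (idt C (cd C f)) f = f) \<and>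
    (\<forall>f g h. f \<in> arr C \<and> g \<in> arr C \<and> h \<in> arr C \<and> cd C f = dm C g \<and> cd C g = dm C h
        \<longrightarrow> cmp C h (cmp C g f) = cmp C (cmp C h g) f) \<and>
    \<comment> \<open>tensor bifunctor\<close>
    (\<forall>f g. f \<in> arr C \<and> g \<in> arr C \<longrightarrow>
        tnm C f g \<in> hom C (tns C (dm C f) (dm C g)) (tns C (cd C f) (cd C g))) \<and>
    (\<forall>X Y. tnm C (idt C X) (idt C Y) = idt C (tns C X Y)) \<and>
    (\<forall>f g f' g'. f \<in> arr C \<and> g \<in> arr C \<and> f' \<in> arr C \<and> g' \<in> arr C \<and>
        cd C f = dm C g \<and> cd C f' = dm C g' \<longrightarrow>
        tnm C (cmp C g f) (cmp C g' f') = cmp C (tnm C g g') (tnm C f f')) \<and>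
    \<comment> \<open>associator\<close>
    (\<forall>X Y Z. asc C X Y Z \<in> hom C (tns C (tns C X Y) Z) (tns C X (tns C Y Z)) \<and> is_iso C (asc C X Y Z)) \<and>
    (\<forall>f g h. f \<in> arr C \<and> g \<in> arr C \<and> h \<in> arr C \<longrightarrow>
        cmp C (asc C (cd C f) (cd C g) (cd C h)) (tnm C (tnm C f g) h)
        = cmp C (tnm C f (tnm C g h)) (asc C (dm C f) (dm C g) (dm C h))) \<and>
    \<comment> \<open>unitors\<close>
    (\<forall>X. lu C X \<in> hom C (tns C (un C) X) X \<and> is_iso C (lu C X)) \<and>
    (\<forall>f. f \<in> arr C \<longrightarrow> cmp C f (lu C (dm C f)) = cmp C (lu C (cd C f)) (tnm C (idt C (un C)) f)) \<and>
    (\<forall>X. ru C X \<in> hom C (tns C X (un C)) X \<and> is_iso C (ru C X)) \<and>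
    (\<forall>f. f \<in> arr C \<longrightarrow> cmp C f (ru C (dm C f)) = cmp C (ru C (cd C f)) (tnm C f (idt C (un C)))) \<and>
    \<comment> \<open>pentagon and triangle\<close>
    (\<forall>W X Y Z. cmp C (asc C W X (tns C Y Z)) (asc C (tns C W X) Y Z)
        = cmp C (tnm C (idt C W) (asc C X Y Z))
            (cmp C (asc C W (tns C X Y) Z) (tnm C (asc C W X Y) (idt C Z)))) \<and>
    (\<forall>X Y. cmp C (tnm C (idt C X) (lu C Y)) (asc C X (un C) Y) = tnm C (ru C X) (idt C Y)) \<and>
    \<comment> \<open>braiding\<close>
    (\<forall>X Y. br C X Y \<in> hom C (tns C X Y) (tns C Y X) \<and> is_iso C (br C X Y)) \<and>
    (\<forall>f g. f \<in> arr C \<and> g \<in> arr C \<longrightarrow>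
        cmp C (br C (cd C f) (cd C g)) (tnm C f g) = cmp C (tnm C g f) (br C (dm C f) (dm C g))) \<and>
    (\<forall>X Y Z. cmp C (asc C Y Z X) (cmp C (br C X (tns C Y Z)) (asc C X Y Z))
        = cmp C (tnm C (idt C Y) (br C X Z)) (cmp C (asc C Y X Z) (tnm C (br C X Y) (idt C Z)))) \<and>
    (\<forall>X Y Z. cmp C (inv_arr C (asc C Z X Y)) (cmp C (br C (tns C X Y) Z) (inv_arr C (asc C X Y Z)))
        = cmp C (tnm C (br C X Z) (idt C Y))
            (cmp C (inv_arr C (asc C X Z Y)) (tnm C (idt C X) (br C Y Z))))"

definition monoid_obj :: "('o,'m) bmcat \<Rightarrow> 'o \<Rightarrow> 'm \<Rightarrow> 'm \<Rightarrow> bool" where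
  "monoid_obj C Q m u \<longleftrightarrow> m \<in> hom C (tns C Q Q) Q \<and> u \<in> hom C (un C) Q \<and>
     cmp C m (tnm C m (idt C Q)) = cmp C m (cmp C (tnm C (idt C Q) m) (asc C Q Q Q)) \<and>
     cmp C m (tnm C u (idt C Q)) = lu C Q \<and>
     cmp C m (tnm C (idt C Q) u) = ru C Q"

definition comonoid_obj :: "('o,'m) bmcat \<Rightarrow> 'o \<Rightarrow> 'm \<Rightarrow> 'm \<Rightarrow> bool" where
  "comonoid_obj C Q d e \<longleftrightarrow> d \<in> hom C Q (tns C Q Q) \<and> e \<in> hom C Q (un C) \<and>
     cmp C (asc C Q Q Q) (cmp C (tnm C d (idt C Q)) d) = cmp C (tnm C (idt C Q) d) d \<and>
     cmp C (lu C Q) (cmp C (tnm C e (idt C Q)) d) = idt C Q \<and>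
     cmp C (ru C Q) (cmp C (tnm C (idt C Q) e) d) = idt C Q"

definition monoid_hom :: "('o,'m) bmcat \<Rightarrow> 'o \<Rightarrow> 'm \<Rightarrow> 'm \<Rightarrow> 'o \<Rightarrow> 'm \<Rightarrow> 'm \<Rightarrow> 'm \<Rightarrow> bool" where
  "monoid_hom C Q1 m1 u1 Q2 m2 u2 \<phi> \<longleftrightarrow> \<phi> \<in> hom C Q1 Q2 \<and>
     cmp C \<phi> m1 = cmp C m2 (tnm C \<phi> \<phi>) \<and> cmp C \<phi> u1 = u2"

definition comonoid_hom :: "('o,'m) bmcat \<Rightarrow> 'o \<Rightarrow> 'm \<Rightarrow> 'm \<Rightarrow> 'o \<Rightarrow> 'm \<Rightarrow> 'm \<Rightarrow> 'm \<Rightarrow> bool" where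
  "comonoid_hom C Q1 d1 e1 Q2 d2 e2 \<phi> \<longleftrightarrow> \<phi> \<in> hom C Q1 Q2 \<and>
     cmp C (tnm C \<phi> \<phi>) d1 = cmp C d2 \<phi> \<and> cmp C e2 \<phi> = e1"

text \<open>Middle interchange (a*b)*(c*d) -> (a*c)*(b*d), built from associators and the braiding.\<close>
definition mid :: "('o,'m) bmcat \<Rightarrow> 'o \<Rightarrow> 'o \<Rightarrow> 'o \<Rightarrow> 'o \<Rightarrow> 'm" where
  "mid C a b c d =
     cmp C (inv_arr C (asc C a c (tns C b d)))
    (cmp C (tnm C (idt C a) (asc C c b d))
    (cmp C (tnm C (idt C a) (tnm C (br C b c) (idt C d)))
    (cmp C (tnm C (idt C a) (inv_arr C (asc C b c d)))
           (asc C a b (tns C c d)))))"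

definition mu_tens :: "('o,'m) bmcat \<Rightarrow> 'o \<Rightarrow> 'm \<Rightarrow> 'o \<Rightarrow> 'm \<Rightarrow> 'm" where
  "mu_tens C Q1 m1 Q2 m2 = cmp C (tnm C m1 m2) (mid C Q1 Q2 Q1 Q2)"

definition unit_tens :: "('o,'m) bmcat \<Rightarrow> 'm \<Rightarrow> 'm \<Rightarrow> 'm" where
  "unit_tens C u1 u2 = cmp C (tnm C u1 u2) (inv_arr C (lu C (un C)))"

definition bimonoid_obj :: "('o,'m) bmcat \<Rightarrow> 'o \<Rightarrow> 'm \<Rightarrow> 'm \<Rightarrow> 'm \<Rightarrow> 'm \<Rightarrow> bool" where
  "bimonoid_obj C B m u d e \<longleftrightarrow> monoid_obj C B m u \<and> comonoid_obj C B d e \<and>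
     monoid_hom C B m u (tns C B B) (mu_tens C B m B m) (unit_tens C u u) d \<and>
     monoid_hom C B m u (un C) (lu C (un C)) (idt C (un C)) e"

definition bimonoid_hom :: "('o,'m) bmcat \<Rightarrow> 'o \<Rightarrow> 'm \<Rightarrow> 'm \<Rightarrow> 'm \<Rightarrow> 'm
     \<Rightarrow> 'o \<Rightarrow> 'm \<Rightarrow> 'm \<Rightarrow> 'm \<Rightarrow> 'm \<Rightarrow> 'm \<Rightarrow> bool" where
  "bimonoid_hom C B1 m1 u1 d1 e1 B2 m2 u2 d2 e2 \<phi> \<longleftrightarrow>
     monoid_hom C B1 m1 u1 B2 m2 u2 \<phi> \<and> comonoid_hom C B1 d1 e1 B2 d2 e2 \<phi>"

fun tpow_obj :: "('o,'m) bmcat \<Rightarrow> 'o \<Rightarrow> nat \<Rightarrow> 'o" where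
  "tpow_obj C A 0 = un C"
| "tpow_obj C A (Suc 0) = A"
| "tpow_obj C A (Suc (Suc n)) = tns C (tpow_obj C A (Suc n)) A"

text \<open>rho1 ~* rho2 for rho_i : A_i -> B_i * Q, landing in (B1*B2)*Q.\<close>
definition ttens :: "('o,'m) bmcat \<Rightarrow> 'o \<Rightarrow> 'm \<Rightarrow> 'o \<Rightarrow> 'o \<Rightarrow> 'm \<Rightarrow> 'm \<Rightarrow> 'm" where
  "ttens C Q m B1 B2 r1 r2 =
     cmp C (tnm C (idt C (tns C B1 B2)) m)
    (cmp C (inv_arr C (asc C B1 B2 (tns C Q Q)))
    (cmp C (tnm C (idt C B1) (asc C B2 Q Q))
    (cmp C (tnm C (idt C B1) (tnm C (br C Q B2) (idt C Q)))
    (cmp C (tnm C (idt C B1) (inv_arr C (asc C Q B2 Q)))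
    (cmp C (asc C B1 Q (tns C B2 Q))
           (tnm C r1 r2))))))"

fun ttpow :: "('o,'m) bmcat \<Rightarrow> 'o \<Rightarrow> 'm \<Rightarrow> 'm \<Rightarrow> 'o \<Rightarrow> 'm \<Rightarrow> nat \<Rightarrow> 'm" where
  "ttpow C Q m u B r 0 = cmp C (inv_arr C (lu C Q)) u"
| "ttpow C Q m u B r (Suc 0) = r"
| "ttpow C Q m u B r (Suc (Suc n)) =
     ttens C Q m (tpow_obj C B (Suc n)) B (ttpow C Q m u B r (Suc n)) r"

definition omega_magma :: "('o,'m) bmcat \<Rightarrow> 'w set \<Rightarrow> ('w \<Rightarrow> nat) \<Rightarrow> ('w \<Rightarrow> nat)
     \<Rightarrow> 'o \<Rightarrow> ('w \<Rightarrow> 'm) \<Rightarrow> bool" where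
  "omega_magma C Om s t A ops \<longleftrightarrow>
     (\<forall>w\<in>Om. ops w \<in> hom C (tpow_obj C A (s w)) (tpow_obj C A (t w)))"

definition comeasuring :: "('o,'m) bmcat \<Rightarrow> 'w set \<Rightarrow> ('w \<Rightarrow> nat) \<Rightarrow> ('w \<Rightarrow> nat)
     \<Rightarrow> ('w \<Rightarrow> 'm) \<Rightarrow> ('w \<Rightarrow> 'm) \<Rightarrow> 'o \<Rightarrow> 'o \<Rightarrow> 'o \<Rightarrow> 'm \<Rightarrow> 'm \<Rightarrow> 'm \<Rightarrow> bool" where
  "comeasuring C Om s t opsA opsB A B Q m u r \<longleftrightarrow>
     monoid_obj C Q m u \<and> r \<in> hom C A (tns C B Q) \<and>
     (\<forall>w\<in>Om. cmp C (tnm C (opsB w) (idt C Q)) (ttpow C Q m u A r (s w))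
              = cmp C (ttpow C Q m u B r (t w)) (opsA w))"

definition coaction :: "('o,'m) bmcat \<Rightarrow> 'w set \<Rightarrow> ('w \<Rightarrow> nat) \<Rightarrow> ('w \<Rightarrow> nat)
     \<Rightarrow> ('w \<Rightarrow> 'm) \<Rightarrow> 'o \<Rightarrow> 'o \<Rightarrow> 'm \<Rightarrow> 'm \<Rightarrow> 'm \<Rightarrow> 'm \<Rightarrow> 'm \<Rightarrow> bool" where
  "coaction C Om s t ops A B m u d e r \<longleftrightarrow>
     bimonoid_obj C B m u d e \<and>
     comeasuring C Om s t ops ops A A B m u r \<and>
     cmp C (asc C A B B) (cmp C (tnm C r (idt C B)) r) = cmp C (tnm C (idt C A) d) r \<and>
     cmp C (ru C A) (cmp C (tnm C (idt C A) e) r) = idt C A"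

end

(*
  Initiality of r0 in D, together with closure of D under coarsenings, makes a monoid morphism out
  of B0 determined by the comeasuring it induces from r0. The comultiplication and counit of B0
  are the morphisms induced by the comeasurings (r0 \<otimes> id) r0 and A \<cong> A \<otimes> 1, which lie in D
  by hypothesis. Coassociativity and the counit laws then hold because both sides of each law are
  monoid morphisms inducing the same comeasuring; the same argument shows that the morphism
  induced by a coaction in D preserves comultiplication and counit. For this all composites must
  be monoid morphisms into monoids, so most of the work is showing that in a braided monoidal
  category tensor products of monoids are monoids and the associator and unitors are monoid
  morphisms.
*)

theory Submission
  imports Defs
begin

section \<open>Braided monoidal categories\<close>

locale braided_monoidal =
  fixes C :: "('o,'m) bmcat"
  assumes braided_monoidal: "braided_monoidal_cat C"
begin

abbreviation Arr :: "'m \<Rightarrow> bool" where "Arr f \<equiv> f \<in> arr C"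
abbreviation Dm where "Dm f \<equiv> dm C f"
abbreviation Cd where "Cd f \<equiv> cd C f"
abbreviation comp_arr (infixr "\<bullet>" 55) where "g \<bullet> f \<equiv> cmp C g f"
abbreviation tensor_arr (infixr "\<otimes>" 60) where "f \<otimes> g \<equiv> tnm C f g"
abbreviation tensor_obj (infixr "\<odot>" 60) where "X \<odot> Y \<equiv> tns C X Y"
abbreviation \<I> where "\<I> \<equiv> un C"
abbreviation ident ("\<one>[_]") where "\<one>[X] \<equiv> idt C X"
abbreviation assoc ("\<a>[_, _, _]") where "\<a>[X, Y, Z] \<equiv> asc C X Y Z"
abbreviation assoc_inv ("\<a>\<^sup>-\<^sup>1[_, _, _]") where "\<a>\<^sup>-\<^sup>1[X, Y, Z] \<equiv> inv_arr C \<a>[X, Y, Z]"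
abbreviation lunit ("\<l>[_]") where "\<l>[X] \<equiv> lu C X"
abbreviation lunit_inv ("\<l>\<^sup>-\<^sup>1[_]") where "\<l>\<^sup>-\<^sup>1[X] \<equiv> inv_arr C \<l>[X]"
abbreviation runit ("\<r>[_]") where "\<r>[X] \<equiv> ru C X"
abbreviation runit_inv ("\<r>\<^sup>-\<^sup>1[_]") where "\<r>\<^sup>-\<^sup>1[X] \<equiv> inv_arr C \<r>[X]"
abbreviation braid ("\<s>[_, _]") where "\<s>[X, Y] \<equiv> br C X Y"
abbreviation braid_inv ("\<s>\<^sup>-\<^sup>1[_, _]") where "\<s>\<^sup>-\<^sup>1[X, Y] \<equiv> inv_arr C \<s>[X, Y]"

lemma
  shows ident_in_hom[rule_format]: "\<forall>X. \<one>[X] \<in> hom C X X"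
    and comp_in_hom[rule_format]: "\<forall>f g. Arr f \<and> Arr g \<and> Cd f = Dm g \<longrightarrow> g \<bullet> f \<in> hom C (Dm f) (Cd g)"
    and comp_ident[rule_format]: "\<forall>f. Arr f \<longrightarrow> f \<bullet> \<one>[Dm f] = f \<and> \<one>[Cd f] \<bullet> f = f"
    and comp_assoc[rule_format]: "\<forall>f g h. Arr f \<and> Arr g \<and> Arr h \<and> Cd f = Dm g \<and> Cd g = Dm h
      \<longrightarrow> h \<bullet> (g \<bullet> f) = (h \<bullet> g) \<bullet> f"
    and tensor_in_hom[rule_format]:
      "\<forall>f g. Arr f \<and> Arr g \<longrightarrow> f \<otimes> g \<in> hom C (Dm f \<odot> Dm g) (Cd f \<odot> Cd g)"
    and tensor_ident[rule_format, simp]: "\<forall>X Y. \<one>[X] \<otimes> \<one>[Y] = \<one>[X \<odot> Y]"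
    and interchange[rule_format]:
      "\<forall>f g f' g'. Arr f \<and> Arr g \<and> Arr f' \<and> Arr g' \<and> Cd f = Dm g \<and> Cd f' = Dm g'
      \<longrightarrow> (g \<bullet> f) \<otimes> (g' \<bullet> f') = (g \<otimes> g') \<bullet> (f \<otimes> f')"
    and assoc_in_hom_iso[rule_format]: "\<forall>X Y Z. \<a>[X, Y, Z] \<in> hom C ((X \<odot> Y) \<odot> Z) (X \<odot> (Y \<odot> Z))
      \<and> is_iso C \<a>[X, Y, Z]"
    and assoc_naturality[rule_format]: "\<forall>f g h. Arr f \<and> Arr g \<and> Arr h \<longrightarrow>
      \<a>[Cd f, Cd g, Cd h] \<bullet> ((f \<otimes> g) \<otimes> h) = (f \<otimes> (g \<otimes> h)) \<bullet> \<a>[Dm f, Dm g, Dm h]"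
    and lunit_in_hom_iso[rule_format]: "\<forall>X. \<l>[X] \<in> hom C (\<I> \<odot> X) X \<and> is_iso C \<l>[X]"
    and lunit_naturality[rule_format]: "\<forall>f. Arr f \<longrightarrow> f \<bullet> \<l>[Dm f] = \<l>[Cd f] \<bullet> (\<one>[\<I>] \<otimes> f)"
    and runit_in_hom_iso[rule_format]: "\<forall>X. \<r>[X] \<in> hom C (X \<odot> \<I>) X \<and> is_iso C \<r>[X]"
    and runit_naturality[rule_format]: "\<forall>f. Arr f \<longrightarrow> f \<bullet> \<r>[Dm f] = \<r>[Cd f] \<bullet> (f \<otimes> \<one>[\<I>])"
    and pentagon[rule_format]: "\<forall>W X Y Z. \<a>[W, X, Y \<odot> Z] \<bullet> \<a>[W \<odot> X, Y, Z]
      = (\<one>[W] \<otimes> \<a>[X, Y, Z]) \<bullet> (\<a>[W, X \<odot> Y, Z] \<bullet> (\<a>[W, X, Y] \<otimes> \<one>[Z]))"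
    and triangle[rule_format]: "\<forall>X Y. (\<one>[X] \<otimes> \<l>[Y]) \<bullet> \<a>[X, \<I>, Y] = \<r>[X] \<otimes> \<one>[Y]"
    and braid_in_hom_iso[rule_format]: "\<forall>X Y. \<s>[X, Y] \<in> hom C (X \<odot> Y) (Y \<odot> X) \<and> is_iso C \<s>[X, Y]"
    and braid_naturality[rule_format]: "\<forall>f g. Arr f \<and> Arr g \<longrightarrow>
      \<s>[Cd f, Cd g] \<bullet> (f \<otimes> g) = (g \<otimes> f) \<bullet> \<s>[Dm f, Dm g]"
    and hexagon[rule_format]: "\<forall>X Y Z. \<a>[Y, Z, X] \<bullet> (\<s>[X, Y \<odot> Z] \<bullet> \<a>[X, Y, Z])
      = (\<one>[Y] \<otimes> \<s>[X, Z]) \<bullet> (\<a>[Y, X, Z] \<bullet> (\<s>[X, Y] \<otimes> \<one>[Z]))"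
    and hexagon_inv[rule_format]: "\<forall>X Y Z. \<a>\<^sup>-\<^sup>1[Z, X, Y] \<bullet> (\<s>[X \<odot> Y, Z] \<bullet> \<a>\<^sup>-\<^sup>1[X, Y, Z])
      = (\<s>[X, Z] \<otimes> \<one>[Y]) \<bullet> (\<a>\<^sup>-\<^sup>1[X, Z, Y] \<bullet> (\<one>[X] \<otimes> \<s>[Y, Z]))"
  using braided_monoidal[unfolded braided_monoidal_cat_def] by - (elim conjE, assumption)+

lemma assoc_in_hom: "\<a>[X, Y, Z] \<in> hom C ((X \<odot> Y) \<odot> Z) (X \<odot> (Y \<odot> Z))"
  and assoc_iso: "is_iso C \<a>[X, Y, Z]"
  and lunit_in_hom: "\<l>[X] \<in> hom C (\<I> \<odot> X) X"
  and lunit_iso: "is_iso C \<l>[X]"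
  and runit_in_hom: "\<r>[X] \<in> hom C (X \<odot> \<I>) X"
  and runit_iso: "is_iso C \<r>[X]"
  and braid_in_hom: "\<s>[X, Y] \<in> hom C (X \<odot> Y) (Y \<odot> X)"
  and braid_iso: "is_iso C \<s>[X, Y]"
  using assoc_in_hom_iso lunit_in_hom_iso runit_in_hom_iso braid_in_hom_iso by blast+

lemma inv_arr_props:
  assumes "is_iso C f"
  shows "inv_arr C f \<in> hom C (Cd f) (Dm f)" "inv_arr C f \<bullet> f = \<one>[Dm f]" "f \<bullet> inv_arr C f = \<one>[Cd f]"
proof -
  from assms obtain g where "g \<in> hom C (Cd f) (Dm f) \<and> g \<bullet> f = \<one>[Dm f] \<and> f \<bullet> g = \<one>[Cd f]"
    unfolding is_iso_def by blast
  then have "inv_arr C f \<in> hom C (Cd f) (Dm f) \<and> inv_arr C f \<bullet> f = \<one>[Dm f] \<and> f \<bullet> inv_arr C f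
    = \<one>[Cd f]"
    unfolding inv_arr_def by (rule someI)
  then show "inv_arr C f \<in> hom C (Cd f) (Dm f)" "inv_arr C f \<bullet> f = \<one>[Dm f]"
    "f \<bullet> inv_arr C f = \<one>[Cd f]"
    by auto
qed

lemma homD: "f \<in> hom C X Y \<Longrightarrow> Arr f" "f \<in> hom C X Y \<Longrightarrow> Dm f = X" "f \<in> hom C X Y \<Longrightarrow> Cd f = Y"
  unfolding hom_def by auto

lemma ident_typing[simp]: "Arr \<one>[X]" "Dm \<one>[X] = X" "Cd \<one>[X] = X"
  using ident_in_hom[of X] homD by auto
lemma comp_typing[simp]:
  "Arr f \<Longrightarrow> Arr g \<Longrightarrow> Cd f = Dm g \<Longrightarrow> Arr (g \<bullet> f)"
  "Arr f \<Longrightarrow> Arr g \<Longrightarrow> Cd f = Dm g \<Longrightarrow> Dm (g \<bullet> f) = Dm f"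
  "Arr f \<Longrightarrow> Arr g \<Longrightarrow> Cd f = Dm g \<Longrightarrow> Cd (g \<bullet> f) = Cd g"
  using comp_in_hom homD by blast+
lemma tensor_typing[simp]:
  "Arr f \<Longrightarrow> Arr g \<Longrightarrow> Arr (f \<otimes> g)"
  "Arr f \<Longrightarrow> Arr g \<Longrightarrow> Dm (f \<otimes> g) = Dm f \<odot> Dm g"
  "Arr f \<Longrightarrow> Arr g \<Longrightarrow> Cd (f \<otimes> g) = Cd f \<odot> Cd g"
  using tensor_in_hom homD by blast+
lemma assoc_typing[simp]: "Arr \<a>[X, Y, Z]" "Dm \<a>[X, Y, Z] = (X \<odot> Y) \<odot> Z"
  "Cd \<a>[X, Y, Z] = X \<odot> (Y \<odot> Z)"
  using assoc_in_hom homD by blast+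
lemma assoc_inv_typing[simp]:
  "Arr \<a>\<^sup>-\<^sup>1[X, Y, Z]" "Dm \<a>\<^sup>-\<^sup>1[X, Y, Z] = X \<odot> (Y \<odot> Z)" "Cd \<a>\<^sup>-\<^sup>1[X, Y, Z] = (X \<odot> Y) \<odot> Z"
  using inv_arr_props(1)[OF assoc_iso] homD assoc_typing by metis+
lemma lunit_typing[simp]: "Arr \<l>[X]" "Dm \<l>[X] = \<I> \<odot> X" "Cd \<l>[X] = X"
  using lunit_in_hom homD by blast+
lemma lunit_inv_typing[simp]: "Arr \<l>\<^sup>-\<^sup>1[X]" "Dm \<l>\<^sup>-\<^sup>1[X] = X" "Cd \<l>\<^sup>-\<^sup>1[X] = \<I> \<odot> X"
  using inv_arr_props(1)[OF lunit_iso] homD lunit_typing by metis+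
lemma runit_typing[simp]: "Arr \<r>[X]" "Dm \<r>[X] = X \<odot> \<I>" "Cd \<r>[X] = X"
  using runit_in_hom homD by blast+
lemma runit_inv_typing[simp]: "Arr \<r>\<^sup>-\<^sup>1[X]" "Dm \<r>\<^sup>-\<^sup>1[X] = X" "Cd \<r>\<^sup>-\<^sup>1[X] = X \<odot> \<I>"
  using inv_arr_props(1)[OF runit_iso] homD runit_typing by metis+
lemma braid_typing[simp]: "Arr \<s>[X, Y]" "Dm \<s>[X, Y] = X \<odot> Y" "Cd \<s>[X, Y] = Y \<odot> X"
  using braid_in_hom homD by blast+
lemma braid_inv_typing[simp]: "Arr \<s>\<^sup>-\<^sup>1[X, Y]" "Dm \<s>\<^sup>-\<^sup>1[X, Y] = Y \<odot> X" "Cd \<s>\<^sup>-\<^sup>1[X, Y] = X \<odot> Y"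
  using inv_arr_props(1)[OF braid_iso] homD braid_typing by metis+

lemma comp_assoc_right[simp]:
  "Arr f \<Longrightarrow> Arr g \<Longrightarrow> Arr h \<Longrightarrow> Cd f = Dm g \<Longrightarrow> Cd g = Dm h \<Longrightarrow> (h \<bullet> g) \<bullet> f = h \<bullet> (g \<bullet> f)"
  using comp_assoc[of f g h] by simp
lemma comp_ident_arr[simp]: "Arr f \<Longrightarrow> Cd f = X \<Longrightarrow> \<one>[X] \<bullet> f = f"
  using comp_ident by blast
lemma comp_arr_ident[simp]: "Arr f \<Longrightarrow> Dm f = X \<Longrightarrow> f \<bullet> \<one>[X] = f"
  using comp_ident by blast
lemma tensor_comp_tensor[simp]:
  "Arr f \<Longrightarrow> Arr g \<Longrightarrow> Arr f' \<Longrightarrow> Arr g' \<Longrightarrow> Cd f = Dm g \<Longrightarrow> Cd f' = Dm g' \<Longrightarrow>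
   (g \<otimes> g') \<bullet> (f \<otimes> f') = (g \<bullet> f) \<otimes> (g' \<bullet> f')"
  using interchange[of f g f' g'] by simp
lemma tensor_comp_tensor_ext[simp]:
  "Arr f \<Longrightarrow> Arr g \<Longrightarrow> Arr f' \<Longrightarrow> Arr g' \<Longrightarrow> Arr k \<Longrightarrow> Cd f = Dm g \<Longrightarrow> Cd f' = Dm g' \<Longrightarrow>
   Cd k = Dm f \<odot> Dm f' \<Longrightarrow> (g \<otimes> g') \<bullet> ((f \<otimes> f') \<bullet> k) = ((g \<bullet> f) \<otimes> (g' \<bullet> f')) \<bullet> k"
proof -
  assume "Arr f" "Arr g" "Arr f'" "Arr g'" "Arr k" "Cd f = Dm g" "Cd f' = Dm g'"
    "Cd k = Dm f \<odot> Dm f'"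
  then have "(g \<otimes> g') \<bullet> ((f \<otimes> f') \<bullet> k) = ((g \<otimes> g') \<bullet> (f \<otimes> f')) \<bullet> k"
    by (intro comp_assoc) simp_all
  with \<open>Arr f\<close> \<open>Arr g\<close> \<open>Arr f'\<close> \<open>Arr g'\<close> \<open>Cd f = Dm g\<close> \<open>Cd f' = Dm g'\<close> show ?thesis
    by (simp only: tensor_comp_tensor)
qed

lemma iso_inv_cancel:
  assumes "is_iso C f"
  shows "f \<bullet> inv_arr C f = \<one>[Cd f]" "inv_arr C f \<bullet> f = \<one>[Dm f]"
    "Arr k \<Longrightarrow> Cd k = Cd f \<Longrightarrow> f \<bullet> (inv_arr C f \<bullet> k) = k"
    "Arr k \<Longrightarrow> Cd k = Dm f \<Longrightarrow> inv_arr C f \<bullet> (f \<bullet> k) = k"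
proof -
  have f: "Arr f" using assms unfolding is_iso_def by blast
  have g: "Arr (inv_arr C f)" "Dm (inv_arr C f) = Cd f" "Cd (inv_arr C f) = Dm f"
    using homD[OF inv_arr_props(1)[OF assms]] by auto
  show inv: "f \<bullet> inv_arr C f = \<one>[Cd f]" "inv_arr C f \<bullet> f = \<one>[Dm f]"
    using inv_arr_props[OF assms] by auto
  show "Arr k \<Longrightarrow> Cd k = Cd f \<Longrightarrow> f \<bullet> (inv_arr C f \<bullet> k) = k"
    using comp_assoc_right[of k "inv_arr C f" f] f g inv by simp
  show "Arr k \<Longrightarrow> Cd k = Dm f \<Longrightarrow> inv_arr C f \<bullet> (f \<bullet> k) = k"
    using comp_assoc_right[of k f "inv_arr C f"] f g inv by simp
qed

lemma assoc_cancel[simp]: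
  "\<a>[X, Y, Z] \<bullet> \<a>\<^sup>-\<^sup>1[X, Y, Z] = \<one>[X \<odot> (Y \<odot> Z)]" "\<a>\<^sup>-\<^sup>1[X, Y, Z] \<bullet> \<a>[X, Y, Z] = \<one>[(X \<odot> Y) \<odot> Z]"
  "Arr k \<Longrightarrow> Cd k = X \<odot> (Y \<odot> Z) \<Longrightarrow> \<a>[X, Y, Z] \<bullet> (\<a>\<^sup>-\<^sup>1[X, Y, Z] \<bullet> k) = k"
  "Arr k \<Longrightarrow> Cd k = (X \<odot> Y) \<odot> Z \<Longrightarrow> \<a>\<^sup>-\<^sup>1[X, Y, Z] \<bullet> (\<a>[X, Y, Z] \<bullet> k) = k"
  using iso_inv_cancel[OF assoc_iso[of X Y Z]] by simp_all
lemma lunit_cancel[simp]: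
  "\<l>[X] \<bullet> \<l>\<^sup>-\<^sup>1[X] = \<one>[X]" "\<l>\<^sup>-\<^sup>1[X] \<bullet> \<l>[X] = \<one>[\<I> \<odot> X]"
  "Arr k \<Longrightarrow> Cd k = X \<Longrightarrow> \<l>[X] \<bullet> (\<l>\<^sup>-\<^sup>1[X] \<bullet> k) = k"
  "Arr k \<Longrightarrow> Cd k = \<I> \<odot> X \<Longrightarrow> \<l>\<^sup>-\<^sup>1[X] \<bullet> (\<l>[X] \<bullet> k) = k"
  using iso_inv_cancel[OF lunit_iso[of X]] by simp_all
lemma runit_cancel[simp]:
  "\<r>[X] \<bullet> \<r>\<^sup>-\<^sup>1[X] = \<one>[X]" "\<r>\<^sup>-\<^sup>1[X] \<bullet> \<r>[X] = \<one>[X \<odot> \<I>]"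
  "Arr k \<Longrightarrow> Cd k = X \<Longrightarrow> \<r>[X] \<bullet> (\<r>\<^sup>-\<^sup>1[X] \<bullet> k) = k"
  "Arr k \<Longrightarrow> Cd k = X \<odot> \<I> \<Longrightarrow> \<r>\<^sup>-\<^sup>1[X] \<bullet> (\<r>[X] \<bullet> k) = k"
  using iso_inv_cancel[OF runit_iso[of X]] by simp_all
lemma braid_cancel[simp]:
  "\<s>[X, Y] \<bullet> \<s>\<^sup>-\<^sup>1[X, Y] = \<one>[Y \<odot> X]" "\<s>\<^sup>-\<^sup>1[X, Y] \<bullet> \<s>[X, Y] = \<one>[X \<odot> Y]"
  "Arr k \<Longrightarrow> Cd k = Y \<odot> X \<Longrightarrow> \<s>[X, Y] \<bullet> (\<s>\<^sup>-\<^sup>1[X, Y] \<bullet> k) = k"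
  "Arr k \<Longrightarrow> Cd k = X \<odot> Y \<Longrightarrow> \<s>\<^sup>-\<^sup>1[X, Y] \<bullet> (\<s>[X, Y] \<bullet> k) = k"
  using iso_inv_cancel[OF braid_iso[of X Y]] by simp_all

text \<open>Proofs normalise with the simplifier: composites become right-nested and adjacent tensor
  products of arrows are merged. An equation between composites can then be used inside a longer
  chain only after composing both sides with an arbitrary k on the right; the \<open>_ext\<close> variants
  of equations below are obtained in this way.\<close>

lemma comp_ext22: "a \<bullet> b = c \<bullet> d \<Longrightarrow> Arr k \<Longrightarrow> Arr b \<Longrightarrow> Arr a \<Longrightarrow> Arr c \<Longrightarrow> Arr d \<Longrightarrow>
   Cd k = Dm b \<Longrightarrow> Cd b = Dm a \<Longrightarrow> Cd d = Dm c \<Longrightarrow> Dm d = Dm b \<Longrightarrow> a \<bullet> (b \<bullet> k) = c \<bullet> (d \<bullet> k)"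
proof -
  assume h: "a \<bullet> b = c \<bullet> d" "Arr k" "Arr b" "Arr a" "Arr c" "Arr d"
   "Cd k = Dm b" "Cd b = Dm a" "Cd d = Dm c" "Dm d = Dm b"
  have "a \<bullet> (b \<bullet> k) = (a \<bullet> b) \<bullet> k" by (rule comp_assoc_right[symmetric]) (use h in auto)
  also have "\<dots> = (c \<bullet> d) \<bullet> k" by (simp only: h(1))
  also have "\<dots> = c \<bullet> (d \<bullet> k)" by (rule comp_assoc_right) (use h in auto)
  finally show ?thesis .
qed

lemma comp_ext21: "a \<bullet> b = c \<Longrightarrow> Arr k \<Longrightarrow> Arr b \<Longrightarrow> Arr a \<Longrightarrow>
   Cd k = Dm b \<Longrightarrow> Cd b = Dm a \<Longrightarrow> a \<bullet> (b \<bullet> k) = c \<bullet> k"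
proof -
  assume h: "a \<bullet> b = c" "Arr k" "Arr b" "Arr a" "Cd k = Dm b" "Cd b = Dm a"
  have "a \<bullet> (b \<bullet> k) = (a \<bullet> b) \<bullet> k" by (rule comp_assoc_right[symmetric]) (use h in auto)
  also have "\<dots> = c \<bullet> k" by (simp only: h(1))
  finally show ?thesis .
qed

lemma comp_ext32: "a \<bullet> (b \<bullet> c) = d \<bullet> e \<Longrightarrow> Arr k \<Longrightarrow> Arr a \<Longrightarrow> Arr b \<Longrightarrow> Arr c \<Longrightarrow> Arr d \<Longrightarrow> Arr e \<Longrightarrow>
   Cd k = Dm c \<Longrightarrow> Cd c = Dm b \<Longrightarrow> Cd b = Dm a \<Longrightarrow> Cd e = Dm d \<Longrightarrow> Dm e = Dm c \<Longrightarrow>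
   a \<bullet> (b \<bullet> (c \<bullet> k)) = d \<bullet> (e \<bullet> k)"
proof -
  assume h: "a \<bullet> (b \<bullet> c) = d \<bullet> e" "Arr k" "Arr a" "Arr b" "Arr c" "Arr d" "Arr e"
   "Cd k = Dm c" "Cd c = Dm b" "Cd b = Dm a" "Cd e = Dm d" "Dm e = Dm c"
  have "a \<bullet> (b \<bullet> (c \<bullet> k)) = (a \<bullet> (b \<bullet> c)) \<bullet> k" using h(2-) by simp
  also have "\<dots> = (d \<bullet> e) \<bullet> k" by (simp only: h(1))
  also have "\<dots> = d \<bullet> (e \<bullet> k)" using h(2-) by simp
  finally show ?thesis .
qed

lemma comp_ext42: "a \<bullet> (b \<bullet> (c \<bullet> d)) = e \<bullet> f \<Longrightarrow> Arr k \<Longrightarrow> Arr a \<Longrightarrow> Arr b \<Longrightarrow> Arr c \<Longrightarrow> Arr d \<Longrightarrow> Arr e \<Longrightarrow>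
  Arr f \<Longrightarrow>
   Cd k = Dm d \<Longrightarrow> Cd d = Dm c \<Longrightarrow> Cd c = Dm b \<Longrightarrow> Cd b = Dm a \<Longrightarrow> Cd f = Dm e \<Longrightarrow> Dm f = Dm d \<Longrightarrow>
   a \<bullet> (b \<bullet> (c \<bullet> (d \<bullet> k))) = e \<bullet> (f \<bullet> k)"
proof -
  assume h: "a \<bullet> (b \<bullet> (c \<bullet> d)) = e \<bullet> f" "Arr k" "Arr a" "Arr b" "Arr c" "Arr d" "Arr e" "Arr f"
   "Cd k = Dm d" "Cd d = Dm c" "Cd c = Dm b" "Cd b = Dm a" "Cd f = Dm e" "Dm f = Dm d"
  have "a \<bullet> (b \<bullet> (c \<bullet> (d \<bullet> k))) = (a \<bullet> (b \<bullet> (c \<bullet> d))) \<bullet> k" using h(2-) by simp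
  also have "\<dots> = (e \<bullet> f) \<bullet> k" by (simp only: h(1))
  also have "\<dots> = e \<bullet> (f \<bullet> k)" using h(2-) by simp
  finally show ?thesis .
qed

lemma split_epi_cancel: "x \<bullet> p = y \<bullet> p \<Longrightarrow> p \<bullet> q = \<one>[Dm x] \<Longrightarrow> Arr x \<Longrightarrow> Arr y \<Longrightarrow> Arr p \<Longrightarrow> Arr q \<Longrightarrow>
   Cd p = Dm x \<Longrightarrow> Cd p = Dm y \<Longrightarrow> Cd q = Dm p \<Longrightarrow> x = y"
proof -
  assume h: "x \<bullet> p = y \<bullet> p" "p \<bullet> q = \<one>[Dm x]" "Arr x" "Arr y" "Arr p" "Arr q"
   "Cd p = Dm x" "Cd p = Dm y" "Cd q = Dm p"
  have "x = x \<bullet> (p \<bullet> q)" using h by simp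
  also have "\<dots> = (x \<bullet> p) \<bullet> q" by (rule comp_assoc_right[symmetric]) (use h in auto)
  also have "\<dots> = (y \<bullet> p) \<bullet> q" by (simp only: h(1))
  also have "\<dots> = y \<bullet> (p \<bullet> q)" by (rule comp_assoc_right) (use h in auto)
  also have "\<dots> = y" using h by simp
  finally show ?thesis .
qed

lemma split_mono_cancel: "p \<bullet> x = p \<bullet> y \<Longrightarrow> q \<bullet> p = \<one>[Cd x] \<Longrightarrow> Arr x \<Longrightarrow> Arr y \<Longrightarrow> Arr p \<Longrightarrow> Arr q \<Longrightarrow>
   Dm p = Cd x \<Longrightarrow> Dm p = Cd y \<Longrightarrow> Dm q = Cd p \<Longrightarrow> x = y"
proof -
  assume h: "p \<bullet> x = p \<bullet> y" "q \<bullet> p = \<one>[Cd x]" "Arr x" "Arr y" "Arr p" "Arr q"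
   "Dm p = Cd x" "Dm p = Cd y" "Dm q = Cd p"
  have "x = (q \<bullet> p) \<bullet> x" using h by simp
  also have "\<dots> = q \<bullet> (p \<bullet> x)" by (rule comp_assoc_right) (use h in auto)
  also have "\<dots> = q \<bullet> (p \<bullet> y)" by (simp only: h(1))
  also have "\<dots> = (q \<bullet> p) \<bullet> y" by (rule comp_assoc_right[symmetric]) (use h in auto)
  also have "\<dots> = y" using h by simp
  finally show ?thesis .
qed

lemma assoc_cancel_left: "\<a>[a, b, c] \<bullet> x = \<a>[a, b, c] \<bullet> y \<Longrightarrow> Arr x \<Longrightarrow> Arr y \<Longrightarrow> Cd x = (a \<odot> b) \<odot> c \<Longrightarrow>
   Cd y = (a \<odot> b) \<odot> c \<Longrightarrow> x = y"
proof -
  assume h: "\<a>[a, b, c] \<bullet> x = \<a>[a, b, c] \<bullet> y" "Arr x" "Arr y" "Cd x = (a \<odot> b) \<odot> c"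
    "Cd y = (a \<odot> b) \<odot> c"
  have "x = \<a>\<^sup>-\<^sup>1[a, b, c] \<bullet> (\<a>[a, b, c] \<bullet> x)" using assoc_cancel(4)[of x a b c] h by simp
  also have "\<dots> = \<a>\<^sup>-\<^sup>1[a, b, c] \<bullet> (\<a>[a, b, c] \<bullet> y)" by (simp only: h(1))
  also have "\<dots> = y" using assoc_cancel(4)[of y a b c] h by simp
  finally show ?thesis .
qed

lemma tensor_unit_right_cancel: assumes "Arr f" "Arr g" "Dm f = Dm g" "Cd f = Cd g"
  "f \<otimes> \<one>[\<I>] = g \<otimes> \<one>[\<I>]"
  shows "f = g"
proof -
  have "f = (f \<bullet> \<r>[Dm f]) \<bullet> \<r>\<^sup>-\<^sup>1[Dm f]" using assms by simp
  also have "\<dots> = \<r>[Cd f] \<bullet> (f \<otimes> \<one>[\<I>]) \<bullet> \<r>\<^sup>-\<^sup>1[Dm f]" using runit_naturality[of f] assms by simp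
  also have "\<dots> = \<r>[Cd g] \<bullet> (g \<otimes> \<one>[\<I>]) \<bullet> \<r>\<^sup>-\<^sup>1[Dm g]" using assms by simp
  also have "\<dots> = (g \<bullet> \<r>[Dm g]) \<bullet> \<r>\<^sup>-\<^sup>1[Dm g]" using runit_naturality[of g] assms by simp
  also have "\<dots> = g" using assms by simp
  finally show ?thesis .
qed

lemma tensor_unit_left_cancel: assumes "Arr f" "Arr g" "Dm f = Dm g" "Cd f = Cd g"
  "\<one>[\<I>] \<otimes> f = \<one>[\<I>] \<otimes> g"
  shows "f = g"
proof -
  have "f = (f \<bullet> \<l>[Dm f]) \<bullet> \<l>\<^sup>-\<^sup>1[Dm f]" using assms by simp
  also have "\<dots> = \<l>[Cd f] \<bullet> (\<one>[\<I>] \<otimes> f) \<bullet> \<l>\<^sup>-\<^sup>1[Dm f]" using lunit_naturality[of f] assms by simp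
  also have "\<dots> = \<l>[Cd g] \<bullet> (\<one>[\<I>] \<otimes> g) \<bullet> \<l>\<^sup>-\<^sup>1[Dm g]" using assms by simp
  also have "\<dots> = (g \<bullet> \<l>[Dm g]) \<bullet> \<l>\<^sup>-\<^sup>1[Dm g]" using lunit_naturality[of g] assms by simp
  also have "\<dots> = g" using assms by simp
  finally show ?thesis .
qed

section \<open>Coherence consequences for the unit\<close>

text \<open>Kelly's unit identities: both sides agree after tensoring with \<open>\<one>[\<I>]\<close> on the right
  (resp. left), and tensoring with \<open>\<one>[\<I>]\<close> is faithful.\<close>

lemma assoc_runit: "(\<one>[a] \<otimes> \<r>[b]) \<bullet> \<a>[a, b, \<I>] = \<r>[a \<odot> b]"
proof -
  have tri: "\<r>[X] \<otimes> \<one>[Y] = (\<one>[X] \<otimes> \<l>[Y]) \<bullet> \<a>[X, \<I>, Y]" for X Y using triangle by simp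
  have n1: "\<a>[a, b, \<I>] \<bullet> (\<one>[a \<odot> b] \<otimes> \<l>[\<I>]) = (\<one>[a] \<otimes> (\<one>[b] \<otimes> \<l>[\<I>])) \<bullet> \<a>[a, b, \<I> \<odot> \<I>]"
    using assoc_naturality[of "\<one>[a]" "\<one>[b]" "\<l>[\<I>]"] by simp
  have n2: "\<a>[a, b, \<I>] \<bullet> ((\<one>[a] \<otimes> \<r>[b]) \<otimes> \<one>[\<I>]) = (\<one>[a] \<otimes> (\<r>[b] \<otimes> \<one>[\<I>])) \<bullet> \<a>[a, b \<odot> \<I>, \<I>]"
    using assoc_naturality[of "\<one>[a]" "\<r>[b]" "\<one>[\<I>]"] by simp
  have "\<a>[a, b, \<I>] \<bullet> (\<r>[a \<odot> b] \<otimes> \<one>[\<I>]) = \<a>[a, b, \<I>] \<bullet> ((\<one>[a \<odot> b] \<otimes> \<l>[\<I>]) \<bullet> \<a>[a \<odot> b, \<I>, \<I>])"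
    by (simp add: tri)
  also have "\<dots> = (\<one>[a] \<otimes> (\<one>[b] \<otimes> \<l>[\<I>])) \<bullet> (\<a>[a, b, \<I> \<odot> \<I>] \<bullet> \<a>[a \<odot> b, \<I>, \<I>])"
    by (simp add: n1[THEN comp_ext22])
  also have "\<dots> = (\<one>[a] \<otimes> (\<one>[b] \<otimes> \<l>[\<I>]))
    \<bullet> ((\<one>[a] \<otimes> \<a>[b, \<I>, \<I>]) \<bullet> (\<a>[a, b \<odot> \<I>, \<I>] \<bullet> (\<a>[a, b, \<I>] \<otimes> \<one>[\<I>])))"
    by (simp add: pentagon)
  also have "\<dots> = (\<one>[a] \<otimes> (\<r>[b] \<otimes> \<one>[\<I>])) \<bullet> (\<a>[a, b \<odot> \<I>, \<I>] \<bullet> (\<a>[a, b, \<I>] \<otimes> \<one>[\<I>]))"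
    by (simp add: triangle)
  also have "\<dots> = \<a>[a, b, \<I>] \<bullet> (((\<one>[a] \<otimes> \<r>[b]) \<otimes> \<one>[\<I>]) \<bullet> (\<a>[a, b, \<I>] \<otimes> \<one>[\<I>]))"
    by (simp add: n2[symmetric, THEN comp_ext22])
  also have "\<dots> = \<a>[a, b, \<I>] \<bullet> (((\<one>[a] \<otimes> \<r>[b]) \<bullet> \<a>[a, b, \<I>]) \<otimes> \<one>[\<I>])"
    by simp
  finally have "\<r>[a \<odot> b] \<otimes> \<one>[\<I>] = ((\<one>[a] \<otimes> \<r>[b]) \<bullet> \<a>[a, b, \<I>]) \<otimes> \<one>[\<I>]"
    by (rule assoc_cancel_left) simp_all
  from tensor_unit_right_cancel[OF _ _ _ _ this] show ?thesis by simp
qed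

lemma lunit_assoc: "\<l>[a \<odot> b] \<bullet> \<a>[\<I>, a, b] = \<l>[a] \<otimes> \<one>[b]"
proof -
  have tri: "\<r>[X] \<otimes> \<one>[Y] = (\<one>[X] \<otimes> \<l>[Y]) \<bullet> \<a>[X, \<I>, Y]" for X Y using triangle by simp
  have n1: "(\<r>[\<I>] \<otimes> \<one>[a \<odot> b]) \<bullet> \<a>[\<I> \<odot> \<I>, a, b] = \<a>[\<I>, a, b] \<bullet> ((\<r>[\<I>] \<otimes> \<one>[a]) \<otimes> \<one>[b])"
    using assoc_naturality[of "\<r>[\<I>]" "\<one>[a]" "\<one>[b]"] by simp
  have n2: "\<a>[\<I>, a, b] \<bullet> ((\<one>[\<I>] \<otimes> \<l>[a]) \<otimes> \<one>[b]) = (\<one>[\<I>] \<otimes> (\<l>[a] \<otimes> \<one>[b])) \<bullet> \<a>[\<I>, \<I> \<odot> a, b]"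
    using assoc_naturality[of "\<one>[\<I>]" "\<l>[a]" "\<one>[b]"] by simp
  have "(\<one>[\<I>] \<otimes> (\<l>[a \<odot> b] \<bullet> \<a>[\<I>, a, b])) \<bullet> (\<a>[\<I>, \<I> \<odot> a, b] \<bullet> (\<a>[\<I>, \<I>, a] \<otimes> \<one>[b]))
      = (\<one>[\<I>] \<otimes> \<l>[a \<odot> b]) \<bullet> (\<a>[\<I>, \<I>, a \<odot> b] \<bullet> \<a>[\<I> \<odot> \<I>, a, b])"
    by (simp add: pentagon)
  also have "\<dots> = (\<r>[\<I>] \<otimes> \<one>[a \<odot> b]) \<bullet> \<a>[\<I> \<odot> \<I>, a, b]"
    by (simp add: triangle[THEN comp_ext21])
  also have "\<dots> = \<a>[\<I>, a, b] \<bullet> ((\<r>[\<I>] \<otimes> \<one>[a]) \<otimes> \<one>[b])" by (rule n1)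
  also have "\<dots> = \<a>[\<I>, a, b] \<bullet> ((\<one>[\<I>] \<otimes> \<l>[a]) \<otimes> \<one>[b]) \<bullet> (\<a>[\<I>, \<I>, a] \<otimes> \<one>[b])"
    by (simp add: tri)
  also have "\<dots> = (\<one>[\<I>] \<otimes> (\<l>[a] \<otimes> \<one>[b])) \<bullet> (\<a>[\<I>, \<I> \<odot> a, b] \<bullet> (\<a>[\<I>, \<I>, a] \<otimes> \<one>[b]))"
    by (simp add: n2[symmetric, THEN comp_ext22])
  finally have "\<one>[\<I>] \<otimes> (\<l>[a \<odot> b] \<bullet> \<a>[\<I>, a, b]) = \<one>[\<I>] \<otimes> (\<l>[a] \<otimes> \<one>[b])"
    by (rule split_epi_cancel[where q = "(\<a>\<^sup>-\<^sup>1[\<I>, \<I>, a] \<otimes> \<one>[b]) \<bullet> \<a>\<^sup>-\<^sup>1[\<I>, \<I> \<odot> a, b]"]) simp_all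
  from tensor_unit_left_cancel[OF _ _ _ _ this] show ?thesis by simp
qed

lemma runit_assoc_inv: "\<r>[a \<odot> b] \<bullet> \<a>\<^sup>-\<^sup>1[a, b, \<I>] = \<one>[a] \<otimes> \<r>[b]"
  by (simp add: assoc_runit[symmetric])

lemma lunit_assoc_inv: "(\<l>[a] \<otimes> \<one>[b]) \<bullet> \<a>\<^sup>-\<^sup>1[\<I>, a, b] = \<l>[a \<odot> b]"
  by (simp add: lunit_assoc[symmetric])

lemma triangle_inv: "(\<r>[X] \<otimes> \<one>[Y]) \<bullet> \<a>\<^sup>-\<^sup>1[X, \<I>, Y] = \<one>[X] \<otimes> \<l>[Y]"
  by (simp add: triangle[symmetric])

lemma lunit_unit_tensor: "\<l>[\<I> \<odot> \<I>] = \<one>[\<I>] \<otimes> \<l>[\<I>]"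
proof -
  have "\<l>[\<I>] \<bullet> \<l>[\<I> \<odot> \<I>] = \<l>[\<I>] \<bullet> (\<one>[\<I>] \<otimes> \<l>[\<I>])" using lunit_naturality[of "\<l>[\<I>]"] by simp
  thus ?thesis by (rule split_mono_cancel[where q = "\<l>\<^sup>-\<^sup>1[\<I>]"]) simp_all
qed

lemma lunit_unit_eq_runit_unit: "\<l>[\<I>] = \<r>[\<I>]"
proof -
  have "\<r>[\<I>] \<otimes> \<one>[\<I>] = \<l>[\<I>] \<otimes> \<one>[\<I>]"
    using triangle[of \<I> \<I>] lunit_assoc[of \<I> \<I>] lunit_unit_tensor by simp
  from tensor_unit_right_cancel[OF _ _ _ _ this] show ?thesis by simp
qed

lemma lunit_braid: "\<l>[a] \<bullet> \<s>[a, \<I>] = \<r>[a]"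
proof -
  have h: "\<a>[\<I>, \<I>, a] \<bullet> (\<s>[a, \<I> \<odot> \<I>] \<bullet> \<a>[a, \<I>, \<I>])
        = (\<one>[\<I>] \<otimes> \<s>[a, \<I>]) \<bullet> (\<a>[\<I>, a, \<I>] \<bullet> (\<s>[a, \<I>] \<otimes> \<one>[\<I>]))" by (rule hexagon)
  have n1: "\<s>[a, \<I>] \<bullet> (\<one>[a] \<otimes> \<l>[\<I>]) = (\<l>[\<I>] \<otimes> \<one>[a]) \<bullet> \<s>[a, \<I> \<odot> \<I>]"
    using braid_naturality[of "\<one>[a]" "\<l>[\<I>]"] by simp
  have n2: "\<l>[\<I> \<odot> a] \<bullet> (\<one>[\<I>] \<otimes> \<s>[a, \<I>]) = \<s>[a, \<I>] \<bullet> \<l>[a \<odot> \<I>]"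
    using lunit_naturality[of "\<s>[a, \<I>]"] by simp
  have "\<s>[a, \<I>] \<bullet> (\<r>[a] \<otimes> \<one>[\<I>]) = \<s>[a, \<I>] \<bullet> ((\<one>[a] \<otimes> \<l>[\<I>]) \<bullet> \<a>[a, \<I>, \<I>])"
    by (simp add: triangle)
  also have "\<dots> = (\<l>[\<I>] \<otimes> \<one>[a]) \<bullet> (\<s>[a, \<I> \<odot> \<I>] \<bullet> \<a>[a, \<I>, \<I>])"
    by (simp add: n1[THEN comp_ext22])
  also have "\<dots> = \<l>[\<I> \<odot> a] \<bullet> (\<a>[\<I>, \<I>, a] \<bullet> (\<s>[a, \<I> \<odot> \<I>] \<bullet> \<a>[a, \<I>, \<I>]))"
    by (simp add: lunit_assoc[THEN comp_ext21])
  also have "\<dots> = \<l>[\<I> \<odot> a] \<bullet> ((\<one>[\<I>] \<otimes> \<s>[a, \<I>]) \<bullet> (\<a>[\<I>, a, \<I>] \<bullet> (\<s>[a, \<I>] \<otimes> \<one>[\<I>])))"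
    by (simp only: h)
  also have "\<dots> = \<s>[a, \<I>] \<bullet> (\<l>[a \<odot> \<I>] \<bullet> (\<a>[\<I>, a, \<I>] \<bullet> (\<s>[a, \<I>] \<otimes> \<one>[\<I>])))"
    by (simp add: n2[THEN comp_ext22])
  also have "\<dots> = \<s>[a, \<I>] \<bullet> ((\<l>[a] \<bullet> \<s>[a, \<I>]) \<otimes> \<one>[\<I>])"
    by (simp add: lunit_assoc[THEN comp_ext21])
  finally have "\<r>[a] \<otimes> \<one>[\<I>] = (\<l>[a] \<bullet> \<s>[a, \<I>]) \<otimes> \<one>[\<I>]"
    by (rule split_mono_cancel[where q = "\<s>\<^sup>-\<^sup>1[a, \<I>]"]) simp_all
  from tensor_unit_right_cancel[OF _ _ _ _ this] show ?thesis by simp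
qed

lemma runit_braid: "\<r>[a] \<bullet> \<s>[\<I>, a] = \<l>[a]"
proof -
  have h: "\<a>\<^sup>-\<^sup>1[a, \<I>, \<I>] \<bullet> (\<s>[\<I> \<odot> \<I>, a] \<bullet> \<a>\<^sup>-\<^sup>1[\<I>, \<I>, a])
        = (\<s>[\<I>, a] \<otimes> \<one>[\<I>]) \<bullet> (\<a>\<^sup>-\<^sup>1[\<I>, a, \<I>] \<bullet> (\<one>[\<I>] \<otimes> \<s>[\<I>, a]))" by (rule hexagon_inv)
  have n1: "\<s>[\<I>, a] \<bullet> (\<r>[\<I>] \<otimes> \<one>[a]) = (\<one>[a] \<otimes> \<r>[\<I>]) \<bullet> \<s>[\<I> \<odot> \<I>, a]"
    using braid_naturality[of "\<r>[\<I>]" "\<one>[a]"] by simp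
  have n2: "\<r>[a \<odot> \<I>] \<bullet> (\<s>[\<I>, a] \<otimes> \<one>[\<I>]) = \<s>[\<I>, a] \<bullet> \<r>[\<I> \<odot> a]"
    using runit_naturality[of "\<s>[\<I>, a]"] by simp
  have "\<s>[\<I>, a] \<bullet> (\<one>[\<I>] \<otimes> \<l>[a]) = \<s>[\<I>, a] \<bullet> ((\<r>[\<I>] \<otimes> \<one>[a]) \<bullet> \<a>\<^sup>-\<^sup>1[\<I>, \<I>, a])"
    by (simp add: triangle_inv)
  also have "\<dots> = (\<one>[a] \<otimes> \<r>[\<I>]) \<bullet> (\<s>[\<I> \<odot> \<I>, a] \<bullet> \<a>\<^sup>-\<^sup>1[\<I>, \<I>, a])"
    by (simp add: n1[THEN comp_ext22])
  also have "\<dots> = \<r>[a \<odot> \<I>] \<bullet> (\<a>\<^sup>-\<^sup>1[a, \<I>, \<I>] \<bullet> (\<s>[\<I> \<odot> \<I>, a] \<bullet> \<a>\<^sup>-\<^sup>1[\<I>, \<I>, a]))"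
    by (simp add: runit_assoc_inv[THEN comp_ext21])
  also have "\<dots> = \<r>[a \<odot> \<I>] \<bullet> ((\<s>[\<I>, a] \<otimes> \<one>[\<I>]) \<bullet> (\<a>\<^sup>-\<^sup>1[\<I>, a, \<I>] \<bullet> (\<one>[\<I>] \<otimes> \<s>[\<I>, a])))"
    by (simp only: h)
  also have "\<dots> = \<s>[\<I>, a] \<bullet> (\<r>[\<I> \<odot> a] \<bullet> (\<a>\<^sup>-\<^sup>1[\<I>, a, \<I>] \<bullet> (\<one>[\<I>] \<otimes> \<s>[\<I>, a])))"
    by (simp add: n2[THEN comp_ext22])
  also have "\<dots> = \<s>[\<I>, a] \<bullet> (\<one>[\<I>] \<otimes> (\<r>[a] \<bullet> \<s>[\<I>, a]))"
    by (simp add: runit_assoc_inv[THEN comp_ext21])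
  finally have "\<one>[\<I>] \<otimes> \<l>[a] = \<one>[\<I>] \<otimes> (\<r>[a] \<bullet> \<s>[\<I>, a])"
    by (rule split_mono_cancel[where q = "\<s>\<^sup>-\<^sup>1[\<I>, a]"]) simp_all
  from tensor_unit_left_cancel[OF _ _ _ _ this] show ?thesis by simp
qed

section \<open>The exchange map\<close>

definition exchange ("\<x>[_, _, _]") where
  "\<x>[b, c, d] = \<a>[c, b, d] \<bullet> ((\<s>[b, c] \<otimes> \<one>[d]) \<bullet> \<a>\<^sup>-\<^sup>1[b, c, d])"

lemma exchange_typing[simp]: "Arr \<x>[b, c, d]" "Dm \<x>[b, c, d] = b \<odot> (c \<odot> d)"
  "Cd \<x>[b, c, d] = c \<odot> (b \<odot> d)"
  unfolding exchange_def by simp_all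

lemmas arr_typing = ident_typing comp_typing tensor_typing assoc_typing assoc_inv_typing
  lunit_typing lunit_inv_typing runit_typing runit_inv_typing braid_typing braid_inv_typing
    exchange_typing

lemma assoc_inv_naturality: "Arr f \<Longrightarrow> Arr g \<Longrightarrow> Arr h \<Longrightarrow>
  \<a>\<^sup>-\<^sup>1[Cd f, Cd g, Cd h] \<bullet> (f \<otimes> (g \<otimes> h)) = ((f \<otimes> g) \<otimes> h) \<bullet> \<a>\<^sup>-\<^sup>1[Dm f, Dm g, Dm h]"
proof -
  assume h: "Arr f" "Arr g" "Arr h"
  have "\<a>[Cd f, Cd g, Cd h] \<bullet> (\<a>\<^sup>-\<^sup>1[Cd f, Cd g, Cd h] \<bullet> (f \<otimes> (g \<otimes> h)))
      = \<a>[Cd f, Cd g, Cd h] \<bullet> (((f \<otimes> g) \<otimes> h) \<bullet> \<a>\<^sup>-\<^sup>1[Dm f, Dm g, Dm h])"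
    using h by (simp add: assoc_naturality[THEN comp_ext21])
  thus ?thesis by (rule split_mono_cancel[where q = "\<a>\<^sup>-\<^sup>1[Cd f, Cd g, Cd h]"]) (use h in simp_all)
qed

lemma pentagon_ext: "Arr k \<Longrightarrow> Cd k = ((W \<odot> X) \<odot> Y) \<odot> Z \<Longrightarrow> \<a>[W, X, Y \<odot> Z] \<bullet> (\<a>[W \<odot> X, Y, Z] \<bullet> k)
   = (\<one>[W] \<otimes> \<a>[X, Y, Z]) \<bullet> (\<a>[W, X \<odot> Y, Z] \<bullet> ((\<a>[W, X, Y] \<otimes> \<one>[Z]) \<bullet> k))"
  by (simp add: pentagon[THEN comp_ext22])

lemma pentagon_ext_sym: "Arr k \<Longrightarrow> Cd k = ((W \<odot> X) \<odot> Y) \<odot> Z \<Longrightarrow>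
   (\<one>[W] \<otimes> \<a>[X, Y, Z]) \<bullet> (\<a>[W, X \<odot> Y, Z] \<bullet> ((\<a>[W, X, Y] \<otimes> \<one>[Z]) \<bullet> k))
     = \<a>[W, X, Y \<odot> Z] \<bullet> (\<a>[W \<odot> X, Y, Z] \<bullet> k)"
  by (simp add: pentagon_ext)

lemma pentagon_solved:
  "\<a>\<^sup>-\<^sup>1[W, X, Y \<odot> Z] \<bullet> ((\<one>[W] \<otimes> \<a>[X, Y, Z]) \<bullet> \<a>[W, X \<odot> Y, Z])
    = \<a>[W \<odot> X, Y, Z] \<bullet> (\<a>\<^sup>-\<^sup>1[W, X, Y] \<otimes> \<one>[Z])"
  by (rule split_mono_cancel[where p = "\<a>[W, X, Y \<odot> Z]" and q = "\<a>\<^sup>-\<^sup>1[W, X, Y \<odot> Z]"])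
    (simp_all add: pentagon_ext)

lemma pentagon_inv: "\<a>\<^sup>-\<^sup>1[W \<odot> X, Y, Z] \<bullet> \<a>\<^sup>-\<^sup>1[W, X, Y \<odot> Z]
  = (\<a>\<^sup>-\<^sup>1[W, X, Y] \<otimes> \<one>[Z]) \<bullet> (\<a>\<^sup>-\<^sup>1[W, X \<odot> Y, Z] \<bullet> (\<one>[W] \<otimes> \<a>\<^sup>-\<^sup>1[X, Y, Z]))"
proof -
  have "\<a>[W, X, Y \<odot> Z] \<bullet>
    (\<a>[W \<odot> X, Y, Z] \<bullet> ((\<a>\<^sup>-\<^sup>1[W, X, Y] \<otimes> \<one>[Z]) \<bullet> (\<a>\<^sup>-\<^sup>1[W, X \<odot> Y, Z] \<bullet> (\<one>[W] \<otimes> \<a>\<^sup>-\<^sup>1[X, Y, Z]))))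
     = \<one>[W \<odot> (X \<odot> (Y \<odot> Z))]" by (simp add: pentagon_ext)
  hence "\<a>[W, X, Y \<odot> Z]
    \<bullet> (\<a>[W \<odot> X, Y, Z] \<bullet> ((\<a>\<^sup>-\<^sup>1[W, X, Y] \<otimes> \<one>[Z]) \<bullet> (\<a>\<^sup>-\<^sup>1[W, X \<odot> Y, Z] \<bullet> (\<one>[W] \<otimes> \<a>\<^sup>-\<^sup>1[X, Y, Z]))))
     = \<a>[W, X, Y \<odot> Z] \<bullet> (\<a>[W \<odot> X, Y, Z] \<bullet> (\<a>\<^sup>-\<^sup>1[W \<odot> X, Y, Z] \<bullet> \<a>\<^sup>-\<^sup>1[W, X, Y \<odot> Z]))" by simp
  hence "\<a>[W \<odot> X, Y, Z] \<bullet> ((\<a>\<^sup>-\<^sup>1[W, X, Y] \<otimes> \<one>[Z]) \<bullet> (\<a>\<^sup>-\<^sup>1[W, X \<odot> Y, Z] \<bullet> (\<one>[W] \<otimes> \<a>\<^sup>-\<^sup>1[X, Y, Z])))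
     = \<a>[W \<odot> X, Y, Z] \<bullet> (\<a>\<^sup>-\<^sup>1[W \<odot> X, Y, Z] \<bullet> \<a>\<^sup>-\<^sup>1[W, X, Y \<odot> Z])"
    by (rule split_mono_cancel[where q = "\<a>\<^sup>-\<^sup>1[W, X, Y \<odot> Z]"]) simp_all
  hence "(\<a>\<^sup>-\<^sup>1[W, X, Y] \<otimes> \<one>[Z]) \<bullet> (\<a>\<^sup>-\<^sup>1[W, X \<odot> Y, Z] \<bullet> (\<one>[W] \<otimes> \<a>\<^sup>-\<^sup>1[X, Y, Z]))
     = \<a>\<^sup>-\<^sup>1[W \<odot> X, Y, Z] \<bullet> \<a>\<^sup>-\<^sup>1[W, X, Y \<odot> Z]"
    by (rule split_mono_cancel[where q = "\<a>\<^sup>-\<^sup>1[W \<odot> X, Y, Z]"]) simp_all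
  thus ?thesis by simp
qed

lemma pentagon_inv_ext: "Arr k \<Longrightarrow> Cd k = W \<odot> (X \<odot> (Y \<odot> Z)) \<Longrightarrow>
   \<a>\<^sup>-\<^sup>1[W \<odot> X, Y, Z] \<bullet> (\<a>\<^sup>-\<^sup>1[W, X, Y \<odot> Z] \<bullet> k)
     = (\<a>\<^sup>-\<^sup>1[W, X, Y] \<otimes> \<one>[Z]) \<bullet> (\<a>\<^sup>-\<^sup>1[W, X \<odot> Y, Z] \<bullet> ((\<one>[W] \<otimes> \<a>\<^sup>-\<^sup>1[X, Y, Z]) \<bullet> k))"
  by (simp add: pentagon_inv[THEN comp_ext22])

lemma pentagon_inv_solved:
  "\<a>\<^sup>-\<^sup>1[W, X \<odot> Y, Z] \<bullet> (\<one>[W] \<otimes> \<a>\<^sup>-\<^sup>1[X, Y, Z])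
    = (\<a>[W, X, Y] \<otimes> \<one>[Z]) \<bullet> (\<a>\<^sup>-\<^sup>1[W \<odot> X, Y, Z] \<bullet> \<a>\<^sup>-\<^sup>1[W, X, Y \<odot> Z])"
  by (simp add: pentagon_inv)

lemma pentagon_solved':
  "\<a>[a, b \<odot> D, Z] \<bullet> ((\<a>[a, b, D] \<otimes> \<one>[Z]) \<bullet> \<a>\<^sup>-\<^sup>1[a \<odot> b, D, Z])
    = (\<one>[a] \<otimes> \<a>\<^sup>-\<^sup>1[b, D, Z]) \<bullet> \<a>[a, b, D \<odot> Z]"
  by (rule split_mono_cancel[where p = "\<one>[a] \<otimes> \<a>[b, D, Z]" and q = "\<one>[a] \<otimes> \<a>\<^sup>-\<^sup>1[b, D, Z]"])
    (simp_all add: pentagon_ext_sym)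

lemma pentagon_solved'_ext: "Arr k \<Longrightarrow> Cd k = (a \<odot> b) \<odot> (D \<odot> Z) \<Longrightarrow>
  \<a>[a, b \<odot> D, Z] \<bullet> ((\<a>[a, b, D] \<otimes> \<one>[Z]) \<bullet> (\<a>\<^sup>-\<^sup>1[a \<odot> b, D, Z] \<bullet> k))
    = (\<one>[a] \<otimes> \<a>\<^sup>-\<^sup>1[b, D, Z]) \<bullet> (\<a>[a, b, D \<odot> Z] \<bullet> k)"
  by (simp add: pentagon_solved'[THEN comp_ext32])

lemma pentagon_solved_peel: "Arr H \<Longrightarrow> Cd H = W \<odot> (X \<odot> Y) \<Longrightarrow>
  \<a>[W \<odot> X, Y, Z] \<bullet> ((\<a>\<^sup>-\<^sup>1[W, X, Y] \<bullet> H) \<otimes> \<one>[Z])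
    = \<a>\<^sup>-\<^sup>1[W, X, Y \<odot> Z] \<bullet> ((\<one>[W] \<otimes> \<a>[X, Y, Z]) \<bullet> (\<a>[W, X \<odot> Y, Z] \<bullet> (H \<otimes> \<one>[Z])))"
  by (simp add: pentagon_solved[THEN comp_ext32])

lemma pentagon_solved_peel_ext: "Arr H \<Longrightarrow> Cd H = W \<odot> (X \<odot> Y) \<Longrightarrow> Arr k \<Longrightarrow> Cd k = Dm H \<odot> Z \<Longrightarrow>
  \<a>[W \<odot> X, Y, Z] \<bullet> (((\<a>\<^sup>-\<^sup>1[W, X, Y] \<bullet> H) \<otimes> \<one>[Z]) \<bullet> k)
    = \<a>\<^sup>-\<^sup>1[W, X, Y \<odot> Z] \<bullet> ((\<one>[W] \<otimes> \<a>[X, Y, Z]) \<bullet> (\<a>[W, X \<odot> Y, Z] \<bullet> ((H \<otimes> \<one>[Z]) \<bullet> k)))"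
  by (simp add: pentagon_solved[THEN comp_ext32])

lemma hexagon_solved:
  "\<s>[X, Y \<odot> Z] \<bullet> \<a>[X, Y, Z] = \<a>\<^sup>-\<^sup>1[Y, Z, X] \<bullet> ((\<one>[Y] \<otimes> \<s>[X, Z]) \<bullet> (\<a>[Y, X, Z] \<bullet> (\<s>[X, Y] \<otimes> \<one>[Z])))"
proof -
  have "\<a>[Y, Z, X] \<bullet> (\<s>[X, Y \<odot> Z] \<bullet> \<a>[X, Y, Z])
    = \<a>[Y, Z, X] \<bullet> (\<a>\<^sup>-\<^sup>1[Y, Z, X] \<bullet> ((\<one>[Y] \<otimes> \<s>[X, Z]) \<bullet> (\<a>[Y, X, Z] \<bullet> (\<s>[X, Y] \<otimes> \<one>[Z]))))"
    using hexagon by simp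
  thus ?thesis by (rule split_mono_cancel[where q = "\<a>\<^sup>-\<^sup>1[Y, Z, X]"]) simp_all
qed

lemma hexagon_inv_solved:
  "\<s>[X \<odot> Y, Z] \<bullet> \<a>\<^sup>-\<^sup>1[X, Y, Z]
    = \<a>[Z, X, Y] \<bullet> ((\<s>[X, Z] \<otimes> \<one>[Y]) \<bullet> (\<a>\<^sup>-\<^sup>1[X, Z, Y] \<bullet> (\<one>[X] \<otimes> \<s>[Y, Z])))"
proof -
  have "\<a>\<^sup>-\<^sup>1[Z, X, Y] \<bullet> (\<s>[X \<odot> Y, Z] \<bullet> \<a>\<^sup>-\<^sup>1[X, Y, Z])
    = \<a>\<^sup>-\<^sup>1[Z, X, Y] \<bullet> (\<a>[Z, X, Y] \<bullet> ((\<s>[X, Z] \<otimes> \<one>[Y]) \<bullet> (\<a>\<^sup>-\<^sup>1[X, Z, Y] \<bullet> (\<one>[X] \<otimes> \<s>[Y, Z]))))"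
    using hexagon_inv by simp
  thus ?thesis by (rule split_mono_cancel[where q = "\<a>[Z, X, Y]"]) simp_all
qed

lemma assoc_naturality_right: "Arr G \<Longrightarrow> Cd G = Z \<Longrightarrow>
  \<a>[a, b, Z] \<bullet> (\<one>[a \<odot> b] \<otimes> G) = (\<one>[a] \<otimes> (\<one>[b] \<otimes> G)) \<bullet> \<a>[a, b, Dm G]"
  using assoc_naturality[of "\<one>[a]" "\<one>[b]" G] by simp

lemma assoc_naturality_right_ext: "Arr G \<Longrightarrow> Cd G = Z \<Longrightarrow> Arr k \<Longrightarrow> Cd k = (a \<odot> b) \<odot> Dm G \<Longrightarrow>
   \<a>[a, b, Z] \<bullet> ((\<one>[a \<odot> b] \<otimes> G) \<bullet> k) = (\<one>[a] \<otimes> (\<one>[b] \<otimes> G)) \<bullet> (\<a>[a, b, Dm G] \<bullet> k)"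
  by (simp add: assoc_naturality_right[THEN comp_ext22])

lemma assoc_inv_naturality_right: "Arr G \<Longrightarrow> Dm G = Z \<Longrightarrow>
  (\<one>[a \<odot> b] \<otimes> G) \<bullet> \<a>\<^sup>-\<^sup>1[a, b, Z] = \<a>\<^sup>-\<^sup>1[a, b, Cd G] \<bullet> (\<one>[a] \<otimes> (\<one>[b] \<otimes> G))"
  using assoc_inv_naturality[of "\<one>[a]" "\<one>[b]" G] by simp

lemma assoc_inv_naturality_right_ext: "Arr G \<Longrightarrow> Dm G = Z \<Longrightarrow> Arr k \<Longrightarrow> Cd k = a \<odot> (b \<odot> Dm G) \<Longrightarrow>
   (\<one>[a \<odot> b] \<otimes> G) \<bullet> (\<a>\<^sup>-\<^sup>1[a, b, Z] \<bullet> k) = \<a>\<^sup>-\<^sup>1[a, b, Cd G] \<bullet> ((\<one>[a] \<otimes> (\<one>[b] \<otimes> G)) \<bullet> k)"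
  by (simp add: assoc_inv_naturality_right[THEN comp_ext22])

lemma assoc_naturality_peel: "Arr f \<Longrightarrow> Arr g \<Longrightarrow> Arr H \<Longrightarrow> Cd f = X \<Longrightarrow> Cd g = Y \<Longrightarrow> Cd H = Dm f \<odot> Dm g \<Longrightarrow>
  \<a>[X, Y, Z] \<bullet> (((f \<otimes> g) \<bullet> H) \<otimes> \<one>[Z]) = (f \<otimes> (g \<otimes> \<one>[Z])) \<bullet> (\<a>[Dm f, Dm g, Z] \<bullet> (H \<otimes> \<one>[Z]))"
proof -
  assume h: "Arr f" "Arr g" "Arr H" "Cd f = X" "Cd g = Y" "Cd H = Dm f \<odot> Dm g"
  have n: "\<a>[X, Y, Z] \<bullet> ((f \<otimes> g) \<otimes> \<one>[Z]) = (f \<otimes> (g \<otimes> \<one>[Z])) \<bullet> \<a>[Dm f, Dm g, Z]"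
    using assoc_naturality[of f g "\<one>[Z]"] h by simp
  have "\<a>[X, Y, Z] \<bullet> (((f \<otimes> g) \<bullet> H) \<otimes> \<one>[Z]) = \<a>[X, Y, Z] \<bullet> (((f \<otimes> g) \<otimes> \<one>[Z]) \<bullet> (H \<otimes> \<one>[Z]))"
    using h by simp
  also have "\<dots> = (f \<otimes> (g \<otimes> \<one>[Z])) \<bullet> (\<a>[Dm f, Dm g, Z] \<bullet> (H \<otimes> \<one>[Z]))"
    using h by (simp only: n[THEN comp_ext22] arr_typing, (simp)?)
  finally show ?thesis .
qed

lemma assoc_naturality_peel_ext: "Arr f \<Longrightarrow> Arr g \<Longrightarrow> Arr H \<Longrightarrow> Cd f = X \<Longrightarrow> Cd g = Y \<Longrightarrow> Cd H = Dm f \<odot> Dm g \<Longrightarrow>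
  Arr k \<Longrightarrow> Cd k = Dm H \<odot> Z \<Longrightarrow>
  \<a>[X, Y, Z] \<bullet> ((((f \<otimes> g) \<bullet> H) \<otimes> \<one>[Z]) \<bullet> k)
    = (f \<otimes> (g \<otimes> \<one>[Z])) \<bullet> (\<a>[Dm f, Dm g, Z] \<bullet> ((H \<otimes> \<one>[Z]) \<bullet> k))"
  by (simp add: assoc_naturality_peel[THEN comp_ext22])

lemma exchange_naturality: "Arr f \<Longrightarrow> Arr g \<Longrightarrow> Arr h \<Longrightarrow>
  \<x>[Cd f, Cd g, Cd h] \<bullet> (f \<otimes> (g \<otimes> h)) = (g \<otimes> (f \<otimes> h)) \<bullet> \<x>[Dm f, Dm g, Dm h]"
proof -
  assume a: "Arr f" "Arr g" "Arr h"
  have n1: "\<a>\<^sup>-\<^sup>1[Cd f, Cd g, Cd h] \<bullet> (f \<otimes> (g \<otimes> h)) = ((f \<otimes> g) \<otimes> h) \<bullet> \<a>\<^sup>-\<^sup>1[Dm f, Dm g, Dm h]"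
    using assoc_inv_naturality a by simp
  have n2: "\<s>[Cd f, Cd g] \<bullet> (f \<otimes> g) = (g \<otimes> f) \<bullet> \<s>[Dm f, Dm g]" using braid_naturality a by simp
  have n3: "\<a>[Cd g, Cd f, Cd h] \<bullet> ((g \<otimes> f) \<otimes> h) = (g \<otimes> (f \<otimes> h)) \<bullet> \<a>[Dm g, Dm f, Dm h]"
    using assoc_naturality a by simp
  have "\<x>[Cd f, Cd g, Cd h] \<bullet> (f \<otimes> (g \<otimes> h))
     = \<a>[Cd g, Cd f, Cd h]
       \<bullet> ((\<s>[Cd f, Cd g] \<otimes> \<one>[Cd h]) \<bullet> (\<a>\<^sup>-\<^sup>1[Cd f, Cd g, Cd h] \<bullet> (f \<otimes> (g \<otimes> h))))"
    unfolding exchange_def using a by simp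
  also have "\<dots> = \<a>[Cd g, Cd f, Cd h]
    \<bullet> ((\<s>[Cd f, Cd g] \<otimes> \<one>[Cd h]) \<bullet> (((f \<otimes> g) \<otimes> h) \<bullet> \<a>\<^sup>-\<^sup>1[Dm f, Dm g, Dm h]))"
    by (simp only: n1)
  also have "\<dots> = \<a>[Cd g, Cd f, Cd h]
    \<bullet> ((((g \<otimes> f) \<otimes> h) \<bullet> (\<s>[Dm f, Dm g] \<otimes> \<one>[Dm h])) \<bullet> \<a>\<^sup>-\<^sup>1[Dm f, Dm g, Dm h])"
    using a by (simp add: n2)
  also have "\<dots> = (\<a>[Cd g, Cd f, Cd h] \<bullet> ((g \<otimes> f) \<otimes> h))
    \<bullet> ((\<s>[Dm f, Dm g] \<otimes> \<one>[Dm h]) \<bullet> \<a>\<^sup>-\<^sup>1[Dm f, Dm g, Dm h])"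
    using a by simp
  also have "\<dots> = (g \<otimes> (f \<otimes> h)) \<bullet> \<x>[Dm f, Dm g, Dm h]"
    unfolding n3 exchange_def using a by simp
  finally show ?thesis .
qed

lemma exchange_naturality_peel: "Arr G \<Longrightarrow> Cd G = Z \<Longrightarrow> Arr H \<Longrightarrow> Cd H = c \<odot> Dm G \<Longrightarrow>
  \<x>[b, c, Z] \<bullet> (\<one>[b] \<otimes> ((\<one>[c] \<otimes> G) \<bullet> H)) = (\<one>[c] \<otimes> (\<one>[b] \<otimes> G)) \<bullet> (\<x>[b, c, Dm G] \<bullet> (\<one>[b] \<otimes> H))"
proof -
  assume h: "Arr G" "Cd G = Z" "Arr H" "Cd H = c \<odot> Dm G"
  have n: "\<x>[b, c, Z] \<bullet> (\<one>[b] \<otimes> (\<one>[c] \<otimes> G)) = (\<one>[c] \<otimes> (\<one>[b] \<otimes> G)) \<bullet> \<x>[b, c, Dm G]"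
    using exchange_naturality[of "\<one>[b]" "\<one>[c]" G] h by simp
  have "\<x>[b, c, Z] \<bullet> (\<one>[b] \<otimes> ((\<one>[c] \<otimes> G) \<bullet> H)) = \<x>[b, c, Z] \<bullet> ((\<one>[b] \<otimes> (\<one>[c] \<otimes> G)) \<bullet> (\<one>[b] \<otimes> H))"
    using h by simp
  also have "\<dots> = (\<one>[c] \<otimes> (\<one>[b] \<otimes> G)) \<bullet> (\<x>[b, c, Dm G] \<bullet> (\<one>[b] \<otimes> H))"
    using h by (simp only: n[THEN comp_ext22] arr_typing, (simp)?)
  finally show ?thesis .
qed

lemma exchange_naturality_peel_ext: "Arr G \<Longrightarrow> Cd G = Z \<Longrightarrow> Arr H \<Longrightarrow> Cd H = c \<odot> Dm G \<Longrightarrow> Arr k \<Longrightarrow>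
  Cd k = b \<odot> Dm H \<Longrightarrow>
  \<x>[b, c, Z] \<bullet> ((\<one>[b] \<otimes> ((\<one>[c] \<otimes> G) \<bullet> H)) \<bullet> k)
    = (\<one>[c] \<otimes> (\<one>[b] \<otimes> G)) \<bullet> (\<x>[b, c, Dm G] \<bullet> ((\<one>[b] \<otimes> H) \<bullet> k))"
  by (simp add: exchange_naturality_peel[THEN comp_ext22])

lemma exchange_naturality_rpeel: "Arr G \<Longrightarrow> Arr H \<Longrightarrow> Dm G = Z \<Longrightarrow> Dm H = b \<odot> Cd G \<Longrightarrow> Arr k \<Longrightarrow>
  Cd k = b \<odot> (d \<odot> Z) \<Longrightarrow>
  (\<one>[d] \<otimes> (H \<bullet> (\<one>[b] \<otimes> G))) \<bullet> (\<x>[b, d, Z] \<bullet> k)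
    = (\<one>[d] \<otimes> H) \<bullet> (\<x>[b, d, Cd G] \<bullet> ((\<one>[b] \<otimes> (\<one>[d] \<otimes> G)) \<bullet> k))"
proof -
  assume h: "Arr G" "Arr H" "Dm G = Z" "Dm H = b \<odot> Cd G" "Arr k" "Cd k = b \<odot> (d \<odot> Z)"
  have n: "(\<one>[d] \<otimes> (\<one>[b] \<otimes> G)) \<bullet> \<x>[b, d, Z] = \<x>[b, d, Cd G] \<bullet> (\<one>[b] \<otimes> (\<one>[d] \<otimes> G))"
    using exchange_naturality[of "\<one>[b]" "\<one>[d]" G] h by simp
  have "(\<one>[d] \<otimes> (H \<bullet> (\<one>[b] \<otimes> G))) \<bullet> (\<x>[b, d, Z] \<bullet> k)
    = (\<one>[d] \<otimes> H) \<bullet> ((\<one>[d] \<otimes> (\<one>[b] \<otimes> G)) \<bullet> (\<x>[b, d, Z] \<bullet> k))"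
    using h by simp
  also have "\<dots> = (\<one>[d] \<otimes> H) \<bullet> (\<x>[b, d, Cd G] \<bullet> ((\<one>[b] \<otimes> (\<one>[d] \<otimes> G)) \<bullet> k))"
    using h by (simp only: n[THEN comp_ext22] arr_typing, (simp)?)
  finally show ?thesis .
qed

lemma exchange_assoc: "\<x>[b, c, d \<odot> e] \<bullet> ((\<one>[b] \<otimes> \<a>[c, d, e]) \<bullet> \<a>[b, c \<odot> d, e])
   = (\<one>[c] \<otimes> \<a>[b, d, e]) \<bullet> (\<a>[c, b \<odot> d, e] \<bullet> (\<x>[b, c, d] \<otimes> \<one>[e]))"
proof -
  have n: "(\<s>[b, c] \<otimes> \<one>[d \<odot> e]) \<bullet> \<a>[b \<odot> c, d, e] = \<a>[c \<odot> b, d, e] \<bullet> ((\<s>[b, c] \<otimes> \<one>[d]) \<otimes> \<one>[e])"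
    using assoc_naturality[of "\<s>[b, c]" "\<one>[d]" "\<one>[e]"] by simp
  show ?thesis unfolding exchange_def
    by (simp add: pentagon_solved n[THEN comp_ext22] pentagon_ext)
qed

lemma exchange_assoc_ext: "Arr k \<Longrightarrow> Cd k = (b \<odot> (c \<odot> d)) \<odot> e \<Longrightarrow>
  \<x>[b, c, d \<odot> e] \<bullet> ((\<one>[b] \<otimes> \<a>[c, d, e]) \<bullet> (\<a>[b, c \<odot> d, e] \<bullet> k))
   = (\<one>[c] \<otimes> \<a>[b, d, e]) \<bullet> (\<a>[c, b \<odot> d, e] \<bullet> ((\<x>[b, c, d] \<otimes> \<one>[e]) \<bullet> k))"
  by (simp add: exchange_assoc[THEN comp_ext32])

lemma exchange_assoc':
  "\<a>[d, b \<odot> e, g] \<bullet> ((\<x>[b, d, e] \<otimes> \<one>[g]) \<bullet> \<a>\<^sup>-\<^sup>1[b, d \<odot> e, g])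
    = (\<one>[d] \<otimes> \<a>\<^sup>-\<^sup>1[b, e, g]) \<bullet> (\<x>[b, d, e \<odot> g] \<bullet> (\<one>[b] \<otimes> \<a>[d, e, g]))"
proof -
  have "(\<one>[d] \<otimes> \<a>\<^sup>-\<^sup>1[b, e, g]) \<bullet> (\<x>[b, d, e \<odot> g] \<bullet> (\<one>[b] \<otimes> \<a>[d, e, g]))
     = (\<one>[d] \<otimes> \<a>\<^sup>-\<^sup>1[b, e, g])
       \<bullet> ((\<x>[b, d, e \<odot> g] \<bullet> ((\<one>[b] \<otimes> \<a>[d, e, g]) \<bullet> \<a>[b, d \<odot> e, g])) \<bullet> \<a>\<^sup>-\<^sup>1[b, d \<odot> e, g])"
    by simp
  also have "\<dots> = \<a>[d, b \<odot> e, g] \<bullet> ((\<x>[b, d, e] \<otimes> \<one>[g]) \<bullet> \<a>\<^sup>-\<^sup>1[b, d \<odot> e, g])"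
    by (simp only: exchange_assoc, simp)
  finally show ?thesis by simp
qed

lemma exchange_assoc'_ext: "Arr k \<Longrightarrow> Cd k = b \<odot> ((d \<odot> e) \<odot> g) \<Longrightarrow>
  \<a>[d, b \<odot> e, g] \<bullet> ((\<x>[b, d, e] \<otimes> \<one>[g]) \<bullet> (\<a>\<^sup>-\<^sup>1[b, d \<odot> e, g] \<bullet> k))
    = (\<one>[d] \<otimes> \<a>\<^sup>-\<^sup>1[b, e, g]) \<bullet> (\<x>[b, d, e \<odot> g] \<bullet> ((\<one>[b] \<otimes> \<a>[d, e, g]) \<bullet> k))"
  by (simp add: exchange_assoc'[THEN comp_ext32])

lemma exchange_tensor_middle:
  "\<a>[c, c', b \<odot> d] \<bullet> (\<x>[b, c \<odot> c', d] \<bullet> (\<one>[b] \<otimes> \<a>\<^sup>-\<^sup>1[c, c', d]))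
    = (\<one>[c] \<otimes> \<x>[b, c', d]) \<bullet> \<x>[b, c, c' \<odot> d]"
proof -
  have "\<a>[c, c', b \<odot> d] \<bullet> (\<x>[b, c \<odot> c', d] \<bullet> (\<one>[b] \<otimes> \<a>\<^sup>-\<^sup>1[c, c', d]))
     = \<a>[c, c', b \<odot> d] \<bullet> (\<a>[c \<odot> c', b, d]
       \<bullet> ((\<s>[b, c \<odot> c'] \<otimes> \<one>[d]) \<bullet> (\<a>\<^sup>-\<^sup>1[b, c \<odot> c', d] \<bullet> (\<one>[b] \<otimes> \<a>\<^sup>-\<^sup>1[c, c', d]))))"
    unfolding exchange_def by simp
  also have "\<dots> = \<a>[c, c', b \<odot> d]
    \<bullet> (\<a>[c \<odot> c', b, d] \<bullet> ((\<s>[b, c \<odot> c'] \<otimes> \<one>[d])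
      \<bullet> ((\<a>[b, c, c'] \<otimes> \<one>[d]) \<bullet> (\<a>\<^sup>-\<^sup>1[b \<odot> c, c', d] \<bullet> \<a>\<^sup>-\<^sup>1[b, c, c' \<odot> d]))))"
    by (simp add: pentagon_inv_solved)
  also have "\<dots> = \<a>[c, c', b \<odot> d]
    \<bullet> (\<a>[c \<odot> c', b, d] \<bullet> (((\<a>\<^sup>-\<^sup>1[c, c', b]
      \<bullet> ((\<one>[c] \<otimes> \<s>[b, c']) \<bullet> (\<a>[c, b, c'] \<bullet> (\<s>[b, c] \<otimes> \<one>[c'])))) \<otimes> \<one>[d])
        \<bullet> (\<a>\<^sup>-\<^sup>1[b \<odot> c, c', d] \<bullet> \<a>\<^sup>-\<^sup>1[b, c, c' \<odot> d])))"
    by (simp add: hexagon_solved)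
  also have "\<dots> = (\<one>[c] \<otimes> \<a>[c', b, d])
    \<bullet> (\<a>[c, c' \<odot> b, d] \<bullet> ((((\<one>[c] \<otimes> \<s>[b, c']) \<bullet> (\<a>[c, b, c'] \<bullet> (\<s>[b, c] \<otimes> \<one>[c']))) \<otimes> \<one>[d])
      \<bullet> (\<a>\<^sup>-\<^sup>1[b \<odot> c, c', d] \<bullet> \<a>\<^sup>-\<^sup>1[b, c, c' \<odot> d])))"
    by (simp add: pentagon_ext)
  also have "\<dots> = (\<one>[c] \<otimes> \<a>[c', b, d])
    \<bullet> (\<a>[c, c' \<odot> b, d] \<bullet> (((\<one>[c] \<otimes> \<s>[b, c']) \<otimes> \<one>[d])
      \<bullet> ((\<a>[c, b, c'] \<otimes> \<one>[d])
        \<bullet> (((\<s>[b, c] \<otimes> \<one>[c']) \<otimes> \<one>[d]) \<bullet> (\<a>\<^sup>-\<^sup>1[b \<odot> c, c', d] \<bullet> \<a>\<^sup>-\<^sup>1[b, c, c' \<odot> d])))))"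
    by simp
  also have "\<dots> = (\<one>[c] \<otimes> \<a>[c', b, d])
    \<bullet> ((\<one>[c] \<otimes> (\<s>[b, c'] \<otimes> \<one>[d]))
      \<bullet> (\<a>[c, b \<odot> c', d] \<bullet> ((\<a>[c, b, c'] \<otimes> \<one>[d])
        \<bullet> (\<a>\<^sup>-\<^sup>1[c \<odot> b, c', d] \<bullet> ((\<s>[b, c] \<otimes> \<one>[c' \<odot> d]) \<bullet> \<a>\<^sup>-\<^sup>1[b, c, c' \<odot> d])))))"
  proof -
    have n1: "\<a>[c, c' \<odot> b, d] \<bullet> ((\<one>[c] \<otimes> \<s>[b, c']) \<otimes> \<one>[d])
      = (\<one>[c] \<otimes> (\<s>[b, c'] \<otimes> \<one>[d])) \<bullet> \<a>[c, b \<odot> c', d]"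
      using assoc_naturality[of "\<one>[c]" "\<s>[b, c']" "\<one>[d]"] by simp
    have n2: "((\<s>[b, c] \<otimes> \<one>[c']) \<otimes> \<one>[d]) \<bullet> \<a>\<^sup>-\<^sup>1[b \<odot> c, c', d]
      = \<a>\<^sup>-\<^sup>1[c \<odot> b, c', d] \<bullet> (\<s>[b, c] \<otimes> \<one>[c' \<odot> d])"
      using assoc_inv_naturality[of "\<s>[b, c]" "\<one>[c']" "\<one>[d]"] by simp
    show ?thesis
      by (simp only: n1[THEN comp_ext22] n2[THEN comp_ext22] arr_typing, (simp)?)
  qed
  also have "\<dots> = (\<one>[c] \<otimes> \<a>[c', b, d])
    \<bullet> ((\<one>[c] \<otimes> (\<s>[b, c'] \<otimes> \<one>[d]))
      \<bullet> ((\<one>[c] \<otimes> \<a>\<^sup>-\<^sup>1[b, c', d])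
        \<bullet> (\<a>[c, b, c' \<odot> d] \<bullet> ((\<s>[b, c] \<otimes> \<one>[c' \<odot> d]) \<bullet> \<a>\<^sup>-\<^sup>1[b, c, c' \<odot> d]))))"
  proof -
    have p: "\<a>[c, b \<odot> c', d] \<bullet> ((\<a>[c, b, c'] \<otimes> \<one>[d]) \<bullet> \<a>\<^sup>-\<^sup>1[c \<odot> b, c', d])
      = (\<one>[c] \<otimes> \<a>\<^sup>-\<^sup>1[b, c', d]) \<bullet> \<a>[c, b, c' \<odot> d]"
      by (rule split_mono_cancel[where p = "\<one>[c] \<otimes> \<a>[b, c', d]" and q = "\<one>[c] \<otimes> \<a>\<^sup>-\<^sup>1[b, c', d]"])
        (simp_all add: pentagon_ext_sym)
    show ?thesis by (simp only: p[THEN comp_ext32] arr_typing, (simp)?)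
  qed
  also have "\<dots> = (\<one>[c] \<otimes> \<x>[b, c', d]) \<bullet> \<x>[b, c, c' \<odot> d]"
    unfolding exchange_def by simp
  finally show ?thesis .
qed

lemma exchange_tensor_middle':
  "\<x>[b, c \<odot> e, D] \<bullet> (\<one>[b] \<otimes> \<a>\<^sup>-\<^sup>1[c, e, D])
    = \<a>\<^sup>-\<^sup>1[c, e, b \<odot> D] \<bullet> ((\<one>[c] \<otimes> \<x>[b, e, D]) \<bullet> \<x>[b, c, e \<odot> D])"
proof -
  have "\<a>[c, e, b \<odot> D] \<bullet> (\<x>[b, c \<odot> e, D] \<bullet> (\<one>[b] \<otimes> \<a>\<^sup>-\<^sup>1[c, e, D]))
    = \<a>[c, e, b \<odot> D] \<bullet> (\<a>\<^sup>-\<^sup>1[c, e, b \<odot> D] \<bullet> ((\<one>[c] \<otimes> \<x>[b, e, D]) \<bullet> \<x>[b, c, e \<odot> D]))"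
    using exchange_tensor_middle by simp
  thus ?thesis by (rule split_mono_cancel[where q = "\<a>\<^sup>-\<^sup>1[c, e, b \<odot> D]"]) simp_all
qed

lemma exchange_tensor_middle'':
  "(\<one>[c] \<otimes> \<x>[b, c', d]) \<bullet> (\<x>[b, c, c' \<odot> d] \<bullet> (\<one>[b] \<otimes> \<a>[c, c', d]))
    = \<a>[c, c', b \<odot> d] \<bullet> \<x>[b, c \<odot> c', d]"
proof -
  have "\<a>[c, c', b \<odot> d] \<bullet> \<x>[b, c \<odot> c', d]
    = (\<a>[c, c', b \<odot> d] \<bullet> (\<x>[b, c \<odot> c', d] \<bullet> (\<one>[b] \<otimes> \<a>\<^sup>-\<^sup>1[c, c', d]))) \<bullet> (\<one>[b] \<otimes> \<a>[c, c', d])"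
    by simp
  also have "\<dots> = (\<one>[c] \<otimes> \<x>[b, c', d]) \<bullet> (\<x>[b, c, c' \<odot> d] \<bullet> (\<one>[b] \<otimes> \<a>[c, c', d]))"
    by (simp only: exchange_tensor_middle, simp)
  finally show ?thesis by simp
qed

lemma exchange_tensor_middle_peel: "Arr H \<Longrightarrow> Cd H = c \<odot> (e \<odot> D) \<Longrightarrow>
  \<x>[b, c \<odot> e, D] \<bullet> (\<one>[b] \<otimes> (\<a>\<^sup>-\<^sup>1[c, e, D] \<bullet> H))
    = \<a>\<^sup>-\<^sup>1[c, e, b \<odot> D] \<bullet> ((\<one>[c] \<otimes> \<x>[b, e, D]) \<bullet> (\<x>[b, c, e \<odot> D] \<bullet> (\<one>[b] \<otimes> H)))"
proof -
  assume h: "Arr H" "Cd H = c \<odot> (e \<odot> D)"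
  have "\<x>[b, c \<odot> e, D] \<bullet> (\<one>[b] \<otimes> (\<a>\<^sup>-\<^sup>1[c, e, D] \<bullet> H))
    = \<x>[b, c \<odot> e, D] \<bullet> ((\<one>[b] \<otimes> \<a>\<^sup>-\<^sup>1[c, e, D]) \<bullet> (\<one>[b] \<otimes> H))"
    using h by simp
  also have "\<dots> = \<a>\<^sup>-\<^sup>1[c, e, b \<odot> D] \<bullet> ((\<one>[c] \<otimes> \<x>[b, e, D]) \<bullet> (\<x>[b, c, e \<odot> D] \<bullet> (\<one>[b] \<otimes> H)))"
    using h by (simp only: exchange_tensor_middle'[THEN comp_ext22] arr_typing, (simp)?)
  finally show ?thesis .
qed

lemma exchange_tensor_middle_peel_ext: "Arr H \<Longrightarrow> Cd H = c \<odot> (e \<odot> D) \<Longrightarrow> Arr k \<Longrightarrow> Cd k = b \<odot> Dm H \<Longrightarrow>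
  \<x>[b, c \<odot> e, D] \<bullet> ((\<one>[b] \<otimes> (\<a>\<^sup>-\<^sup>1[c, e, D] \<bullet> H)) \<bullet> k)
    = \<a>\<^sup>-\<^sup>1[c, e, b \<odot> D] \<bullet> ((\<one>[c] \<otimes> \<x>[b, e, D]) \<bullet> (\<x>[b, c, e \<odot> D] \<bullet> ((\<one>[b] \<otimes> H) \<bullet> k)))"
  by (simp add: exchange_tensor_middle_peel[THEN comp_ext22])

lemma exchange_tensor_left:
  "(\<one>[c] \<otimes> \<a>[b, b', d]) \<bullet> (\<x>[b \<odot> b', c, d] \<bullet> \<a>\<^sup>-\<^sup>1[b, b', c \<odot> d])
    = \<x>[b, c, b' \<odot> d] \<bullet> (\<one>[b] \<otimes> \<x>[b', c, d])"
proof -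
  have "(\<one>[c] \<otimes> \<a>[b, b', d]) \<bullet> (\<x>[b \<odot> b', c, d] \<bullet> \<a>\<^sup>-\<^sup>1[b, b', c \<odot> d])
     = (\<one>[c] \<otimes> \<a>[b, b', d])
       \<bullet> (\<a>[c, b \<odot> b', d] \<bullet> ((\<s>[b \<odot> b', c] \<otimes> \<one>[d]) \<bullet> (\<a>\<^sup>-\<^sup>1[b \<odot> b', c, d] \<bullet> \<a>\<^sup>-\<^sup>1[b, b', c \<odot> d])))"
    unfolding exchange_def by simp
  also have "\<dots> = (\<one>[c] \<otimes> \<a>[b, b', d])
    \<bullet> (\<a>[c, b \<odot> b', d] \<bullet> (((\<s>[b \<odot> b', c] \<bullet> \<a>\<^sup>-\<^sup>1[b, b', c]) \<otimes> \<one>[d])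
      \<bullet> (\<a>\<^sup>-\<^sup>1[b, b' \<odot> c, d] \<bullet> (\<one>[b] \<otimes> \<a>\<^sup>-\<^sup>1[b', c, d]))))"
    by (simp add: pentagon_inv pentagon_inv_ext)
  also have "\<dots> = (\<one>[c] \<otimes> \<a>[b, b', d])
    \<bullet> (\<a>[c, b \<odot> b', d] \<bullet> ((\<a>[c, b, b'] \<otimes> \<one>[d])
      \<bullet> (((\<s>[b, c] \<otimes> \<one>[b']) \<bullet> (\<a>\<^sup>-\<^sup>1[b, c, b'] \<bullet> (\<one>[b] \<otimes> \<s>[b', c]))) \<otimes> \<one>[d])
        \<bullet> (\<a>\<^sup>-\<^sup>1[b, b' \<odot> c, d] \<bullet> (\<one>[b] \<otimes> \<a>\<^sup>-\<^sup>1[b', c, d]))))"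
    by (simp add: hexagon_inv_solved)
  also have "\<dots> = \<a>[c, b, b' \<odot> d]
    \<bullet> (\<a>[c \<odot> b, b', d] \<bullet> (((\<s>[b, c] \<otimes> \<one>[b']) \<bullet> (\<a>\<^sup>-\<^sup>1[b, c, b'] \<bullet> (\<one>[b] \<otimes> \<s>[b', c]))) \<otimes> \<one>[d])
      \<bullet> (\<a>\<^sup>-\<^sup>1[b, b' \<odot> c, d] \<bullet> (\<one>[b] \<otimes> \<a>\<^sup>-\<^sup>1[b', c, d])))"
    by (simp only: pentagon_ext_sym arr_typing, (simp)?)
  also have "\<dots> = \<a>[c, b, b' \<odot> d]
    \<bullet> (\<a>[c \<odot> b, b', d] \<bullet> (((\<s>[b, c] \<otimes> \<one>[b']) \<otimes> \<one>[d])
      \<bullet> ((\<a>\<^sup>-\<^sup>1[b, c, b'] \<otimes> \<one>[d])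
        \<bullet> (((\<one>[b] \<otimes> \<s>[b', c]) \<otimes> \<one>[d]) \<bullet> (\<a>\<^sup>-\<^sup>1[b, b' \<odot> c, d] \<bullet> (\<one>[b] \<otimes> \<a>\<^sup>-\<^sup>1[b', c, d]))))))"
    by simp
  also have "\<dots> = \<a>[c, b, b' \<odot> d]
    \<bullet> ((\<s>[b, c] \<otimes> \<one>[b' \<odot> d])
      \<bullet> (\<a>[b \<odot> c, b', d] \<bullet> ((\<a>\<^sup>-\<^sup>1[b, c, b'] \<otimes> \<one>[d])
        \<bullet> (\<a>\<^sup>-\<^sup>1[b, c \<odot> b', d] \<bullet> ((\<one>[b] \<otimes> (\<s>[b', c] \<otimes> \<one>[d])) \<bullet> (\<one>[b] \<otimes> \<a>\<^sup>-\<^sup>1[b', c, d]))))))"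
  proof -
    have n1: "\<a>[c \<odot> b, b', d] \<bullet> ((\<s>[b, c] \<otimes> \<one>[b']) \<otimes> \<one>[d])
      = (\<s>[b, c] \<otimes> \<one>[b' \<odot> d]) \<bullet> \<a>[b \<odot> c, b', d]"
      using assoc_naturality[of "\<s>[b, c]" "\<one>[b']" "\<one>[d]"] by simp
    have n2: "((\<one>[b] \<otimes> \<s>[b', c]) \<otimes> \<one>[d]) \<bullet> \<a>\<^sup>-\<^sup>1[b, b' \<odot> c, d]
      = \<a>\<^sup>-\<^sup>1[b, c \<odot> b', d] \<bullet> (\<one>[b] \<otimes> (\<s>[b', c] \<otimes> \<one>[d]))"
      using assoc_inv_naturality[of "\<one>[b]" "\<s>[b', c]" "\<one>[d]"] by simp
    show ?thesis by (simp only: n1[THEN comp_ext22] n2[THEN comp_ext22] arr_typing, (simp)?)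
  qed
  also have "\<dots> = \<a>[c, b, b' \<odot> d]
    \<bullet> ((\<s>[b, c] \<otimes> \<one>[b' \<odot> d])
      \<bullet> (\<a>\<^sup>-\<^sup>1[b, c, b' \<odot> d]
        \<bullet> ((\<one>[b] \<otimes> \<a>[c, b', d]) \<bullet> ((\<one>[b] \<otimes> (\<s>[b', c] \<otimes> \<one>[d])) \<bullet> (\<one>[b] \<otimes> \<a>\<^sup>-\<^sup>1[b', c, d])))))"
  proof -
    have p: "\<a>[b \<odot> c, b', d] \<bullet> ((\<a>\<^sup>-\<^sup>1[b, c, b'] \<otimes> \<one>[d]) \<bullet> \<a>\<^sup>-\<^sup>1[b, c \<odot> b', d])
      = \<a>\<^sup>-\<^sup>1[b, c, b' \<odot> d] \<bullet> (\<one>[b] \<otimes> \<a>[c, b', d])"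
      by (rule split_mono_cancel[where p = "\<a>[b, c, b' \<odot> d]" and q = "\<a>\<^sup>-\<^sup>1[b, c, b' \<odot> d]"])
        (simp_all add: pentagon_ext)
    show ?thesis by (simp only: p[THEN comp_ext32] arr_typing, (simp)?)
  qed
  also have "\<dots> = \<x>[b, c, b' \<odot> d] \<bullet> (\<one>[b] \<otimes> \<x>[b', c, d])"
    unfolding exchange_def by simp
  finally show ?thesis .
qed

lemma exchange_tensor_left':
  "\<x>[b, e, d \<odot> f] \<bullet> ((\<one>[b] \<otimes> \<x>[d, e, f]) \<bullet> \<a>[b, d, e \<odot> f]) = (\<one>[e] \<otimes> \<a>[b, d, f]) \<bullet> \<x>[b \<odot> d, e, f]"
proof -
  have "(\<one>[e] \<otimes> \<a>[b, d, f]) \<bullet> \<x>[b \<odot> d, e, f]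
    = ((\<one>[e] \<otimes> \<a>[b, d, f]) \<bullet> (\<x>[b \<odot> d, e, f] \<bullet> \<a>\<^sup>-\<^sup>1[b, d, e \<odot> f])) \<bullet> \<a>[b, d, e \<odot> f]"
    by simp
  also have "\<dots> = \<x>[b, e, d \<odot> f] \<bullet> ((\<one>[b] \<otimes> \<x>[d, e, f]) \<bullet> \<a>[b, d, e \<odot> f])"
    by (simp only: exchange_tensor_left, simp)
  finally show ?thesis by simp
qed

lemma exchange_tensor_left'_ext: "Arr k \<Longrightarrow> Cd k = (b \<odot> d) \<odot> (e \<odot> f) \<Longrightarrow>
  \<x>[b, e, d \<odot> f] \<bullet> ((\<one>[b] \<otimes> \<x>[d, e, f]) \<bullet> (\<a>[b, d, e \<odot> f] \<bullet> k))
    = (\<one>[e] \<otimes> \<a>[b, d, f]) \<bullet> (\<x>[b \<odot> d, e, f] \<bullet> k)"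
  by (simp add: exchange_tensor_left'[THEN comp_ext32])

lemma exchange_tensor_left'':
  "\<x>[b \<odot> b', c, d] = (\<one>[c] \<otimes> \<a>\<^sup>-\<^sup>1[b, b', d])
    \<bullet> (\<x>[b, c, b' \<odot> d] \<bullet> ((\<one>[b] \<otimes> \<x>[b', c, d]) \<bullet> \<a>[b, b', c \<odot> d]))"
proof -
  have "\<x>[b \<odot> b', c, d]
    = (\<one>[c] \<otimes> \<a>\<^sup>-\<^sup>1[b, b', d])
      \<bullet> (((\<one>[c] \<otimes> \<a>[b, b', d]) \<bullet> (\<x>[b \<odot> b', c, d] \<bullet> \<a>\<^sup>-\<^sup>1[b, b', c \<odot> d])) \<bullet> \<a>[b, b', c \<odot> d])"
    by simp
  also have "\<dots> = (\<one>[c] \<otimes> \<a>\<^sup>-\<^sup>1[b, b', d])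
    \<bullet> (\<x>[b, c, b' \<odot> d] \<bullet> ((\<one>[b] \<otimes> \<x>[b', c, d]) \<bullet> \<a>[b, b', c \<odot> d]))"
    by (simp only: exchange_tensor_left, simp)
  finally show ?thesis .
qed

section \<open>The middle-four interchange\<close>

lemma mid_exchange: "mid C a b c d = \<a>\<^sup>-\<^sup>1[a, c, b \<odot> d] \<bullet> ((\<one>[a] \<otimes> \<x>[b, c, d]) \<bullet> \<a>[a, b, c \<odot> d])"
  unfolding mid_def exchange_def by simp

lemma mid_typing[simp]: "Arr (mid C a b c d)" "Dm (mid C a b c d) = (a \<odot> b) \<odot> (c \<odot> d)"
  "Cd (mid C a b c d) = (a \<odot> c) \<odot> (b \<odot> d)"
  unfolding mid_exchange by simp_all

lemma mid_naturality: "Arr f \<Longrightarrow> Arr g \<Longrightarrow> Arr h \<Longrightarrow> Arr k \<Longrightarrow>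
  mid C (Cd f) (Cd g) (Cd h) (Cd k) \<bullet> ((f \<otimes> g) \<otimes> (h \<otimes> k))
    = ((f \<otimes> h) \<otimes> (g \<otimes> k)) \<bullet> mid C (Dm f) (Dm g) (Dm h) (Dm k)"
proof -
  assume a: "Arr f" "Arr g" "Arr h" "Arr k"
  have n1: "\<a>[Cd f, Cd g, Cd h \<odot> Cd k] \<bullet> ((f \<otimes> g) \<otimes> (h \<otimes> k))
    = (f \<otimes> (g \<otimes> (h \<otimes> k))) \<bullet> \<a>[Dm f, Dm g, Dm h \<odot> Dm k]"
    using assoc_naturality[of f g "h \<otimes> k"] a by simp
  have n2: "\<x>[Cd g, Cd h, Cd k] \<bullet> (g \<otimes> (h \<otimes> k)) = (h \<otimes> (g \<otimes> k)) \<bullet> \<x>[Dm g, Dm h, Dm k]"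
    using exchange_naturality a by simp
  have n3: "\<a>\<^sup>-\<^sup>1[Cd f, Cd h, Cd g \<odot> Cd k] \<bullet> (f \<otimes> (h \<otimes> (g \<otimes> k)))
    = ((f \<otimes> h) \<otimes> (g \<otimes> k)) \<bullet> \<a>\<^sup>-\<^sup>1[Dm f, Dm h, Dm g \<odot> Dm k]"
    using assoc_inv_naturality[of f h "g \<otimes> k"] a by simp
  have "mid C (Cd f) (Cd g) (Cd h) (Cd k) \<bullet> ((f \<otimes> g) \<otimes> (h \<otimes> k))
     = \<a>\<^sup>-\<^sup>1[Cd f, Cd h, Cd g \<odot> Cd k]
       \<bullet> ((\<one>[Cd f] \<otimes> \<x>[Cd g, Cd h, Cd k]) \<bullet> (\<a>[Cd f, Cd g, Cd h \<odot> Cd k] \<bullet> ((f \<otimes> g) \<otimes> (h \<otimes> k))))"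
    unfolding mid_exchange using a by simp
  also have "\<dots> = \<a>\<^sup>-\<^sup>1[Cd f, Cd h, Cd g \<odot> Cd k]
    \<bullet> ((\<one>[Cd f] \<otimes> \<x>[Cd g, Cd h, Cd k]) \<bullet> ((f \<otimes> (g \<otimes> (h \<otimes> k))) \<bullet> \<a>[Dm f, Dm g, Dm h \<odot> Dm k]))"
    by (simp only: n1)
  also have "\<dots> = \<a>\<^sup>-\<^sup>1[Cd f, Cd h, Cd g \<odot> Cd k]
    \<bullet> ((f \<otimes> (\<x>[Cd g, Cd h, Cd k] \<bullet> (g \<otimes> (h \<otimes> k)))) \<bullet> \<a>[Dm f, Dm g, Dm h \<odot> Dm k])"
    using a by simp
  also have "\<dots> = \<a>\<^sup>-\<^sup>1[Cd f, Cd h, Cd g \<odot> Cd k]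
    \<bullet> ((f \<otimes> ((h \<otimes> (g \<otimes> k)) \<bullet> \<x>[Dm g, Dm h, Dm k])) \<bullet> \<a>[Dm f, Dm g, Dm h \<odot> Dm k])"
    by (simp only: n2)
  also have "\<dots> = (\<a>\<^sup>-\<^sup>1[Cd f, Cd h, Cd g \<odot> Cd k] \<bullet> (f \<otimes> (h \<otimes> (g \<otimes> k))))
    \<bullet> ((\<one>[Dm f] \<otimes> \<x>[Dm g, Dm h, Dm k]) \<bullet> \<a>[Dm f, Dm g, Dm h \<odot> Dm k])"
    using a by simp
  also have "\<dots> = ((f \<otimes> h) \<otimes> (g \<otimes> k)) \<bullet> mid C (Dm f) (Dm g) (Dm h) (Dm k)"
    unfolding n3 mid_exchange using a by simp
  finally show ?thesis .
qed

text \<open>Coherence of the middle-four interchange with the associator, in two arrangements: the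
  first yields associativity of the tensor product of monoids, the second makes the associator a
  monoid morphism.\<close>

lemma mid_assoc_lhs: "(\<a>[a, c, e] \<otimes> \<a>[b, d, f])
  \<bullet> (mid C (a \<odot> c) (b \<odot> d) e f \<bullet> (mid C a b c d \<otimes> \<one>[e \<odot> f]))
  = (\<a>[a, c, e] \<otimes> \<a>[b, d, f])
    \<bullet> (\<a>\<^sup>-\<^sup>1[a \<odot> c, e, (b \<odot> d) \<odot> f]
      \<bullet> ((\<one>[a \<odot> c] \<otimes> \<x>[b \<odot> d, e, f])
        \<bullet> (\<a>\<^sup>-\<^sup>1[a, c, (b \<odot> d) \<odot> (e \<odot> f)]
          \<bullet> ((\<one>[a] \<otimes> (\<a>[c, b \<odot> d, e \<odot> f] \<bullet> (\<x>[b, c, d] \<otimes> \<one>[e \<odot> f])))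
            \<bullet> (\<a>[a, b \<odot> (c \<odot> d), e \<odot> f] \<bullet> (\<a>[a, b, c \<odot> d] \<otimes> \<one>[e \<odot> f]))))))"
  unfolding mid_exchange
  by (simp add: pentagon_solved_peel pentagon_solved_peel_ext assoc_naturality_peel
    assoc_naturality_peel_ext)

lemma mid_assoc_rhs: "mid C a b (c \<odot> e) (d \<odot> f)
  \<bullet> ((\<one>[a \<odot> b] \<otimes> mid C c d e f) \<bullet> \<a>[a \<odot> b, c \<odot> d, e \<odot> f])
  = \<a>\<^sup>-\<^sup>1[a, c \<odot> e, b \<odot> (d \<odot> f)]
    \<bullet> ((\<one>[a] \<otimes> (\<a>\<^sup>-\<^sup>1[c, e, b \<odot> (d \<odot> f)]
      \<bullet> ((\<one>[c] \<otimes> ((\<one>[e] \<otimes> \<a>[b, d, f]) \<bullet> \<x>[b \<odot> d, e, f]))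
        \<bullet> (\<a>[c, b \<odot> d, e \<odot> f] \<bullet> (\<x>[b, c, d] \<otimes> \<one>[e \<odot> f])))))
          \<bullet> (\<a>[a, b \<odot> (c \<odot> d), e \<odot> f] \<bullet> (\<a>[a, b, c \<odot> d] \<otimes> \<one>[e \<odot> f])))"
  unfolding mid_exchange
  by (simp add: assoc_naturality_right assoc_naturality_right_ext pentagon pentagon_ext
    exchange_tensor_middle_peel exchange_tensor_middle_peel_ext exchange_naturality_peel
      exchange_naturality_peel_ext exchange_assoc exchange_assoc_ext exchange_tensor_left'
        exchange_tensor_left'_ext)

lemma mid_assoc_middle: "Arr g \<Longrightarrow> Dm g = (b \<odot> d) \<odot> (e \<odot> f) \<Longrightarrow> Cd g = e \<odot> ((b \<odot> d) \<odot> f) \<Longrightarrow>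
  (\<a>[a, c, e] \<otimes> \<a>[b, d, f])
    \<bullet> (\<a>\<^sup>-\<^sup>1[a \<odot> c, e, (b \<odot> d) \<odot> f] \<bullet> ((\<one>[a \<odot> c] \<otimes> g) \<bullet> \<a>\<^sup>-\<^sup>1[a, c, (b \<odot> d) \<odot> (e \<odot> f)]))
  = \<a>\<^sup>-\<^sup>1[a, c \<odot> e, b \<odot> (d \<odot> f)]
    \<bullet> (\<one>[a] \<otimes> (\<a>\<^sup>-\<^sup>1[c, e, b \<odot> (d \<odot> f)] \<bullet> (\<one>[c] \<otimes> ((\<one>[e] \<otimes> \<a>[b, d, f]) \<bullet> g))))"
proof -
  assume g: "Arr g" "Dm g = (b \<odot> d) \<odot> (e \<odot> f)" "Cd g = e \<odot> ((b \<odot> d) \<odot> f)"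
  have n1: "(\<one>[(a \<odot> c) \<odot> e] \<otimes> \<a>[b, d, f]) \<bullet> \<a>\<^sup>-\<^sup>1[a \<odot> c, e, (b \<odot> d) \<odot> f]
    = \<a>\<^sup>-\<^sup>1[a \<odot> c, e, b \<odot> (d \<odot> f)] \<bullet> (\<one>[a \<odot> c] \<otimes> (\<one>[e] \<otimes> \<a>[b, d, f]))"
    by (simp add: assoc_inv_naturality_right)
  have n2: "(\<one>[a \<odot> c] \<otimes> ((\<one>[e] \<otimes> \<a>[b, d, f]) \<bullet> g)) \<bullet> \<a>\<^sup>-\<^sup>1[a, c, (b \<odot> d) \<odot> (e \<odot> f)]
    = \<a>\<^sup>-\<^sup>1[a, c, e \<odot> (b \<odot> (d \<odot> f))] \<bullet> (\<one>[a] \<otimes> (\<one>[c] \<otimes> ((\<one>[e] \<otimes> \<a>[b, d, f]) \<bullet> g)))"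
    using g by (simp add: assoc_inv_naturality_right)
  have p: "(\<a>[a, c, e] \<otimes> \<one>[W]) \<bullet> (\<a>\<^sup>-\<^sup>1[a \<odot> c, e, W] \<bullet> \<a>\<^sup>-\<^sup>1[a, c, e \<odot> W])
    = \<a>\<^sup>-\<^sup>1[a, c \<odot> e, W] \<bullet> (\<one>[a] \<otimes> \<a>\<^sup>-\<^sup>1[c, e, W])" for W
    by (simp add: pentagon_inv)
  have "(\<a>[a, c, e] \<otimes> \<a>[b, d, f])
    \<bullet> (\<a>\<^sup>-\<^sup>1[a \<odot> c, e, (b \<odot> d) \<odot> f] \<bullet> ((\<one>[a \<odot> c] \<otimes> g) \<bullet> \<a>\<^sup>-\<^sup>1[a, c, (b \<odot> d) \<odot> (e \<odot> f)]))
     = (\<a>[a, c, e] \<otimes> \<one>[b \<odot> (d \<odot> f)])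
       \<bullet> ((\<one>[(a \<odot> c) \<odot> e] \<otimes> \<a>[b, d, f])
         \<bullet> (\<a>\<^sup>-\<^sup>1[a \<odot> c, e, (b \<odot> d) \<odot> f] \<bullet> ((\<one>[a \<odot> c] \<otimes> g) \<bullet> \<a>\<^sup>-\<^sup>1[a, c, (b \<odot> d) \<odot> (e \<odot> f)])))"
    using g by simp
  also have "\<dots> = (\<a>[a, c, e] \<otimes> \<one>[b \<odot> (d \<odot> f)])
    \<bullet> (\<a>\<^sup>-\<^sup>1[a \<odot> c, e, b \<odot> (d \<odot> f)]
      \<bullet> ((\<one>[a \<odot> c] \<otimes> (\<one>[e] \<otimes> \<a>[b, d, f])) \<bullet> ((\<one>[a \<odot> c] \<otimes> g) \<bullet> \<a>\<^sup>-\<^sup>1[a, c, (b \<odot> d) \<odot> (e \<odot> f)])))"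
    using g by (simp only: n1[THEN comp_ext22] arr_typing, (simp)?)
  also have "\<dots> = (\<a>[a, c, e] \<otimes> \<one>[b \<odot> (d \<odot> f)])
    \<bullet> (\<a>\<^sup>-\<^sup>1[a \<odot> c, e, b \<odot> (d \<odot> f)]
      \<bullet> ((\<one>[a \<odot> c] \<otimes> ((\<one>[e] \<otimes> \<a>[b, d, f]) \<bullet> g)) \<bullet> \<a>\<^sup>-\<^sup>1[a, c, (b \<odot> d) \<odot> (e \<odot> f)]))"
    using g by simp
  also have "\<dots> = (\<a>[a, c, e] \<otimes> \<one>[b \<odot> (d \<odot> f)])
    \<bullet> (\<a>\<^sup>-\<^sup>1[a \<odot> c, e, b \<odot> (d \<odot> f)]
      \<bullet> (\<a>\<^sup>-\<^sup>1[a, c, e \<odot> (b \<odot> (d \<odot> f))] \<bullet> (\<one>[a] \<otimes> (\<one>[c] \<otimes> ((\<one>[e] \<otimes> \<a>[b, d, f]) \<bullet> g)))))"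
    using g by (simp only: n2, (simp)?)
  also have "\<dots> = \<a>\<^sup>-\<^sup>1[a, c \<odot> e, b \<odot> (d \<odot> f)]
    \<bullet> ((\<one>[a] \<otimes> \<a>\<^sup>-\<^sup>1[c, e, b \<odot> (d \<odot> f)]) \<bullet> (\<one>[a] \<otimes> (\<one>[c] \<otimes> ((\<one>[e] \<otimes> \<a>[b, d, f]) \<bullet> g))))"
    using g by (simp only: p[THEN comp_ext32] arr_typing, (simp)?)
  also have "\<dots> = \<a>\<^sup>-\<^sup>1[a, c \<odot> e, b \<odot> (d \<odot> f)]
    \<bullet> (\<one>[a] \<otimes> (\<a>\<^sup>-\<^sup>1[c, e, b \<odot> (d \<odot> f)] \<bullet> (\<one>[c] \<otimes> ((\<one>[e] \<otimes> \<a>[b, d, f]) \<bullet> g))))"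
    using g by simp
  finally show ?thesis .
qed

lemma mid_assoc: "(\<a>[a, c, e] \<otimes> \<a>[b, d, f])
  \<bullet> (mid C (a \<odot> c) (b \<odot> d) e f \<bullet> (mid C a b c d \<otimes> \<one>[e \<odot> f]))
   = mid C a b (c \<odot> e) (d \<odot> f) \<bullet> ((\<one>[a \<odot> b] \<otimes> mid C c d e f) \<bullet> \<a>[a \<odot> b, c \<odot> d, e \<odot> f])"
proof -
  have m: "(\<a>[a, c, e] \<otimes> \<a>[b, d, f])
    \<bullet> (\<a>\<^sup>-\<^sup>1[a \<odot> c, e, (b \<odot> d) \<odot> f]
      \<bullet> ((\<one>[a \<odot> c] \<otimes> \<x>[b \<odot> d, e, f]) \<bullet> \<a>\<^sup>-\<^sup>1[a, c, (b \<odot> d) \<odot> (e \<odot> f)]))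
  = \<a>\<^sup>-\<^sup>1[a, c \<odot> e, b \<odot> (d \<odot> f)]
    \<bullet> (\<one>[a] \<otimes> (\<a>\<^sup>-\<^sup>1[c, e, b \<odot> (d \<odot> f)] \<bullet> (\<one>[c] \<otimes> ((\<one>[e] \<otimes> \<a>[b, d, f]) \<bullet> \<x>[b \<odot> d, e, f]))))"
    by (rule mid_assoc_middle) simp_all
  show ?thesis unfolding mid_assoc_lhs mid_assoc_rhs
    by (simp only: m[THEN comp_ext42] arr_typing, (simp)?)
qed

lemma assoc_mid_lhs: "\<a>[a \<odot> d, b \<odot> e, c \<odot> f]
  \<bullet> ((mid C a b d e \<otimes> \<one>[c \<odot> f]) \<bullet> mid C (a \<odot> b) c (d \<odot> e) f)
  = \<a>\<^sup>-\<^sup>1[a, d, (b \<odot> e) \<odot> (c \<odot> f)]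
    \<bullet> ((\<one>[a] \<otimes> (\<a>[d, b \<odot> e, c \<odot> f]
      \<bullet> ((\<x>[b, d, e] \<otimes> \<one>[c \<odot> f])
        \<bullet> (\<a>\<^sup>-\<^sup>1[b, d \<odot> e, c \<odot> f] \<bullet> ((\<one>[b] \<otimes> \<x>[c, d \<odot> e, f]) \<bullet> \<a>[b, c, (d \<odot> e) \<odot> f])))))
          \<bullet> (\<a>[a, b \<odot> c, (d \<odot> e) \<odot> f] \<bullet> (\<a>[a, b, c] \<otimes> \<one>[(d \<odot> e) \<odot> f])))"
  unfolding mid_exchange
  by (simp add: pentagon_solved_peel_ext assoc_naturality_peel_ext pentagon_solved'_ext
    assoc_naturality_right_ext pentagon pentagon_ext)

lemma assoc_mid_rhs: "(\<one>[a \<odot> d] \<otimes> mid C b c e f)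
  \<bullet> (mid C a (b \<odot> c) d (e \<odot> f) \<bullet> (\<a>[a, b, c] \<otimes> \<a>[d, e, f]))
  = \<a>\<^sup>-\<^sup>1[a, d, (b \<odot> e) \<odot> (c \<odot> f)]
    \<bullet> ((\<one>[a] \<otimes> ((\<one>[d] \<otimes> mid C b c e f) \<bullet> (\<x>[b \<odot> c, d, e \<odot> f] \<bullet> (\<one>[b \<odot> c] \<otimes> \<a>[d, e, f]))))
      \<bullet> (\<a>[a, b \<odot> c, (d \<odot> e) \<odot> f] \<bullet> (\<a>[a, b, c] \<otimes> \<one>[(d \<odot> e) \<odot> f])))"
proof -
  have sp: "\<a>[a, b, c] \<otimes> \<a>[d, e, f] = (\<one>[a \<odot> (b \<odot> c)] \<otimes> \<a>[d, e, f]) \<bullet> (\<a>[a, b, c] \<otimes> \<one>[(d \<odot> e) \<odot> f])"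
    by simp
  have "(\<one>[a \<odot> d] \<otimes> mid C b c e f) \<bullet> (mid C a (b \<odot> c) d (e \<odot> f) \<bullet> (\<a>[a, b, c] \<otimes> \<a>[d, e, f]))
    = (\<one>[a \<odot> d] \<otimes> mid C b c e f)
      \<bullet> (\<a>\<^sup>-\<^sup>1[a, d, (b \<odot> c) \<odot> (e \<odot> f)]
        \<bullet> ((\<one>[a] \<otimes> \<x>[b \<odot> c, d, e \<odot> f])
          \<bullet> (\<a>[a, b \<odot> c, d \<odot> (e \<odot> f)]
            \<bullet> ((\<one>[a \<odot> (b \<odot> c)] \<otimes> \<a>[d, e, f]) \<bullet> (\<a>[a, b, c] \<otimes> \<one>[(d \<odot> e) \<odot> f])))))"
    unfolding sp mid_exchange[of a "b \<odot> c" d "e \<odot> f"] by (simp only: comp_assoc_right arr_typing)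
  also have "\<dots> = (\<one>[a \<odot> d] \<otimes> mid C b c e f)
    \<bullet> (\<a>\<^sup>-\<^sup>1[a, d, (b \<odot> c) \<odot> (e \<odot> f)]
      \<bullet> ((\<one>[a] \<otimes> \<x>[b \<odot> c, d, e \<odot> f])
        \<bullet> ((\<one>[a] \<otimes> (\<one>[b \<odot> c] \<otimes> \<a>[d, e, f]))
          \<bullet> (\<a>[a, b \<odot> c, (d \<odot> e) \<odot> f] \<bullet> (\<a>[a, b, c] \<otimes> \<one>[(d \<odot> e) \<odot> f])))))"
    by (simp only: assoc_naturality_right_ext arr_typing, (simp)?)
  also have "\<dots> = \<a>\<^sup>-\<^sup>1[a, d, (b \<odot> e) \<odot> (c \<odot> f)]
    \<bullet> ((\<one>[a] \<otimes> ((\<one>[d] \<otimes> mid C b c e f) \<bullet> (\<x>[b \<odot> c, d, e \<odot> f] \<bullet> (\<one>[b \<odot> c] \<otimes> \<a>[d, e, f]))))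
      \<bullet> (\<a>[a, b \<odot> c, (d \<odot> e) \<odot> f] \<bullet> (\<a>[a, b, c] \<otimes> \<one>[(d \<odot> e) \<odot> f])))"
    by (simp add: assoc_inv_naturality_right_ext)
  finally show ?thesis .
qed

lemma assoc_mid_middle:
  "\<a>[d, b \<odot> e, c \<odot> f] \<bullet>
    ((\<x>[b, d, e] \<otimes> \<one>[c \<odot> f])
      \<bullet> (\<a>\<^sup>-\<^sup>1[b, d \<odot> e, c \<odot> f] \<bullet> ((\<one>[b] \<otimes> \<x>[c, d \<odot> e, f]) \<bullet> \<a>[b, c, (d \<odot> e) \<odot> f])))
  = (\<one>[d] \<otimes> mid C b c e f) \<bullet> (\<x>[b \<odot> c, d, e \<odot> f] \<bullet> (\<one>[b \<odot> c] \<otimes> \<a>[d, e, f]))"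
  unfolding mid_exchange
  by (simp add: exchange_tensor_left'' exchange_naturality_rpeel assoc_naturality_right
    assoc_naturality_right_ext exchange_tensor_middle'' exchange_assoc'_ext)

lemma assoc_mid: "\<a>[a \<odot> d, b \<odot> e, c \<odot> f] \<bullet> ((mid C a b d e \<otimes> \<one>[c \<odot> f]) \<bullet> mid C (a \<odot> b) c (d \<odot> e) f)
  = (\<one>[a \<odot> d] \<otimes> mid C b c e f) \<bullet> (mid C a (b \<odot> c) d (e \<odot> f) \<bullet> (\<a>[a, b, c] \<otimes> \<a>[d, e, f]))"
  unfolding assoc_mid_lhs assoc_mid_rhs assoc_mid_middle ..

lemma lunit_naturality': "Arr G \<Longrightarrow> Cd G = X \<Longrightarrow> \<l>[X] \<bullet> (\<one>[\<I>] \<otimes> G) = G \<bullet> \<l>[Dm G]"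
  using lunit_naturality[of G] by simp

lemma lunit_naturality'_ext: "Arr G \<Longrightarrow> Cd G = X \<Longrightarrow> Arr k \<Longrightarrow> Cd k = \<I> \<odot> Dm G \<Longrightarrow>
  \<l>[X] \<bullet> ((\<one>[\<I>] \<otimes> G) \<bullet> k) = G \<bullet> (\<l>[Dm G] \<bullet> k)"
  by (simp add: lunit_naturality'[THEN comp_ext22])

lemma runit_naturality': "Arr G \<Longrightarrow> Cd G = X \<Longrightarrow> \<r>[X] \<bullet> (G \<otimes> \<one>[\<I>]) = G \<bullet> \<r>[Dm G]"
  using runit_naturality[of G] by simp

lemma runit_naturality'_ext: "Arr G \<Longrightarrow> Cd G = X \<Longrightarrow> Arr k \<Longrightarrow> Cd k = Dm G \<odot> \<I> \<Longrightarrow>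
  \<r>[X] \<bullet> ((G \<otimes> \<one>[\<I>]) \<bullet> k) = G \<bullet> (\<r>[Dm G] \<bullet> k)"
  by (simp add: runit_naturality'[THEN comp_ext22])

lemma lunit_assoc_ext: "Arr k \<Longrightarrow> Cd k = (\<I> \<odot> a) \<odot> b \<Longrightarrow>
  \<l>[a \<odot> b] \<bullet> (\<a>[\<I>, a, b] \<bullet> k) = (\<l>[a] \<otimes> \<one>[b]) \<bullet> k"
  by (simp add: lunit_assoc[THEN comp_ext21])

lemma runit_assoc_inv_ext: "Arr k \<Longrightarrow> Cd k = a \<odot> (b \<odot> \<I>) \<Longrightarrow>
  \<r>[a \<odot> b] \<bullet> (\<a>\<^sup>-\<^sup>1[a, b, \<I>] \<bullet> k) = (\<one>[a] \<otimes> \<r>[b]) \<bullet> k"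
  by (simp add: runit_assoc_inv[THEN comp_ext21])

lemma triangle_ext: "Arr k \<Longrightarrow> Cd k = (X \<odot> \<I>) \<odot> Y \<Longrightarrow>
  (\<one>[X] \<otimes> \<l>[Y]) \<bullet> (\<a>[X, \<I>, Y] \<bullet> k) = (\<r>[X] \<otimes> \<one>[Y]) \<bullet> k"
  by (simp add: triangle[THEN comp_ext21])

lemma triangle_inv_ext: "Arr k \<Longrightarrow> Cd k = X \<odot> (\<I> \<odot> Y) \<Longrightarrow>
  (\<r>[X] \<otimes> \<one>[Y]) \<bullet> (\<a>\<^sup>-\<^sup>1[X, \<I>, Y] \<bullet> k) = (\<one>[X] \<otimes> \<l>[Y]) \<bullet> k"
  by (simp add: triangle_inv[THEN comp_ext21])

lemma triangle_peel: "Arr H \<Longrightarrow> Dm H = Y \<Longrightarrow> (\<one>[X] \<otimes> (H \<bullet> \<l>[Y])) \<bullet> \<a>[X, \<I>, Y] = \<r>[X] \<otimes> H"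
proof -
  assume h: "Arr H" "Dm H = Y"
  have "(\<one>[X] \<otimes> (H \<bullet> \<l>[Y])) \<bullet> \<a>[X, \<I>, Y] = (\<one>[X] \<otimes> H) \<bullet> ((\<one>[X] \<otimes> \<l>[Y]) \<bullet> \<a>[X, \<I>, Y])" using h
    by simp
  also have "\<dots> = \<r>[X] \<otimes> H" using h by (simp only: triangle, simp)
  finally show ?thesis .
qed

lemma mid_lunit: "(\<l>[a] \<otimes> \<l>[b]) \<bullet> mid C \<I> \<I> a b = \<l>[a \<odot> b] \<bullet> (\<l>[\<I>] \<otimes> \<one>[a \<odot> b])"
proof -
  have s1: "(\<l>[a] \<otimes> \<l>[b]) \<bullet> \<a>\<^sup>-\<^sup>1[\<I>, a, \<I> \<odot> b] = \<l>[a \<odot> b] \<bullet> (\<one>[\<I>] \<otimes> (\<one>[a] \<otimes> \<l>[b]))"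
  proof -
    have "(\<l>[a] \<otimes> \<l>[b]) \<bullet> \<a>\<^sup>-\<^sup>1[\<I>, a, \<I> \<odot> b]
      = (\<one>[a] \<otimes> \<l>[b]) \<bullet> ((\<l>[a] \<otimes> \<one>[\<I> \<odot> b]) \<bullet> \<a>\<^sup>-\<^sup>1[\<I>, a, \<I> \<odot> b])" by simp
    also have "\<dots> = (\<one>[a] \<otimes> \<l>[b]) \<bullet> \<l>[a \<odot> (\<I> \<odot> b)]" by (simp only: lunit_assoc_inv)
    also have "\<dots> = \<l>[a \<odot> b] \<bullet> (\<one>[\<I>] \<otimes> (\<one>[a] \<otimes> \<l>[b]))" using lunit_naturality[of "\<one>[a] \<otimes> \<l>[b]"]
      by simp
    finally show ?thesis .
  qed
  show ?thesis unfolding mid_exchange exchange_def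
    by (simp add: s1[THEN comp_ext22] triangle_ext runit_braid lunit_assoc_inv triangle
      lunit_unit_eq_runit_unit[symmetric])
qed

lemma mid_runit: "(\<r>[a] \<otimes> \<r>[b]) \<bullet> mid C a b \<I> \<I> = \<r>[a \<odot> b] \<bullet> (\<one>[a \<odot> b] \<otimes> \<l>[\<I>])"
proof -
  have s1: "(\<r>[a] \<otimes> \<r>[b]) \<bullet> \<a>\<^sup>-\<^sup>1[a, \<I>, b \<odot> \<I>] = \<one>[a] \<otimes> (\<r>[b] \<bullet> \<l>[b \<odot> \<I>])"
  proof -
    have "(\<r>[a] \<otimes> \<r>[b]) \<bullet> \<a>\<^sup>-\<^sup>1[a, \<I>, b \<odot> \<I>]
      = (\<r>[a] \<otimes> \<one>[b]) \<bullet> ((\<one>[a \<odot> \<I>] \<otimes> \<r>[b]) \<bullet> \<a>\<^sup>-\<^sup>1[a, \<I>, b \<odot> \<I>])" by simp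
    also have "\<dots> = (\<r>[a] \<otimes> \<one>[b]) \<bullet> (\<a>\<^sup>-\<^sup>1[a, \<I>, b] \<bullet> (\<one>[a] \<otimes> (\<one>[\<I>] \<otimes> \<r>[b])))"
      by (simp add: assoc_inv_naturality_right)
    also have "\<dots> = \<one>[a] \<otimes> (\<l>[b] \<bullet> (\<one>[\<I>] \<otimes> \<r>[b]))" by (simp add: triangle_inv_ext)
    also have "\<dots> = \<one>[a] \<otimes> (\<r>[b] \<bullet> \<l>[b \<odot> \<I>])" using lunit_naturality[of "\<r>[b]"] by simp
    finally show ?thesis .
  qed
  have r: "\<r>[b] \<bullet> ((\<r>[b] \<otimes> \<one>[\<I>]) \<bullet> k) = \<r>[b] \<bullet> (\<r>[b \<odot> \<I>] \<bullet> k)" if "Arr k" "Cd k = (b \<odot> \<I>) \<odot> \<I>" for k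
    using runit_naturality[of "\<r>[b]", THEN comp_ext22, of k] that by simp
  have "(\<r>[a] \<otimes> \<r>[b]) \<bullet> mid C a b \<I> \<I> = (\<one>[a] \<otimes> (\<r>[b] \<bullet> (\<one>[b] \<otimes> \<r>[\<I>]))) \<bullet> \<a>[a, b, \<I> \<odot> \<I>]"
    unfolding mid_exchange exchange_def
    by (simp add: s1[THEN comp_ext21] lunit_assoc_ext lunit_braid r runit_assoc_inv)
  also have "\<dots> = ((\<one>[a] \<otimes> \<r>[b]) \<bullet> \<a>[a, b, \<I>]) \<bullet> (\<one>[a \<odot> b] \<otimes> \<r>[\<I>])"
    by (simp add: assoc_naturality_right)
  also have "\<dots> = \<r>[a \<odot> b] \<bullet> (\<one>[a \<odot> b] \<otimes> \<l>[\<I>])"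
    by (simp only: assoc_runit lunit_unit_eq_runit_unit)
  finally show ?thesis .
qed

lemma lunit_mid_unit: "\<l>[b \<odot> b'] \<bullet> ((\<l>[\<I>] \<otimes> \<one>[b \<odot> b']) \<bullet> mid C \<I> b \<I> b') = \<l>[b] \<otimes> \<l>[b']"
  unfolding mid_exchange exchange_def lunit_unit_eq_runit_unit
  by (simp add: triangle_inv_ext lunit_naturality' lunit_naturality'_ext lunit_assoc lunit_assoc_ext
    lunit_braid triangle_inv)

lemma runit_mid_unit: "\<r>[b \<odot> b'] \<bullet> ((\<one>[b \<odot> b'] \<otimes> \<l>[\<I>]) \<bullet> mid C b \<I> b' \<I>) = \<r>[b] \<otimes> \<r>[b']"
proof -
  have r: "\<r>[b'] \<bullet> ((\<r>[b'] \<otimes> \<one>[\<I>]) \<bullet> k) = \<r>[b'] \<bullet> (\<r>[b' \<odot> \<I>] \<bullet> k)" if "Arr k"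
    "Cd k = (b' \<odot> \<I>) \<odot> \<I>" for k
    using runit_naturality[of "\<r>[b']", THEN comp_ext22, of k] that by simp
  show ?thesis unfolding mid_exchange exchange_def
    by (simp add: assoc_inv_naturality_right_ext runit_assoc_inv_ext triangle triangle_ext r
      runit_naturality'_ext runit_braid runit_assoc_inv lunit_naturality' triangle_peel)
qed

lemma assoc_lunit_inv_unit:
  "\<a>[\<I>, \<I>, \<I>] \<bullet> ((\<l>\<^sup>-\<^sup>1[\<I>] \<otimes> \<one>[\<I>]) \<bullet> \<l>\<^sup>-\<^sup>1[\<I>]) = (\<one>[\<I>] \<otimes> \<l>\<^sup>-\<^sup>1[\<I>]) \<bullet> \<l>\<^sup>-\<^sup>1[\<I>]"
proof -
  have k: "(\<one>[\<I>] \<otimes> \<l>[\<I>]) \<bullet> \<a>[\<I>, \<I>, \<I>] = \<l>[\<I>] \<otimes> \<one>[\<I>]" using lunit_assoc[of \<I> \<I>] lunit_unit_tensor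
    by simp
  have "(\<one>[\<I>] \<otimes> \<l>[\<I>]) \<bullet> (\<a>[\<I>, \<I>, \<I>] \<bullet> ((\<l>\<^sup>-\<^sup>1[\<I>] \<otimes> \<one>[\<I>]) \<bullet> \<l>\<^sup>-\<^sup>1[\<I>]))
    = (\<one>[\<I>] \<otimes> \<l>[\<I>]) \<bullet> ((\<one>[\<I>] \<otimes> \<l>\<^sup>-\<^sup>1[\<I>]) \<bullet> \<l>\<^sup>-\<^sup>1[\<I>])"
    by (simp add: k[THEN comp_ext21])
  thus ?thesis by (rule split_mono_cancel[where q = "\<one>[\<I>] \<otimes> \<l>\<^sup>-\<^sup>1[\<I>]"]) simp_all
qed

section \<open>Tensor products of monoids\<close>

lemma monoid_objD: assumes "monoid_obj C Q m u"
  shows "Arr m" "Dm m = Q \<odot> Q" "Cd m = Q" "Arr u" "Dm u = \<I>" "Cd u = Q"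
    "m \<bullet> (m \<otimes> \<one>[Q]) = m \<bullet> ((\<one>[Q] \<otimes> m) \<bullet> \<a>[Q, Q, Q])"
    "m \<bullet> (u \<otimes> \<one>[Q]) = \<l>[Q]" "m \<bullet> (\<one>[Q] \<otimes> u) = \<r>[Q]"
  using assms unfolding monoid_obj_def hom_def by auto

lemma monoid_homD: assumes "monoid_hom C Q1 m1 u1 Q2 m2 u2 f"
  shows "Arr f" "Dm f = Q1" "Cd f = Q2" "f \<bullet> m1 = m2 \<bullet> (f \<otimes> f)" "f \<bullet> u1 = u2"
  using assms unfolding monoid_hom_def hom_def by auto

lemma monoid_hom_ident: assumes Q: "monoid_obj C Q m u" shows "monoid_hom C Q m u Q m u \<one>[Q]"
  using monoid_objD[OF Q] unfolding monoid_hom_def hom_def by simp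

lemma monoid_hom_comp: assumes Q1: "monoid_obj C Q1 m1 u1" and Q2: "monoid_obj C Q2 m2 u2" and Q3:
  "monoid_obj C Q3 m3 u3"
  and f: "monoid_hom C Q1 m1 u1 Q2 m2 u2 f" and g: "monoid_hom C Q2 m2 u2 Q3 m3 u3 g"
  shows "monoid_hom C Q1 m1 u1 Q3 m3 u3 (g \<bullet> f)"
proof -
  note q1 = monoid_objD[OF Q1] and q2 = monoid_objD[OF Q2] and q3 = monoid_objD[OF Q3]
  note ff = monoid_homD[OF f] and gg = monoid_homD[OF g]
  have "(g \<bullet> f) \<bullet> m1 = g \<bullet> (f \<bullet> m1)" using q1 ff gg by simp
  also have "\<dots> = g \<bullet> (m2 \<bullet> (f \<otimes> f))" by (simp only: ff(4))
  also have "\<dots> = m3 \<bullet> ((g \<otimes> g) \<bullet> (f \<otimes> f))"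
    by (rule gg(4)[THEN comp_ext22]) (use q2 q3 ff gg in simp_all)
  also have "\<dots> = m3 \<bullet> ((g \<bullet> f) \<otimes> (g \<bullet> f))" using q3 ff gg by simp
  finally have 1: "(g \<bullet> f) \<bullet> m1 = m3 \<bullet> ((g \<bullet> f) \<otimes> (g \<bullet> f))" .
  have 2: "(g \<bullet> f) \<bullet> u1 = u3" using q1 ff gg by simp
  show ?thesis unfolding monoid_hom_def hom_def using 1 2 ff gg by simp
qed

lemma mu_tens_assoc:
  assumes Q: "monoid_obj C Q m u" and P: "monoid_obj C P n v"
  shows "mu_tens C Q m P n \<bullet> (mu_tens C Q m P n \<otimes> \<one>[Q \<odot> P])
     = mu_tens C Q m P n \<bullet> ((\<one>[Q \<odot> P] \<otimes> mu_tens C Q m P n) \<bullet> \<a>[Q \<odot> P, Q \<odot> P, Q \<odot> P])"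
proof -
  note q = monoid_objD[OF Q] and p = monoid_objD[OF P]
  have mid_mult_left: "mid C Q P Q P \<bullet> ((m \<otimes> n) \<otimes> \<one>[Q \<odot> P])
    = ((m \<otimes> \<one>[Q]) \<otimes> (n \<otimes> \<one>[P])) \<bullet> mid C (Q \<odot> Q) (P \<odot> P) Q P"
    using mid_naturality[of m n "\<one>[Q]" "\<one>[P]"] q p by simp
  have mid_mult_right: "((\<one>[Q] \<otimes> m) \<otimes> (\<one>[P] \<otimes> n)) \<bullet> mid C Q P (Q \<odot> Q) (P \<odot> P)
    = mid C Q P Q P \<bullet> (\<one>[Q \<odot> P] \<otimes> (m \<otimes> n))"
    using mid_naturality[of "\<one>[Q]" "\<one>[P]" m n] q p by simp
  have "mu_tens C Q m P n \<bullet> (mu_tens C Q m P n \<otimes> \<one>[Q \<odot> P])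
    = (m \<otimes> n) \<bullet> (mid C Q P Q P \<bullet> (((m \<otimes> n) \<otimes> \<one>[Q \<odot> P]) \<bullet> (mid C Q P Q P \<otimes> \<one>[Q \<odot> P])))"
    unfolding mu_tens_def using q p by simp
  also have "\<dots> = (m \<otimes> n)
    \<bullet> (((m \<otimes> \<one>[Q]) \<otimes> (n \<otimes> \<one>[P])) \<bullet> (mid C (Q \<odot> Q) (P \<odot> P) Q P \<bullet> (mid C Q P Q P \<otimes> \<one>[Q \<odot> P])))"
    using q p by (simp only: mid_mult_left[THEN comp_ext22] arr_typing mid_typing, (simp)?)
  also have "\<dots> = ((m \<bullet> (\<one>[Q] \<otimes> m)) \<otimes> (n \<bullet> (\<one>[P] \<otimes> n)))
    \<bullet> ((\<a>[Q, Q, Q] \<otimes> \<a>[P, P, P]) \<bullet> (mid C (Q \<odot> Q) (P \<odot> P) Q P \<bullet> (mid C Q P Q P \<otimes> \<one>[Q \<odot> P])))"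
    using q p by simp
  also have "\<dots> = ((m \<bullet> (\<one>[Q] \<otimes> m)) \<otimes> (n \<bullet> (\<one>[P] \<otimes> n)))
    \<bullet> (mid C Q P (Q \<odot> Q) (P \<odot> P) \<bullet> ((\<one>[Q \<odot> P] \<otimes> mid C Q P Q P) \<bullet> \<a>[Q \<odot> P, Q \<odot> P, Q \<odot> P]))"
    by (simp only: mid_assoc)
  also have "\<dots> = (m \<otimes> n)
    \<bullet> (((\<one>[Q] \<otimes> m) \<otimes> (\<one>[P] \<otimes> n))
      \<bullet> (mid C Q P (Q \<odot> Q) (P \<odot> P) \<bullet> ((\<one>[Q \<odot> P] \<otimes> mid C Q P Q P) \<bullet> \<a>[Q \<odot> P, Q \<odot> P, Q \<odot> P])))"
    using q p by simp
  also have "\<dots> = (m \<otimes> n)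
    \<bullet> (mid C Q P Q P \<bullet> ((\<one>[Q \<odot> P] \<otimes> (m \<otimes> n))
      \<bullet> ((\<one>[Q \<odot> P] \<otimes> mid C Q P Q P) \<bullet> \<a>[Q \<odot> P, Q \<odot> P, Q \<odot> P])))"
    using q p by (simp only: mid_mult_right[THEN comp_ext22] arr_typing mid_typing, (simp)?)
  also have "\<dots> = mu_tens C Q m P n \<bullet> ((\<one>[Q \<odot> P] \<otimes> mu_tens C Q m P n) \<bullet> \<a>[Q \<odot> P, Q \<odot> P, Q \<odot> P])"
    unfolding mu_tens_def using q p by simp
  finally show ?thesis .
qed

lemma mu_tens_lunit:
  assumes Q: "monoid_obj C Q m u" and P: "monoid_obj C P n v"
  shows "mu_tens C Q m P n \<bullet> (unit_tens C u v \<otimes> \<one>[Q \<odot> P]) = \<l>[Q \<odot> P]"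
proof -
  note q = monoid_objD[OF Q] and p = monoid_objD[OF P]
  have mid_unit_left: "mid C Q P Q P \<bullet> ((u \<otimes> v) \<otimes> \<one>[Q \<odot> P])
    = ((u \<otimes> \<one>[Q]) \<otimes> (v \<otimes> \<one>[P])) \<bullet> mid C \<I> \<I> Q P"
    using mid_naturality[of u v "\<one>[Q]" "\<one>[P]"] q p by simp
  have "mu_tens C Q m P n \<bullet> (unit_tens C u v \<otimes> \<one>[Q \<odot> P])
    = (m \<otimes> n) \<bullet> (mid C Q P Q P \<bullet> (((u \<otimes> v) \<otimes> \<one>[Q \<odot> P]) \<bullet> (\<l>\<^sup>-\<^sup>1[\<I>] \<otimes> \<one>[Q \<odot> P])))"
    unfolding mu_tens_def unit_tens_def using q p by simp
  also have "\<dots> = (m \<otimes> n) \<bullet> (((u \<otimes> \<one>[Q]) \<otimes> (v \<otimes> \<one>[P])) \<bullet> (mid C \<I> \<I> Q P \<bullet> (\<l>\<^sup>-\<^sup>1[\<I>] \<otimes> \<one>[Q \<odot> P])))"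
    using q p by (simp only: mid_unit_left[THEN comp_ext22] arr_typing mid_typing, (simp)?)
  also have "\<dots> = ((\<l>[Q] \<otimes> \<l>[P]) \<bullet> mid C \<I> \<I> Q P) \<bullet> (\<l>\<^sup>-\<^sup>1[\<I>] \<otimes> \<one>[Q \<odot> P])"
    using q p by simp
  also have "\<dots> = \<l>[Q \<odot> P]" by (simp add: mid_lunit)
  finally show ?thesis .
qed

lemma mu_tens_runit:
  assumes Q: "monoid_obj C Q m u" and P: "monoid_obj C P n v"
  shows "mu_tens C Q m P n \<bullet> (\<one>[Q \<odot> P] \<otimes> unit_tens C u v) = \<r>[Q \<odot> P]"
proof -
  note q = monoid_objD[OF Q] and p = monoid_objD[OF P]
  have mid_unit_right: "mid C Q P Q P \<bullet> (\<one>[Q \<odot> P] \<otimes> (u \<otimes> v))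
    = ((\<one>[Q] \<otimes> u) \<otimes> (\<one>[P] \<otimes> v)) \<bullet> mid C Q P \<I> \<I>"
    using mid_naturality[of "\<one>[Q]" "\<one>[P]" u v] q p by simp
  have "mu_tens C Q m P n \<bullet> (\<one>[Q \<odot> P] \<otimes> unit_tens C u v)
    = (m \<otimes> n) \<bullet> (mid C Q P Q P \<bullet> ((\<one>[Q \<odot> P] \<otimes> (u \<otimes> v)) \<bullet> (\<one>[Q \<odot> P] \<otimes> \<l>\<^sup>-\<^sup>1[\<I>])))"
    unfolding mu_tens_def unit_tens_def using q p by simp
  also have "\<dots> = (m \<otimes> n) \<bullet> (((\<one>[Q] \<otimes> u) \<otimes> (\<one>[P] \<otimes> v)) \<bullet> (mid C Q P \<I> \<I> \<bullet> (\<one>[Q \<odot> P] \<otimes> \<l>\<^sup>-\<^sup>1[\<I>])))"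
    using q p by (simp only: mid_unit_right[THEN comp_ext22] arr_typing mid_typing, (simp)?)
  also have "\<dots> = ((\<r>[Q] \<otimes> \<r>[P]) \<bullet> mid C Q P \<I> \<I>) \<bullet> (\<one>[Q \<odot> P] \<otimes> \<l>\<^sup>-\<^sup>1[\<I>])"
    using q p by simp
  also have "\<dots> = \<r>[Q \<odot> P]" by (simp add: mid_runit)
  finally show ?thesis .
qed

lemma monoid_obj_tensor:
  assumes Q: "monoid_obj C Q m u" and P: "monoid_obj C P n v"
  shows "monoid_obj C (Q \<odot> P) (mu_tens C Q m P n) (unit_tens C u v)"
proof -
  note q = monoid_objD[OF Q] and p = monoid_objD[OF P]
  have "mu_tens C Q m P n \<in> hom C ((Q \<odot> P) \<odot> (Q \<odot> P)) (Q \<odot> P)" "unit_tens C u v \<in> hom C \<I> (Q \<odot> P)"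
    unfolding mu_tens_def unit_tens_def hom_def using q p by simp_all
  then show ?thesis
    unfolding monoid_obj_def using mu_tens_assoc[OF Q P] mu_tens_lunit[OF Q P] mu_tens_runit[OF Q P]
      by blast
qed

lemma monoid_hom_tensor: assumes Q1: "monoid_obj C Q1 m1 u1" and Q2: "monoid_obj C Q2 m2 u2"
  and P1: "monoid_obj C P1 n1 v1" and P2: "monoid_obj C P2 n2 v2"
  and f: "monoid_hom C Q1 m1 u1 P1 n1 v1 f" and g: "monoid_hom C Q2 m2 u2 P2 n2 v2 g"
  shows "monoid_hom C (Q1 \<odot> Q2) (mu_tens C Q1 m1 Q2 m2) (unit_tens C u1 u2) (P1 \<odot> P2)
    (mu_tens C P1 n1 P2 n2) (unit_tens C v1 v2) (f \<otimes> g)"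
proof -
  note q1 = monoid_objD[OF Q1] and q2 = monoid_objD[OF Q2] and p1 = monoid_objD[OF P1] and p2
    = monoid_objD[OF P2]
  note ff = monoid_homD[OF f] and gg = monoid_homD[OF g]
  have n: "mid C P1 P2 P1 P2 \<bullet> ((f \<otimes> g) \<otimes> (f \<otimes> g)) = ((f \<otimes> f) \<otimes> (g \<otimes> g)) \<bullet> mid C Q1 Q2 Q1 Q2"
    using mid_naturality[of f g f g] ff gg by simp
  have "(f \<otimes> g) \<bullet> mu_tens C Q1 m1 Q2 m2 = ((f \<bullet> m1) \<otimes> (g \<bullet> m2)) \<bullet> mid C Q1 Q2 Q1 Q2"
    unfolding mu_tens_def using q1 q2 ff gg by simp
  also have "\<dots> = ((n1 \<bullet> (f \<otimes> f)) \<otimes> (n2 \<bullet> (g \<otimes> g))) \<bullet> mid C Q1 Q2 Q1 Q2" using ff gg by simp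
  also have "\<dots> = (n1 \<otimes> n2) \<bullet> (((f \<otimes> f) \<otimes> (g \<otimes> g)) \<bullet> mid C Q1 Q2 Q1 Q2)" using ff gg p1 p2 by simp
  also have "\<dots> = (n1 \<otimes> n2) \<bullet> (mid C P1 P2 P1 P2 \<bullet> ((f \<otimes> g) \<otimes> (f \<otimes> g)))" by (simp only: n)
  also have "\<dots> = mu_tens C P1 n1 P2 n2 \<bullet> ((f \<otimes> g) \<otimes> (f \<otimes> g))"
    unfolding mu_tens_def using ff gg p1 p2 by simp
  finally have 1: "(f \<otimes> g) \<bullet> mu_tens C Q1 m1 Q2 m2 = mu_tens C P1 n1 P2 n2 \<bullet> ((f \<otimes> g) \<otimes> (f \<otimes> g))" .
  have 2: "(f \<otimes> g) \<bullet> unit_tens C u1 u2 = unit_tens C v1 v2"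
    unfolding unit_tens_def using q1 q2 ff gg by simp
  show ?thesis unfolding monoid_hom_def hom_def using 1 2 ff gg by simp
qed

lemma monoid_hom_assoc: assumes Q1: "monoid_obj C Q1 m1 u1" and Q2: "monoid_obj C Q2 m2 u2" and Q3:
  "monoid_obj C Q3 m3 u3"
  shows "monoid_hom C ((Q1 \<odot> Q2) \<odot> Q3) (mu_tens C (Q1 \<odot> Q2) (mu_tens C Q1 m1 Q2 m2) Q3 m3)
    (unit_tens C (unit_tens C u1 u2) u3)
     (Q1 \<odot> (Q2 \<odot> Q3)) (mu_tens C Q1 m1 (Q2 \<odot> Q3) (mu_tens C Q2 m2 Q3 m3))
       (unit_tens C u1 (unit_tens C u2 u3)) \<a>[Q1, Q2, Q3]"
proof -
  note q1 = monoid_objD[OF Q1] and q2 = monoid_objD[OF Q2] and q3 = monoid_objD[OF Q3]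
  have n: "\<a>[Q1, Q2, Q3] \<bullet> ((m1 \<otimes> m2) \<otimes> m3) = (m1 \<otimes> (m2 \<otimes> m3)) \<bullet> \<a>[Q1 \<odot> Q1, Q2 \<odot> Q2, Q3 \<odot> Q3]"
    using assoc_naturality[of m1 m2 m3] q1 q2 q3 by simp
  have "\<a>[Q1, Q2, Q3] \<bullet> mu_tens C (Q1 \<odot> Q2) (mu_tens C Q1 m1 Q2 m2) Q3 m3
     = \<a>[Q1, Q2, Q3] \<bullet> (((m1 \<otimes> m2) \<otimes> m3)
       \<bullet> ((mid C Q1 Q2 Q1 Q2 \<otimes> \<one>[Q3 \<odot> Q3]) \<bullet> mid C (Q1 \<odot> Q2) Q3 (Q1 \<odot> Q2) Q3))"
    unfolding mu_tens_def using q1 q2 q3 by simp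
  also have "\<dots> = (m1 \<otimes> (m2 \<otimes> m3))
    \<bullet> (\<a>[Q1 \<odot> Q1, Q2 \<odot> Q2, Q3 \<odot> Q3]
      \<bullet> ((mid C Q1 Q2 Q1 Q2 \<otimes> \<one>[Q3 \<odot> Q3]) \<bullet> mid C (Q1 \<odot> Q2) Q3 (Q1 \<odot> Q2) Q3))"
    using q1 q2 q3 by (simp only: n[THEN comp_ext22] arr_typing mid_typing, (simp)?)
  also have "\<dots> = (m1 \<otimes> (m2 \<otimes> m3))
    \<bullet> ((\<one>[Q1 \<odot> Q1] \<otimes> mid C Q2 Q3 Q2 Q3)
      \<bullet> (mid C Q1 (Q2 \<odot> Q3) Q1 (Q2 \<odot> Q3) \<bullet> (\<a>[Q1, Q2, Q3] \<otimes> \<a>[Q1, Q2, Q3])))"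
    by (simp only: assoc_mid)
  also have "\<dots> = mu_tens C Q1 m1 (Q2 \<odot> Q3) (mu_tens C Q2 m2 Q3 m3)
    \<bullet> (\<a>[Q1, Q2, Q3] \<otimes> \<a>[Q1, Q2, Q3])"
    unfolding mu_tens_def using q1 q2 q3 by simp
  finally have 1: "\<a>[Q1, Q2, Q3] \<bullet> mu_tens C (Q1 \<odot> Q2) (mu_tens C Q1 m1 Q2 m2) Q3 m3
    = mu_tens C Q1 m1 (Q2 \<odot> Q3) (mu_tens C Q2 m2 Q3 m3) \<bullet> (\<a>[Q1, Q2, Q3] \<otimes> \<a>[Q1, Q2, Q3])" .
  have n2: "\<a>[Q1, Q2, Q3] \<bullet> ((u1 \<otimes> u2) \<otimes> u3) = (u1 \<otimes> (u2 \<otimes> u3)) \<bullet> \<a>[\<I>, \<I>, \<I>]"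
    using assoc_naturality[of u1 u2 u3] q1 q2 q3 by simp
  have "\<a>[Q1, Q2, Q3] \<bullet> unit_tens C (unit_tens C u1 u2) u3
    = \<a>[Q1, Q2, Q3] \<bullet> (((u1 \<otimes> u2) \<otimes> u3) \<bullet> ((\<l>\<^sup>-\<^sup>1[\<I>] \<otimes> \<one>[\<I>]) \<bullet> \<l>\<^sup>-\<^sup>1[\<I>]))"
    unfolding unit_tens_def using q1 q2 q3 by simp
  also have "\<dots> = (u1 \<otimes> (u2 \<otimes> u3)) \<bullet> (\<a>[\<I>, \<I>, \<I>] \<bullet> ((\<l>\<^sup>-\<^sup>1[\<I>] \<otimes> \<one>[\<I>]) \<bullet> \<l>\<^sup>-\<^sup>1[\<I>]))"
    using q1 q2 q3 by (simp only: n2[THEN comp_ext22] arr_typing, (simp)?)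
  also have "\<dots> = (u1 \<otimes> (u2 \<otimes> u3)) \<bullet> ((\<one>[\<I>] \<otimes> \<l>\<^sup>-\<^sup>1[\<I>]) \<bullet> \<l>\<^sup>-\<^sup>1[\<I>])"
    by (simp only: assoc_lunit_inv_unit)
  also have "\<dots> = unit_tens C u1 (unit_tens C u2 u3)" unfolding unit_tens_def using q1 q2 q3 by simp
  finally have 2: "\<a>[Q1, Q2, Q3] \<bullet> unit_tens C (unit_tens C u1 u2) u3
    = unit_tens C u1 (unit_tens C u2 u3)" .
  show ?thesis unfolding monoid_hom_def hom_def using 1 2 by simp
qed

lemma monoid_hom_lunit: assumes Bm: "monoid_obj C B m u"
  shows "monoid_hom C (\<I> \<odot> B) (mu_tens C \<I> \<l>[\<I>] B m) (unit_tens C \<one>[\<I>] u) B m u \<l>[B]"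
proof -
  note b = monoid_objD[OF Bm]
  have "\<l>[B] \<bullet> mu_tens C \<I> \<l>[\<I>] B m = \<l>[B] \<bullet> ((\<one>[\<I>] \<otimes> m) \<bullet> ((\<l>[\<I>] \<otimes> \<one>[B \<odot> B]) \<bullet> mid C \<I> B \<I> B))"
    unfolding mu_tens_def using b by simp
  also have "\<dots> = m \<bullet> (\<l>[B \<odot> B] \<bullet> ((\<l>[\<I>] \<otimes> \<one>[B \<odot> B]) \<bullet> mid C \<I> B \<I> B))"
    using lunit_naturality'_ext[of m B "(\<l>[\<I>] \<otimes> \<one>[B \<odot> B]) \<bullet> mid C \<I> B \<I> B"] b by simp
  also have "\<dots> = m \<bullet> (\<l>[B] \<otimes> \<l>[B])" by (simp only: lunit_mid_unit)
  finally have 1: "\<l>[B] \<bullet> mu_tens C \<I> \<l>[\<I>] B m = m \<bullet> (\<l>[B] \<otimes> \<l>[B])" .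
  have 2: "\<l>[B] \<bullet> unit_tens C \<one>[\<I>] u = u" unfolding unit_tens_def using b
    by (simp add: lunit_naturality'_ext)
  show ?thesis unfolding monoid_hom_def hom_def using 1 2 by simp
qed

lemma monoid_hom_runit: assumes Bm: "monoid_obj C B m u"
  shows "monoid_hom C (B \<odot> \<I>) (mu_tens C B m \<I> \<l>[\<I>]) (unit_tens C u \<one>[\<I>]) B m u \<r>[B]"
proof -
  note b = monoid_objD[OF Bm]
  have "\<r>[B] \<bullet> mu_tens C B m \<I> \<l>[\<I>] = \<r>[B] \<bullet> ((m \<otimes> \<one>[\<I>]) \<bullet> ((\<one>[B \<odot> B] \<otimes> \<l>[\<I>]) \<bullet> mid C B \<I> B \<I>))"
    unfolding mu_tens_def using b by simp
  also have "\<dots> = m \<bullet> (\<r>[B \<odot> B] \<bullet> ((\<one>[B \<odot> B] \<otimes> \<l>[\<I>]) \<bullet> mid C B \<I> B \<I>))"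
    using runit_naturality'_ext[of m B "(\<one>[B \<odot> B] \<otimes> \<l>[\<I>]) \<bullet> mid C B \<I> B \<I>"] b by simp
  also have "\<dots> = m \<bullet> (\<r>[B] \<otimes> \<r>[B])" by (simp only: runit_mid_unit)
  finally have 1: "\<r>[B] \<bullet> mu_tens C B m \<I> \<l>[\<I>] = m \<bullet> (\<r>[B] \<otimes> \<r>[B])" .
  have 2: "\<r>[B] \<bullet> unit_tens C u \<one>[\<I>] = u" unfolding unit_tens_def using b
    by (simp add: runit_naturality'_ext lunit_unit_eq_runit_unit)
  show ?thesis unfolding monoid_hom_def hom_def using 1 2 by simp
qed

section \<open>Coactions\<close>

lemma coaction_square_naturality:
  assumes r: "Arr r" "Dm r = A" "Cd r = A \<odot> B" and r': "Arr r'" "Dm r' = A" "Cd r' = A \<odot> B'"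
    and f: "Arr f" "Dm f = B" "Cd f = B'"
    and fr: "(\<one>[A] \<otimes> f) \<bullet> r = r'"
  shows "(\<one>[A] \<otimes> (f \<otimes> f)) \<bullet> (\<a>[A, B, B] \<bullet> ((r \<otimes> \<one>[B]) \<bullet> r)) = \<a>[A, B', B'] \<bullet> ((r' \<otimes> \<one>[B']) \<bullet> r')"
proof -
  have n: "(\<one>[A] \<otimes> (f \<otimes> f)) \<bullet> \<a>[A, B, B] = \<a>[A, B', B'] \<bullet> ((\<one>[A] \<otimes> f) \<otimes> f)"
    using assoc_naturality[of "\<one>[A]" f f] f by simp
  have "(\<one>[A] \<otimes> (f \<otimes> f)) \<bullet> (\<a>[A, B, B] \<bullet> ((r \<otimes> \<one>[B]) \<bullet> r))
    = \<a>[A, B', B'] \<bullet> (((\<one>[A] \<otimes> f) \<otimes> f) \<bullet> ((r \<otimes> \<one>[B]) \<bullet> r))"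
    by (simp only: n[THEN comp_ext22] arr_typing r f, (simp add: r f)?)
  also have "\<dots> = \<a>[A, B', B'] \<bullet> (((\<one>[A] \<otimes> f) \<bullet> r) \<otimes> \<one>[B']) \<bullet> ((\<one>[A] \<otimes> f) \<bullet> r)"
    using r f by simp
  also have "\<dots> = \<a>[A, B', B'] \<bullet> ((r' \<otimes> \<one>[B']) \<bullet> r')" using r' by (simp add: fr)
  finally show ?thesis .
qed

lemma coassoc_under_coaction:
  assumes r: "Arr r" "Dm r = A" "Cd r = A \<odot> B" and d: "Arr d" "Dm d = B" "Cd d = B \<odot> B"
    and dr: "(\<one>[A] \<otimes> d) \<bullet> r = \<a>[A, B, B] \<bullet> ((r \<otimes> \<one>[B]) \<bullet> r)"
  shows "(\<one>[A] \<otimes> ((\<one>[B] \<otimes> d) \<bullet> d)) \<bullet> r = (\<one>[A] \<otimes> (\<a>[B, B, B] \<bullet> ((d \<otimes> \<one>[B]) \<bullet> d))) \<bullet> r"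
proof -
  have "(\<one>[A] \<otimes> ((\<one>[B] \<otimes> d) \<bullet> d)) \<bullet> r = (\<one>[A] \<otimes> (\<one>[B] \<otimes> d)) \<bullet> ((\<one>[A] \<otimes> d) \<bullet> r)"
    using r d by simp
  also have "\<dots> = (\<one>[A] \<otimes> (\<one>[B] \<otimes> d)) \<bullet> (\<a>[A, B, B] \<bullet> ((r \<otimes> \<one>[B]) \<bullet> r))" by (simp only: dr)
  also have "\<dots> = \<a>[A, B, B \<odot> B] \<bullet> ((\<one>[A \<odot> B] \<otimes> d) \<bullet> ((r \<otimes> \<one>[B]) \<bullet> r))"
    using assoc_naturality_right_ext[of d "B \<odot> B" "(r \<otimes> \<one>[B]) \<bullet> r" A B] r d by simp
  also have "\<dots> = \<a>[A, B, B \<odot> B] \<bullet> ((r \<otimes> \<one>[B \<odot> B]) \<bullet> ((\<one>[A] \<otimes> d) \<bullet> r))"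
    using r d by simp
  also have "\<dots> = \<a>[A, B, B \<odot> B] \<bullet> ((r \<otimes> \<one>[B \<odot> B]) \<bullet> (\<a>[A, B, B] \<bullet> ((r \<otimes> \<one>[B]) \<bullet> r)))"
    by (simp only: dr)
  finally have L: "(\<one>[A] \<otimes> ((\<one>[B] \<otimes> d) \<bullet> d)) \<bullet> r
    = \<a>[A, B, B \<odot> B] \<bullet> ((r \<otimes> \<one>[B \<odot> B]) \<bullet> (\<a>[A, B, B] \<bullet> ((r \<otimes> \<one>[B]) \<bullet> r)))" .
  have n1: "(\<one>[A] \<otimes> (d \<otimes> \<one>[B])) \<bullet> \<a>[A, B, B] = \<a>[A, B \<odot> B, B] \<bullet> ((\<one>[A] \<otimes> d) \<otimes> \<one>[B])"
    using assoc_naturality[of "\<one>[A]" d "\<one>[B]"] d by simp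
  have n2: "\<a>[A \<odot> B, B, B] \<bullet> ((r \<otimes> \<one>[B]) \<otimes> \<one>[B]) = (r \<otimes> \<one>[B \<odot> B]) \<bullet> \<a>[A, B, B]"
    using assoc_naturality[of r "\<one>[B]" "\<one>[B]"] r by simp
  have "(\<one>[A] \<otimes> (\<a>[B, B, B] \<bullet> ((d \<otimes> \<one>[B]) \<bullet> d))) \<bullet> r
    = (\<one>[A] \<otimes> \<a>[B, B, B]) \<bullet> ((\<one>[A] \<otimes> (d \<otimes> \<one>[B])) \<bullet> ((\<one>[A] \<otimes> d) \<bullet> r))"
    using r d by simp
  also have "\<dots> = (\<one>[A] \<otimes> \<a>[B, B, B]) \<bullet> ((\<one>[A] \<otimes> (d \<otimes> \<one>[B])) \<bullet> (\<a>[A, B, B] \<bullet> ((r \<otimes> \<one>[B]) \<bullet> r)))"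
    by (simp only: dr)
  also have "\<dots> = (\<one>[A] \<otimes> \<a>[B, B, B]) \<bullet> (\<a>[A, B \<odot> B, B] \<bullet> (((\<one>[A] \<otimes> d) \<otimes> \<one>[B]) \<bullet> ((r \<otimes> \<one>[B]) \<bullet> r)))"
    by (simp only: n1[THEN comp_ext22] arr_typing r d, (simp add: r d)?)
  also have "\<dots> = (\<one>[A] \<otimes> \<a>[B, B, B]) \<bullet> (\<a>[A, B \<odot> B, B] \<bullet> ((((\<one>[A] \<otimes> d) \<bullet> r) \<otimes> \<one>[B]) \<bullet> r))"
    using r d by simp
  also have "\<dots> = (\<one>[A] \<otimes> \<a>[B, B, B])
    \<bullet> (\<a>[A, B \<odot> B, B] \<bullet> (((\<a>[A, B, B] \<bullet> ((r \<otimes> \<one>[B]) \<bullet> r)) \<otimes> \<one>[B]) \<bullet> r))"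
    by (simp only: dr)
  also have "\<dots> = (\<one>[A] \<otimes> \<a>[B, B, B])
    \<bullet> (\<a>[A, B \<odot> B, B] \<bullet> ((\<a>[A, B, B] \<otimes> \<one>[B]) \<bullet> (((r \<otimes> \<one>[B]) \<otimes> \<one>[B]) \<bullet> ((r \<otimes> \<one>[B]) \<bullet> r))))"
    using r d by simp
  also have "\<dots> = \<a>[A, B, B \<odot> B] \<bullet> (\<a>[A \<odot> B, B, B] \<bullet> (((r \<otimes> \<one>[B]) \<otimes> \<one>[B]) \<bullet> ((r \<otimes> \<one>[B]) \<bullet> r)))"
    by (simp only: pentagon_ext_sym arr_typing r d, (simp add: r d)?)
  also have "\<dots> = \<a>[A, B, B \<odot> B] \<bullet> ((r \<otimes> \<one>[B \<odot> B]) \<bullet> (\<a>[A, B, B] \<bullet> ((r \<otimes> \<one>[B]) \<bullet> r)))"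
    by (simp only: n2[THEN comp_ext22] arr_typing r d, (simp add: r d)?)
  finally show ?thesis using L by simp
qed

lemma counit_left_under_coaction:
  assumes r: "Arr r" "Dm r = A" "Cd r = A \<odot> B" and d: "Arr d" "Dm d = B" "Cd d = B \<odot> B"
    and e: "Arr e" "Dm e = B" "Cd e = \<I>"
    and dr: "(\<one>[A] \<otimes> d) \<bullet> r = \<a>[A, B, B] \<bullet> ((r \<otimes> \<one>[B]) \<bullet> r)"
    and er: "(\<one>[A] \<otimes> e) \<bullet> r = \<r>\<^sup>-\<^sup>1[A]"
  shows "(\<one>[A] \<otimes> (\<l>[B] \<bullet> ((e \<otimes> \<one>[B]) \<bullet> d))) \<bullet> r = r"
proof -
  have n1: "(\<one>[A] \<otimes> (e \<otimes> \<one>[B])) \<bullet> \<a>[A, B, B] = \<a>[A, \<I>, B] \<bullet> ((\<one>[A] \<otimes> e) \<otimes> \<one>[B])"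
    using assoc_naturality[of "\<one>[A]" e "\<one>[B]"] e by simp
  have "(\<one>[A] \<otimes> (\<l>[B] \<bullet> ((e \<otimes> \<one>[B]) \<bullet> d))) \<bullet> r
    = (\<one>[A] \<otimes> \<l>[B]) \<bullet> ((\<one>[A] \<otimes> (e \<otimes> \<one>[B])) \<bullet> ((\<one>[A] \<otimes> d) \<bullet> r))"
    using r d e by simp
  also have "\<dots> = (\<one>[A] \<otimes> \<l>[B]) \<bullet> ((\<one>[A] \<otimes> (e \<otimes> \<one>[B])) \<bullet> (\<a>[A, B, B] \<bullet> ((r \<otimes> \<one>[B]) \<bullet> r)))"
    by (simp only: dr)
  also have "\<dots> = (\<one>[A] \<otimes> \<l>[B]) \<bullet> (\<a>[A, \<I>, B] \<bullet> (((\<one>[A] \<otimes> e) \<otimes> \<one>[B]) \<bullet> ((r \<otimes> \<one>[B]) \<bullet> r)))"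
    by (simp only: n1[THEN comp_ext22] arr_typing r d e, (simp add: r d e)?)
  also have "\<dots> = (\<one>[A] \<otimes> \<l>[B]) \<bullet> (\<a>[A, \<I>, B] \<bullet> ((((\<one>[A] \<otimes> e) \<bullet> r) \<otimes> \<one>[B]) \<bullet> r))"
    using r d e by simp
  also have "\<dots> = (\<one>[A] \<otimes> \<l>[B]) \<bullet> (\<a>[A, \<I>, B] \<bullet> ((\<r>\<^sup>-\<^sup>1[A] \<otimes> \<one>[B]) \<bullet> r))"
    by (simp only: er)
  also have "\<dots> = r" using r by (simp add: triangle_ext)
  finally show ?thesis .
qed

lemma counit_right_under_coaction:
  assumes r: "Arr r" "Dm r = A" "Cd r = A \<odot> B" and d: "Arr d" "Dm d = B" "Cd d = B \<odot> B"
    and e: "Arr e" "Dm e = B" "Cd e = \<I>"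
    and dr: "(\<one>[A] \<otimes> d) \<bullet> r = \<a>[A, B, B] \<bullet> ((r \<otimes> \<one>[B]) \<bullet> r)"
    and er: "(\<one>[A] \<otimes> e) \<bullet> r = \<r>\<^sup>-\<^sup>1[A]"
  shows "(\<one>[A] \<otimes> (\<r>[B] \<bullet> ((\<one>[B] \<otimes> e) \<bullet> d))) \<bullet> r = r"
proof -
  have "(\<one>[A] \<otimes> (\<r>[B] \<bullet> ((\<one>[B] \<otimes> e) \<bullet> d))) \<bullet> r
    = (\<one>[A] \<otimes> \<r>[B]) \<bullet> ((\<one>[A] \<otimes> (\<one>[B] \<otimes> e)) \<bullet> ((\<one>[A] \<otimes> d) \<bullet> r))"
    using r d e by simp
  also have "\<dots> = (\<one>[A] \<otimes> \<r>[B]) \<bullet> ((\<one>[A] \<otimes> (\<one>[B] \<otimes> e)) \<bullet> (\<a>[A, B, B] \<bullet> ((r \<otimes> \<one>[B]) \<bullet> r)))"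
    by (simp only: dr)
  also have "\<dots> = (\<one>[A] \<otimes> \<r>[B]) \<bullet> (\<a>[A, B, \<I>] \<bullet> ((\<one>[A \<odot> B] \<otimes> e) \<bullet> ((r \<otimes> \<one>[B]) \<bullet> r)))"
    using assoc_naturality_right_ext[of e \<I> "(r \<otimes> \<one>[B]) \<bullet> r" A B] r d e by simp
  also have "\<dots> = (\<one>[A] \<otimes> \<r>[B]) \<bullet> (\<a>[A, B, \<I>] \<bullet> ((r \<otimes> \<one>[\<I>]) \<bullet> ((\<one>[A] \<otimes> e) \<bullet> r)))"
    using r d e by simp
  also have "\<dots> = (\<one>[A] \<otimes> \<r>[B]) \<bullet> (\<a>[A, B, \<I>] \<bullet> ((r \<otimes> \<one>[\<I>]) \<bullet> \<r>\<^sup>-\<^sup>1[A]))"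
    by (simp only: er)
  also have "\<dots> = r" using r by (simp add: assoc_runit[THEN comp_ext21] runit_naturality'_ext)
  finally show ?thesis .
qed

lemma runit_inv_unique: "Arr x \<Longrightarrow> Dm x = A \<Longrightarrow> Cd x = A \<odot> \<I> \<Longrightarrow> \<r>[A] \<bullet> x = \<one>[A] \<Longrightarrow> x = \<r>\<^sup>-\<^sup>1[A]"
  by (rule split_mono_cancel[where p = "\<r>[A]" and q = "\<r>\<^sup>-\<^sup>1[A]"]) simp_all

lemma coactionD:
  assumes "coaction C Om s t ops A B m u d e r"
  shows coaction_bimonoid: "bimonoid_obj C B m u d e"
    and coaction_comult: "(\<one>[A] \<otimes> d) \<bullet> r = \<a>[A, B, B] \<bullet> ((r \<otimes> \<one>[B]) \<bullet> r)"
    and coaction_counit: "(\<one>[A] \<otimes> e) \<bullet> r = \<r>\<^sup>-\<^sup>1[A]"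
proof -
  show bim: "bimonoid_obj C B m u d e"
    and "(\<one>[A] \<otimes> d) \<bullet> r = \<a>[A, B, B] \<bullet> ((r \<otimes> \<one>[B]) \<bullet> r)"
    using assms unfolding coaction_def by auto
  have com: "comeasuring C Om s t ops ops A A B m u r"
    using assms unfolding coaction_def by blast
  have "e \<in> hom C B \<I>" "r \<in> hom C A (A \<odot> B)"
    using bim com unfolding bimonoid_obj_def monoid_hom_def comeasuring_def by auto
  moreover have "\<r>[A] \<bullet> ((\<one>[A] \<otimes> e) \<bullet> r) = \<one>[A]"
    using assms unfolding coaction_def by blast
  ultimately show "(\<one>[A] \<otimes> e) \<bullet> r = \<r>\<^sup>-\<^sup>1[A]"
    by (intro runit_inv_unique) (auto simp: hom_def)
qed

end

locale initial_comeasuring = braided_monoidal C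
  for C :: "('o,'m) bmcat" +
  fixes Om :: "'w set" and s t :: "'w \<Rightarrow> nat" and ops :: "'w \<Rightarrow> 'm" and A :: 'o
    and D :: "('o \<times> 'm \<times> 'm \<times> 'm) set"
    and B0 :: 'o and m0 u0 r0 :: 'm
  assumes D_comeasuring: "\<forall>(Q, m, u, r) \<in> D. comeasuring C Om s t ops ops A A Q m u r"
    and init_in: "(B0, m0, u0, r0) \<in> D"
    and init: "\<forall>(Q, m, u, r) \<in> D. \<exists>!\<phi>. monoid_hom C B0 m0 u0 Q m u \<phi> \<and> (\<one>[A] \<otimes> \<phi>) \<bullet> r0 = r"
    and coarsen: "\<forall>(Q1, m1, u1, r) \<in> D. \<forall>Q2 m2 u2 \<tau>.
      monoid_obj C Q2 m2 u2 \<and> monoid_hom C Q1 m1 u1 Q2 m2 u2 \<tau> \<longrightarrow> (Q2, m2, u2, (\<one>[A] \<otimes> \<tau>) \<bullet> r) \<in> D"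
    and unit_in: "(\<I>, \<l>[\<I>], \<one>[\<I>], \<r>\<^sup>-\<^sup>1[A]) \<in> D"
    and square_in: "(B0 \<odot> B0, mu_tens C B0 m0 B0 m0, unit_tens C u0 u0,
      \<a>[A, B0, B0] \<bullet> ((r0 \<otimes> \<one>[B0]) \<bullet> r0)) \<in> D"
begin

lemma D_monoid: "(Q, m, u, r) \<in> D \<Longrightarrow> monoid_obj C Q m u"
  using bspec[OF D_comeasuring] unfolding comeasuring_def by fastforce

lemma D_typing: "(Q, m, u, r) \<in> D \<Longrightarrow> Arr r \<and> Dm r = A \<and> Cd r = A \<odot> Q"
  using bspec[OF D_comeasuring] unfolding comeasuring_def hom_def by fastforce

lemma B0_monoid: "monoid_obj C B0 m0 u0"
  using D_monoid[OF init_in] .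

lemma unit_monoid: "monoid_obj C \<I> \<l>[\<I>] \<one>[\<I>]"
  using D_monoid[OF unit_in] .

lemma r0_typing: "Arr r0" "Dm r0 = A" "Cd r0 = A \<odot> B0"
  using D_typing[OF init_in] by auto

definition induced_hom :: "'o \<Rightarrow> 'm \<Rightarrow> 'm \<Rightarrow> 'm \<Rightarrow> 'm" where
  "induced_hom Q m u r = (THE \<phi>. monoid_hom C B0 m0 u0 Q m u \<phi> \<and> (\<one>[A] \<otimes> \<phi>) \<bullet> r0 = r)"

lemma induced_hom:
  assumes "(Q, m, u, r) \<in> D"
  shows "monoid_hom C B0 m0 u0 Q m u (induced_hom Q m u r)" "(\<one>[A] \<otimes> induced_hom Q m u r) \<bullet> r0 = r"
  using theI'[OF bspec[OF init assms, unfolded prod.case]] unfolding induced_hom_def by simp_all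

lemma induced_hom_unique:
  assumes "(Q, m, u, r) \<in> D" "monoid_hom C B0 m0 u0 Q m u \<phi>" "(\<one>[A] \<otimes> \<phi>) \<bullet> r0 = r"
  shows "\<phi> = induced_hom Q m u r"
  using the1_equality[OF bspec[OF init assms(1), unfolded prod.case]] assms(2,3)
    unfolding induced_hom_def
  by simp

text \<open>Both f and g are induced by the coarsening of r0 along f, which lies in D.\<close>

lemma induced_hom_eqI:
  assumes Q: "monoid_obj C Q m u"
    and f: "monoid_hom C B0 m0 u0 Q m u f" and g: "monoid_hom C B0 m0 u0 Q m u g"
    and fg: "(\<one>[A] \<otimes> f) \<bullet> r0 = (\<one>[A] \<otimes> g) \<bullet> r0"
  shows "f = g"
proof -
  have "(Q, m, u, (\<one>[A] \<otimes> f) \<bullet> r0) \<in> D"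
    using bspec[OF coarsen init_in, unfolded prod.case] Q f by blast
  with f g fg show ?thesis
    by (metis induced_hom_unique)
qed

definition comult :: 'm where
  "comult = induced_hom (B0 \<odot> B0) (mu_tens C B0 m0 B0 m0) (unit_tens C u0 u0)
     (\<a>[A, B0, B0] \<bullet> ((r0 \<otimes> \<one>[B0]) \<bullet> r0))"

definition counit :: 'm where
  "counit = induced_hom \<I> \<l>[\<I>] \<one>[\<I>] \<r>\<^sup>-\<^sup>1[A]"

lemma comult_monoid_hom:
  "monoid_hom C B0 m0 u0 (B0 \<odot> B0) (mu_tens C B0 m0 B0 m0) (unit_tens C u0 u0) comult"
  and comult_coaction: "(\<one>[A] \<otimes> comult) \<bullet> r0 = \<a>[A, B0, B0] \<bullet> ((r0 \<otimes> \<one>[B0]) \<bullet> r0)"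
  using induced_hom[OF square_in] unfolding comult_def by auto

lemma counit_monoid_hom: "monoid_hom C B0 m0 u0 \<I> \<l>[\<I>] \<one>[\<I>] counit"
  and counit_coaction: "(\<one>[A] \<otimes> counit) \<bullet> r0 = \<r>\<^sup>-\<^sup>1[A]"
  using induced_hom[OF unit_in] unfolding counit_def by auto

lemma comult_typing: "Arr comult" "Dm comult = B0" "Cd comult = B0 \<odot> B0"
  and counit_typing: "Arr counit" "Dm counit = B0" "Cd counit = \<I>"
  using monoid_homD[OF comult_monoid_hom] monoid_homD[OF counit_monoid_hom] by auto

lemma comult_coassoc: "\<a>[B0, B0, B0] \<bullet> ((comult \<otimes> \<one>[B0]) \<bullet> comult) = (\<one>[B0] \<otimes> comult) \<bullet> comult"
proof (rule induced_hom_eqI)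
  have B2: "monoid_obj C (B0 \<odot> B0) (mu_tens C B0 m0 B0 m0) (unit_tens C u0 u0)"
    by (rule monoid_obj_tensor[OF B0_monoid B0_monoid])
  have B21: "monoid_obj C ((B0 \<odot> B0) \<odot> B0) (mu_tens C (B0 \<odot> B0) (mu_tens C B0 m0 B0 m0) B0 m0)
      (unit_tens C (unit_tens C u0 u0) u0)"
    by (rule monoid_obj_tensor[OF B2 B0_monoid])
  show B12: "monoid_obj C (B0 \<odot> (B0 \<odot> B0)) (mu_tens C B0 m0 (B0 \<odot> B0) (mu_tens C B0 m0 B0 m0))
      (unit_tens C u0 (unit_tens C u0 u0))"
    by (rule monoid_obj_tensor[OF B0_monoid B2])
  show "monoid_hom C B0 m0 u0 (B0 \<odot> (B0 \<odot> B0)) (mu_tens C B0 m0 (B0 \<odot> B0) (mu_tens C B0 m0 B0 m0))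
      (unit_tens C u0 (unit_tens C u0 u0)) ((\<one>[B0] \<otimes> comult) \<bullet> comult)"
    by (rule monoid_hom_comp[OF B0_monoid B2 B12 comult_monoid_hom
          monoid_hom_tensor[OF B0_monoid B0_monoid B0_monoid B2 monoid_hom_ident[OF B0_monoid]
            comult_monoid_hom]])
  show "monoid_hom C B0 m0 u0 (B0 \<odot> (B0 \<odot> B0)) (mu_tens C B0 m0 (B0 \<odot> B0) (mu_tens C B0 m0 B0 m0))
      (unit_tens C u0 (unit_tens C u0 u0)) (\<a>[B0, B0, B0] \<bullet> ((comult \<otimes> \<one>[B0]) \<bullet> comult))"
    by (rule monoid_hom_comp[OF B0_monoid B21 B12
          monoid_hom_comp[OF B0_monoid B2 B21 comult_monoid_hom
            monoid_hom_tensor[OF B0_monoid B0_monoid B2 B0_monoid comult_monoid_hom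
              monoid_hom_ident[OF B0_monoid]]]
          monoid_hom_assoc[OF B0_monoid B0_monoid B0_monoid]])
  show "(\<one>[A] \<otimes> (\<a>[B0, B0, B0] \<bullet> ((comult \<otimes> \<one>[B0]) \<bullet> comult))) \<bullet> r0
      = (\<one>[A] \<otimes> ((\<one>[B0] \<otimes> comult) \<bullet> comult)) \<bullet> r0"
    using coassoc_under_coaction[OF r0_typing comult_typing comult_coaction] by simp
qed

lemma counit_left: "\<l>[B0] \<bullet> ((counit \<otimes> \<one>[B0]) \<bullet> comult) = \<one>[B0]"
proof (rule induced_hom_eqI[OF B0_monoid _ monoid_hom_ident[OF B0_monoid]])
  have IB: "monoid_obj C (\<I> \<odot> B0) (mu_tens C \<I> \<l>[\<I>] B0 m0) (unit_tens C \<one>[\<I>] u0)"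
    by (rule monoid_obj_tensor[OF unit_monoid B0_monoid])
  have B2: "monoid_obj C (B0 \<odot> B0) (mu_tens C B0 m0 B0 m0) (unit_tens C u0 u0)"
    by (rule monoid_obj_tensor[OF B0_monoid B0_monoid])
  show "monoid_hom C B0 m0 u0 B0 m0 u0 (\<l>[B0] \<bullet> ((counit \<otimes> \<one>[B0]) \<bullet> comult))"
    by (rule monoid_hom_comp[OF B0_monoid IB B0_monoid
          monoid_hom_comp[OF B0_monoid B2 IB comult_monoid_hom
            monoid_hom_tensor[OF B0_monoid B0_monoid unit_monoid B0_monoid counit_monoid_hom
              monoid_hom_ident[OF B0_monoid]]]
          monoid_hom_lunit[OF B0_monoid]])
  show "(\<one>[A] \<otimes> (\<l>[B0] \<bullet> ((counit \<otimes> \<one>[B0]) \<bullet> comult))) \<bullet> r0 = (\<one>[A] \<otimes> \<one>[B0]) \<bullet> r0"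
    using counit_left_under_coaction[OF r0_typing comult_typing counit_typing comult_coaction
      counit_coaction]
      r0_typing by simp
qed

lemma counit_right: "\<r>[B0] \<bullet> ((\<one>[B0] \<otimes> counit) \<bullet> comult) = \<one>[B0]"
proof (rule induced_hom_eqI[OF B0_monoid _ monoid_hom_ident[OF B0_monoid]])
  have BI: "monoid_obj C (B0 \<odot> \<I>) (mu_tens C B0 m0 \<I> \<l>[\<I>]) (unit_tens C u0 \<one>[\<I>])"
    by (rule monoid_obj_tensor[OF B0_monoid unit_monoid])
  have B2: "monoid_obj C (B0 \<odot> B0) (mu_tens C B0 m0 B0 m0) (unit_tens C u0 u0)"
    by (rule monoid_obj_tensor[OF B0_monoid B0_monoid])
  show "monoid_hom C B0 m0 u0 B0 m0 u0 (\<r>[B0] \<bullet> ((\<one>[B0] \<otimes> counit) \<bullet> comult))"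
    by (rule monoid_hom_comp[OF B0_monoid BI B0_monoid
          monoid_hom_comp[OF B0_monoid B2 BI comult_monoid_hom
            monoid_hom_tensor[OF B0_monoid B0_monoid B0_monoid unit_monoid monoid_hom_ident[OF
              B0_monoid] counit_monoid_hom]]
          monoid_hom_runit[OF B0_monoid]])
  show "(\<one>[A] \<otimes> (\<r>[B0] \<bullet> ((\<one>[B0] \<otimes> counit) \<bullet> comult))) \<bullet> r0 = (\<one>[A] \<otimes> \<one>[B0]) \<bullet> r0"
    using counit_right_under_coaction[OF r0_typing comult_typing counit_typing comult_coaction
      counit_coaction]
      r0_typing by simp
qed

lemma bimonoid_B0: "bimonoid_obj C B0 m0 u0 comult counit"
  unfolding bimonoid_obj_def comonoid_obj_def hom_def
  using B0_monoid comult_monoid_hom counit_monoid_hom comult_typing counit_typing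
    comult_coassoc counit_left counit_right by simp

lemma coaction_r0: "coaction C Om s t ops A B0 m0 u0 comult counit r0"
  unfolding coaction_def
  using bimonoid_B0 bspec[OF D_comeasuring init_in] comult_coaction counit_coaction r0_typing
  by simp

lemma coaction_r0_unique:
  assumes "coaction C Om s t ops A B0 m0 u0 d e r0"
  shows "d = comult" "e = counit"
proof -
  have "monoid_hom C B0 m0 u0 (B0 \<odot> B0) (mu_tens C B0 m0 B0 m0) (unit_tens C u0 u0) d"
    and "monoid_hom C B0 m0 u0 \<I> \<l>[\<I>] \<one>[\<I>] e"
    using coaction_bimonoid[OF assms] unfolding bimonoid_obj_def by auto
  then show "d = comult" "e = counit"
    unfolding comult_def counit_def
    using induced_hom_unique[OF square_in] induced_hom_unique[OF unit_in]
      coaction_comult[OF assms] coaction_counit[OF assms] by auto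
qed

lemma induced_hom_comult:
  assumes coact: "coaction C Om s t ops A B m u d e r" and in_D: "(B, m, u, r) \<in> D"
  defines "\<phi> \<equiv> induced_hom B m u r"
  shows "(\<phi> \<otimes> \<phi>) \<bullet> comult = d \<bullet> \<phi>"
proof -
  have B: "monoid_obj C B m u" and r: "Arr r" "Dm r = A" "Cd r = A \<odot> B"
    using D_monoid[OF in_D] D_typing[OF in_D] by auto
  have \<phi>: "monoid_hom C B0 m0 u0 B m u \<phi>" and \<phi>r0: "(\<one>[A] \<otimes> \<phi>) \<bullet> r0 = r"
    using induced_hom[OF in_D] unfolding \<phi>_def by auto
  note \<phi>_typing = monoid_homD(1-3)[OF \<phi>]
  have d: "monoid_hom C B m u (B \<odot> B) (mu_tens C B m B m) (unit_tens C u u) d"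
    using coaction_bimonoid[OF coact] unfolding bimonoid_obj_def by auto
  have B2: "monoid_obj C (B \<odot> B) (mu_tens C B m B m) (unit_tens C u u)"
    by (rule monoid_obj_tensor[OF B B])
  show ?thesis
  proof (rule induced_hom_eqI[OF B2])
    show "monoid_hom C B0 m0 u0 (B \<odot> B) (mu_tens C B m B m) (unit_tens C u u) ((\<phi> \<otimes> \<phi>) \<bullet> comult)"
      by (rule monoid_hom_comp[OF B0_monoid monoid_obj_tensor[OF B0_monoid B0_monoid] B2
        comult_monoid_hom
            monoid_hom_tensor[OF B0_monoid B0_monoid B B \<phi> \<phi>]])
    show "monoid_hom C B0 m0 u0 (B \<odot> B) (mu_tens C B m B m) (unit_tens C u u) (d \<bullet> \<phi>)"
      by (rule monoid_hom_comp[OF B0_monoid B B2 \<phi> d])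
    have "(\<one>[A] \<otimes> ((\<phi> \<otimes> \<phi>) \<bullet> comult)) \<bullet> r0 = (\<one>[A] \<otimes> (\<phi> \<otimes> \<phi>)) \<bullet> ((\<one>[A] \<otimes> comult) \<bullet> r0)"
      using r0_typing comult_typing \<phi>_typing by simp
    also have "\<dots> = \<a>[A, B, B] \<bullet> ((r \<otimes> \<one>[B]) \<bullet> r)"
      using coaction_square_naturality[OF r0_typing r \<phi>_typing \<phi>r0] by (simp only: comult_coaction)
    also have "\<dots> = (\<one>[A] \<otimes> d) \<bullet> ((\<one>[A] \<otimes> \<phi>) \<bullet> r0)"
      by (simp only: \<phi>r0 coaction_comult[OF coact])
    also have "\<dots> = (\<one>[A] \<otimes> (d \<bullet> \<phi>)) \<bullet> r0"
      using r0_typing monoid_homD(1-3)[OF d] \<phi>_typing by simp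
    finally show "(\<one>[A] \<otimes> ((\<phi> \<otimes> \<phi>) \<bullet> comult)) \<bullet> r0 = (\<one>[A] \<otimes> (d \<bullet> \<phi>)) \<bullet> r0" .
  qed
qed

lemma induced_hom_counit:
  assumes coact: "coaction C Om s t ops A B m u d e r" and in_D: "(B, m, u, r) \<in> D"
  defines "\<phi> \<equiv> induced_hom B m u r"
  shows "e \<bullet> \<phi> = counit"
proof -
  have \<phi>: "monoid_hom C B0 m0 u0 B m u \<phi>" and \<phi>r0: "(\<one>[A] \<otimes> \<phi>) \<bullet> r0 = r"
    using induced_hom[OF in_D] unfolding \<phi>_def by auto
  have e: "monoid_hom C B m u \<I> \<l>[\<I>] \<one>[\<I>] e"
    using coaction_bimonoid[OF coact] unfolding bimonoid_obj_def by auto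
  show ?thesis
  proof (rule induced_hom_eqI[OF unit_monoid monoid_hom_comp[OF B0_monoid D_monoid[OF in_D]
    unit_monoid \<phi> e]
        counit_monoid_hom])
    have "(\<one>[A] \<otimes> (e \<bullet> \<phi>)) \<bullet> r0 = (\<one>[A] \<otimes> e) \<bullet> ((\<one>[A] \<otimes> \<phi>) \<bullet> r0)"
      using r0_typing monoid_homD(1-3)[OF e] monoid_homD(1-3)[OF \<phi>] by simp
    then show "(\<one>[A] \<otimes> (e \<bullet> \<phi>)) \<bullet> r0 = (\<one>[A] \<otimes> counit) \<bullet> r0"
      by (simp only: \<phi>r0 coaction_counit[OF coact] counit_coaction)
  qed
qed

lemma coaction_r0_initial:
  assumes coact: "coaction C Om s t ops A B m u d e r" and in_D: "(B, m, u, r) \<in> D"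
  shows "\<exists>!\<phi>. bimonoid_hom C B0 m0 u0 comult counit B m u d e \<phi> \<and> (\<one>[A] \<otimes> \<phi>) \<bullet> r0 = r"
proof
  let ?\<phi> = "induced_hom B m u r"
  show "bimonoid_hom C B0 m0 u0 comult counit B m u d e ?\<phi> \<and> (\<one>[A] \<otimes> ?\<phi>) \<bullet> r0 = r"
    unfolding bimonoid_hom_def comonoid_hom_def
    using induced_hom[OF in_D] induced_hom_comult[OF coact in_D] induced_hom_counit[OF coact in_D]
    by (simp add: monoid_hom_def)
  show "\<psi> = ?\<phi>" if "bimonoid_hom C B0 m0 u0 comult counit B m u d e \<psi> \<and> (\<one>[A] \<otimes> \<psi>) \<bullet> r0 = r" for \<psi>
    using that induced_hom_unique[OF in_D] unfolding bimonoid_hom_def by blast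
qed

end

theorem theorem4p31:
  fixes C :: "('o,'m) bmcat" and Om :: "'w set" and s t :: "'w \<Rightarrow> nat"
    and ops :: "'w \<Rightarrow> 'm" and A :: 'o
    and D :: "('o \<times> 'm \<times> 'm \<times> 'm) set"
    and B0 :: 'o and m0 u0 r0 :: 'm
  assumes bmc: "braided_monoidal_cat C"
    and magma: "omega_magma C Om s t A ops"
    and D_sub: "\<forall>(Q, m, u, r) \<in> D. comeasuring C Om s t ops ops A A Q m u r"
    and init_in: "(B0, m0, u0, r0) \<in> D"
    and init: "\<forall>(Q, m, u, r) \<in> D. \<exists>!\<phi>. monoid_hom C B0 m0 u0 Q m u \<phi>
                  \<and> cmp C (tnm C (idt C A) \<phi>) r0 = r"
    and coarsen: "\<forall>(Q1, m1, u1, r) \<in> D. \<forall>Q2 m2 u2 \<tau>.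
                  monoid_obj C Q2 m2 u2 \<and> monoid_hom C Q1 m1 u1 Q2 m2 u2 \<tau>
                  \<longrightarrow> (Q2, m2, u2, cmp C (tnm C (idt C A) \<tau>) r) \<in> D"
    and unit_in: "(un C, lu C (un C), idt C (un C), inv_arr C (ru C A)) \<in> D"
    and sq_in: "(tns C B0 B0, mu_tens C B0 m0 B0 m0, unit_tens C u0 u0,
                 cmp C (asc C A B0 B0) (cmp C (tnm C r0 (idt C B0)) r0)) \<in> D"
  shows "(\<exists>!(d, e). coaction C Om s t ops A B0 m0 u0 d e r0) \<and>
         (\<forall>d e. coaction C Om s t ops A B0 m0 u0 d e r0 \<longrightarrow>
            (\<forall>B m u d' e' r. coaction C Om s t ops A B m u d' e' r \<and> (B, m, u, r) \<in> D \<longrightarrow>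
               (\<exists>!\<phi>. bimonoid_hom C B0 m0 u0 d e B m u d' e' \<phi>
                      \<and> cmp C (tnm C (idt C A) \<phi>) r0 = r)))"
proof -
  interpret initial_comeasuring C Om s t ops A D B0 m0 u0 r0
    using bmc D_sub init_in init coarsen unit_in sq_in
    by (intro initial_comeasuring.intro braided_monoidal.intro initial_comeasuring_axioms.intro)
  have "\<exists>!(d, e). coaction C Om s t ops A B0 m0 u0 d e r0"
  proof (rule ex1I[of _ "(comult, counit)"])
    show "case (comult, counit) of (d, e) \<Rightarrow> coaction C Om s t ops A B0 m0 u0 d e r0"
      using coaction_r0 by simp
    fix p
    assume "case p of (d, e) \<Rightarrow> coaction C Om s t ops A B0 m0 u0 d e r0"
    then obtain d e where "p = (d, e)" "coaction C Om s t ops A B0 m0 u0 d e r0"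
      by (cases p) simp
    then show "p = (comult, counit)"
      using coaction_r0_unique by simp
  qed
  moreover have "\<exists>!\<phi>. bimonoid_hom C B0 m0 u0 d e B m u d' e' \<phi> \<and> (\<one>[A] \<otimes> \<phi>) \<bullet> r0 = r"
    if "coaction C Om s t ops A B0 m0 u0 d e r0" "coaction C Om s t ops A B m u d' e' r"
      "(B, m, u, r) \<in> D"
    for d e B m u d' e' r
    using coaction_r0_initial[OF that(2,3)] coaction_r0_unique[OF that(1)] by simp
  ultimately show ?thesis
    by blast
qed

end
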